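(* For $M,N\in\Lambda$, if $M=_{\mathsf v}N$ then $\mathrm{NF}(\mathcal T(M))=\mathrm{NF}(\mathcal T(N))$.
   Context: Call-by-value $\lambda$-calculus with permutations: $\lambda$-terms and values are $M,N::=V\mid MN$, $V::=x\mid\lambda x.M$, up to $\alpha$-conversion. Rules: $(\beta_v)$ $(\lambda x.M)V\to M\{x:=V\}$ if $V$ is a value; $(\sigma_1)$ $(\lambda x.M)NP\to(\lambda x.MP)N$ if $x\notin\mathrm{FV}(P)$; $(\sigma_3)$ $V((\lambda x.M)N)\to(\lambda x.VM)N$ if $V$ is a value and $x\notin\mathrm{FV}(V)$. $\to_{\mathsf v}$ is their contextual closure and $=_{\mathsf v}$ its reflexive-symmetric-transitive closure. Resource calculus: resource values $v::=x\mid\lambda x.t$; simple terms $s,t::=st\mid[v_1,\dots,v_k]$ (bags are finite multisets); $[x^n]$ is $n$ copies of $x$. Linear substitution $e\langle x:=v_1,\dots,v_n\rangle$ is the set of terms obtained by replacing the $n$ free occurrences of $x$ in $e$ bijectively by $v_1,\dots,v_n$ (over all permutations), or $\emptyset$ if $x$ does not occur exactly $n$ times free. Constructors extend multilinearly to sets. Rules: $(\beta_r)$ $[\lambda x.t][v_1,\dots,v_n]\to t\langle x:=v_1,\dots,v_n\rangle$; $(0)$ $[v_1,\dots,v_n]t\to\emptyset$ if $n\ne1$; $(\sigma_1)$ $[\lambda x.t]s_1s_2\to[\lambda x.ts_2]s_1$ if $x\notin\mathrm{FV}(s_1)$; $(\sigma_3)$ $[v]([\lambda x.t]s)\to[\lambda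 x.[v]t]s$ if $x\notin\mathrm{FV}(v)$. $\to_{\mathsf r}$ is the closure of these rules under abstraction, both sides of application, elements of bags, and on finite sets ($e\to\mathcal E_1$, $e\notin\mathcal E_2$ imply $\{e\}\cup\mathcal E_2\to\mathcal E_1\cup\mathcal E_2$); it is confluent and strongly normalizing, $\mathrm{nf}(e)$ is the normal form and $\mathrm{NF}(\mathcal E)=\bigcup_{e\in\mathcal E}\mathrm{nf}(e)$. Taylor expansion: $\mathcal T(x)=\{[x^n]\mid n\ge0\}$, $\mathcal T(\lambda x.N)=\{[\lambda x.t_1,\dots,\lambda x.t_n]\mid n\ge0,\ t_i\in\mathcal T(N)\}$, $\mathcal T(PQ)=\{st\mid s\in\mathcal T(P),t\in\mathcal T(Q)\}$. *)

theory Defs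
  imports Main "HOL-Library.Multiset"
begin

datatype lterm = Var nat | Lam lterm | App lterm lterm

fun is_val :: "lterm \<Rightarrow> bool" where
  "is_val (Var _) = True"
| "is_val (Lam _) = True"
| "is_val (App _ _) = False"

primrec lift :: "nat \<Rightarrow> lterm \<Rightarrow> lterm" where
  "lift k (Var i) = (if i < k then Var i else Var (Suc i))"
| "lift k (Lam t) = Lam (lift (Suc k) t)"
| "lift k (App s t) = App (lift k s) (lift k t)"

primrec subst :: "lterm \<Rightarrow> nat \<Rightarrow> lterm \<Rightarrow> lterm" where
  "subst (Var i) k s = (if i < k then Var i else if i = k then s else Var (i - 1))"
| "subst (Lam t) k s = Lam (subst t (Suc k) (lift 0 s))"
| "subst (App t u) k s = App (subst t k s) (subst u k s)"

inductive step_v :: "lterm \<Rightarrow> lterm \<Rightarrow> bool" where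
  beta_v: "is_val V \<Longrightarrow> step_v (App (Lam M) V) (subst M 0 V)"
| sigma1: "step_v (App (App (Lam M) N) P) (App (Lam (App M (lift 0 P))) N)"
| sigma3: "is_val V \<Longrightarrow> step_v (App V (App (Lam M) N)) (App (Lam (App (lift 0 V) M)) N)"
| ctx_lam: "step_v M M' \<Longrightarrow> step_v (Lam M) (Lam M')"
| ctx_appL: "step_v M M' \<Longrightarrow> step_v (App M N) (App M' N)"
| ctx_appR: "step_v N N' \<Longrightarrow> step_v (App M N) (App M N')"

abbreviation eq_v :: "lterm \<Rightarrow> lterm \<Rightarrow> bool" where
  "eq_v \<equiv> equivclp step_v"

datatype rterm = RApp rterm rterm | Bag "rval multiset"
     and rval = RVar nat | RLam rterm

primrec rlift :: "nat \<Rightarrow> rterm \<Rightarrow> rterm"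
    and rlift_v :: "nat \<Rightarrow> rval \<Rightarrow> rval" where
  "rlift k (RApp s t) = RApp (rlift k s) (rlift k t)"
| "rlift k (Bag m) = Bag (image_mset (rlift_v k) m)"
| "rlift_v k (RVar i) = (if i < k then RVar i else RVar (Suc i))"
| "rlift_v k (RLam t) = RLam (rlift (Suc k) t)"

text \<open>Linear substitution: \<open>lsub x VS t t'\<close> holds iff \<open>t'\<close> is obtained from \<open>t\<close> by
  replacing the free occurrences of index \<open>x\<close> bijectively by the values of the multiset
  \<open>VS\<close> (values lifted when passing under binders, the index \<open>x\<close> being removed).\<close>
inductive lsub :: "nat \<Rightarrow> rval multiset \<Rightarrow> rterm \<Rightarrow> rterm \<Rightarrow> bool"
      and lsub_v :: "nat \<Rightarrow> rval multiset \<Rightarrow> rval \<Rightarrow> rval \<Rightarrow> bool" where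
  ls_app: "lsub x A s s' \<Longrightarrow> lsub x B t t' \<Longrightarrow> lsub x (A + B) (RApp s t) (RApp s' t')"
| ls_nil: "lsub x {#} (Bag {#}) (Bag {#})"
| ls_bag: "lsub_v x A u u' \<Longrightarrow> lsub x B (Bag m) (Bag m') \<Longrightarrow>
             lsub x (A + B) (Bag (add_mset u m)) (Bag (add_mset u' m'))"
| ls_hit: "lsub_v x {#v#} (RVar x) v"
| ls_var: "y \<noteq> x \<Longrightarrow> lsub_v x {#} (RVar y) (RVar (if y < x then y else y - 1))"
| ls_lam: "lsub (Suc x) (image_mset (rlift_v 0) A) t t' \<Longrightarrow> lsub_v x A (RLam t) (RLam t')"

definition lin_subst :: "rterm \<Rightarrow> nat \<Rightarrow> rval multiset \<Rightarrow> rterm set" where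
  "lin_subst t x VS = {t'. lsub x VS t t'}"

inductive rstep :: "rterm \<Rightarrow> rterm set \<Rightarrow> bool"
      and rstep_v :: "rval \<Rightarrow> rval set \<Rightarrow> bool" where
  beta_r: "rstep (RApp (Bag {#RLam t#}) (Bag vs)) (lin_subst t 0 vs)"
| zero_r: "size m \<noteq> 1 \<Longrightarrow> rstep (RApp (Bag m) t) {}"
| sigma1_r: "rstep (RApp (RApp (Bag {#RLam t#}) s1) s2)
               {RApp (Bag {#RLam (RApp t (rlift 0 s2))#}) s1}"
| sigma3_r: "rstep (RApp (Bag {#v#}) (RApp (Bag {#RLam t#}) s))
               {RApp (Bag {#RLam (RApp (Bag {#rlift_v 0 v#}) t)#}) s}"
| ctx_appL_r: "rstep s S \<Longrightarrow> rstep (RApp s t) ((\<lambda>s'. RApp s' t) ` S)"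
| ctx_appR_r: "rstep t T \<Longrightarrow> rstep (RApp s t) ((\<lambda>t'. RApp s t') ` T)"
| ctx_bag_r: "rstep_v u U \<Longrightarrow> rstep (Bag (add_mset u m)) ((\<lambda>u'. Bag (add_mset u' m)) ` U)"
| ctx_lam_r: "rstep t T \<Longrightarrow> rstep_v (RLam t) (RLam ` T)"

inductive rstep_set :: "rterm set \<Rightarrow> rterm set \<Rightarrow> bool" where
  "rstep e E1 \<Longrightarrow> e \<notin> E2 \<Longrightarrow> finite E2 \<Longrightarrow> rstep_set (insert e E2) (E1 \<union> E2)"

definition r_normal :: "rterm set \<Rightarrow> bool" where
  "r_normal E \<longleftrightarrow> \<not> (\<exists>E'. rstep_set E E')"

text \<open>The (unique, by confluence and strong normalization) normal form of a simple term.\<close>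
definition nf :: "rterm \<Rightarrow> rterm set" where
  "nf e = (THE E. rstep_set\<^sup>*\<^sup>* {e} E \<and> r_normal E)"

definition NF :: "rterm set \<Rightarrow> rterm set" where
  "NF E = (\<Union>e\<in>E. nf e)"

primrec taylor :: "lterm \<Rightarrow> rterm set" where
  "taylor (Var x) = {Bag (replicate_mset n (RVar x)) | n. True}"
| "taylor (Lam N) = {Bag m | m. \<forall>u\<in>#m. \<exists>t\<in>taylor N. u = RLam t}"
| "taylor (App P Q) = {RApp s t | s t. s \<in> taylor P \<and> t \<in> taylor Q}"

end

theory Submission
  imports Defs
begin

(* Every reduction step of the resource calculus decreases the size of a simple term, except the
   sigma-steps, which preserve the size and decrease a polynomial interpretation; so reduction is
   well-founded.  By well-founded induction along this order, with local confluence "up to normal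
   forms" as the induction step (Newman's lemma), every simple term e has a unique normal form
   nf e, and nf e = NF E whenever e reduces to E.  Consequently NF commutes with the term
   constructors.  Under Taylor expansion, a beta_v-, sigma_1- or sigma_3-redex expands into
   redexes of the corresponding resource rule, together with terms whose normal form is empty
   because some bag in function position is not a singleton; for beta_v one uses that the
   expansion of M{x:=V} consists of the linear substitutions of the bags of T(V) into the elements
   of T(M).  Hence NF (T M) is invariant under ->_v, and so under =_v. *)

lemma rlift_rlift:
  "\<And>i k. i \<le> k \<Longrightarrow> rlift (Suc k) (rlift i s) = rlift i (rlift k s)"
  "\<And>i k. i \<le> k \<Longrightarrow> rlift_v (Suc k) (rlift_v i v) = rlift_v i (rlift_v k v)"
  by (induction s and v rule: rterm.induct rval.induct)
    (auto simp: multiset.map_comp comp_def intro!: image_mset_cong)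

lemma image_mset_rlift_v_commute:
  "image_mset (rlift_v (Suc k)) (image_mset (rlift_v 0) A) =
    image_mset (rlift_v 0) (image_mset (rlift_v k) A)"
  by (simp add: multiset.map_comp comp_def rlift_rlift(2)[of 0 k])

lemma image_mset_eq_single: "image_mset f A = {#z#} \<Longrightarrow> \<exists>a. A = {#a#} \<and> z = f a"
  by (cases A) auto

lemma finite_submultisets: "finite {A. A \<subseteq># M}"
proof -
  have "{A. A \<subseteq># M} \<subseteq> (\<Union>n\<le>size M. multisets_of_size (set_mset M) n)"
    by (auto simp: multisets_of_size_def dest: set_mset_mono size_mset_mono)
  then show ?thesis by (rule finite_subset) auto
qed

lemma finite_mset_splits: "finite {p. fst p + snd p = (M :: 'a multiset)}"
proof -
  have "{p. fst p + snd p = M} \<subseteq> (\<lambda>A. (A, M - A)) ` {A. A \<subseteq># M}" by force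
  then show ?thesis using finite_submultisets[of M] by (blast intro: finite_subset)
qed

lemma plus_eq_add_mset_cases:
  assumes "A + B = add_mset v C"
  shows "(\<exists>A'. A = add_mset v A' \<and> C = A' + B) \<or> (\<exists>B'. B = add_mset v B' \<and> C = A + B')"
proof (cases "v \<in># A")
  case True
  then obtain A' where "A = add_mset v A'" by (metis multi_member_split)
  then show ?thesis using assms by auto
next
  case False
  then have "v \<in># B" using assms by (metis union_iff union_single_eq_member)
  then obtain B' where "B = add_mset v B'" by (metis multi_member_split)
  then show ?thesis using assms by auto
qed

section \<open>Linear substitution\<close>

inductive_cases lsub_AppE: "lsub x A (RApp s t) t'"
inductive_cases lsub_VarE: "lsub_v x A (RVar y) v'"
inductive_cases lsub_LamE: "lsub_v x A (RLam t) v'"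
inductive_cases lsub_emptyE: "lsub x A (Bag {#}) t'"

lemma lsub_App_iff:
  "lsub x A (RApp s t) z \<longleftrightarrow> (\<exists>A1 A2 s' t'. A = A1 + A2 \<and> lsub x A1 s s' \<and> lsub x A2 t t' \<and>
    z = RApp s' t')"
  by (blast elim: lsub_AppE intro: ls_app)

lemma lsub_Lam_iff:
  "lsub_v x A (RLam t) z \<longleftrightarrow> (\<exists>t'. z = RLam t' \<and> lsub (Suc x) (image_mset (rlift_v 0) A) t t')"
  by (auto elim: lsub_LamE intro: ls_lam)

lemma lsub_Var_iff:
  "lsub_v x A (RVar y) v' \<longleftrightarrow>
     (y = x \<and> A = {#v'#}) \<or> (y \<noteq> x \<and> A = {#} \<and> v' = RVar (if y < x then y else y - 1))"
proof
  assume "(y = x \<and> A = {#v'#}) \<or> (y \<noteq> x \<and> A = {#} \<and> v' = RVar (if y < x then y else y - 1))"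
  then show "lsub_v x A (RVar y) v'" using ls_hit[of x v'] ls_var[of y x] by auto
qed (auto elim: lsub_VarE)

lemma lsub_Bag_emptyD: "lsub x A (Bag {#}) y \<Longrightarrow> A = {#} \<and> y = Bag {#}"
  by (auto elim: lsub_emptyE)

lemma lsub_BagD: "lsub x A (Bag m) t' \<Longrightarrow> \<exists>m'. t' = Bag m' \<and> size m' = size m"
  by (induction x A "Bag m" t' arbitrary: m
      rule: lsub_lsub_v.inducts(1)[where ?P2.0 = "\<lambda>_ _ _ _. True"]) force+

text \<open>The rule \<open>ls_bag\<close> splits a bag at an arbitrary element; the next two lemmas split it at
  a chosen element, of the source and of the target bag respectively.\<close>

lemma lsub_Bag_add_msetD:
  "lsub x A (Bag (add_mset u m)) t' \<Longrightarrow>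
   \<exists>A1 A2 u' m'. A = A1 + A2 \<and> lsub_v x A1 u u' \<and> lsub x A2 (Bag m) (Bag m') \<and>
     t' = Bag (add_mset u' m')"
proof (induction x A "Bag (add_mset u m)" t' arbitrary: u m
    rule: lsub_lsub_v.inducts(1)[where ?P2.0 = "\<lambda>_ _ _ _. True"])
  case (ls_bag x A w w' B m0 m0')
  show ?case
  proof (cases "w = u")
    case False
    then obtain m1 where m1: "m0 = add_mset u m1" and m: "m = add_mset w m1"
      using ls_bag.hyps(5) by (auto simp: add_eq_conv_ex)
    from ls_bag.hyps(4)[OF m1] obtain A1 A2 u' m' where
      h: "B = A1 + A2" "lsub_v x A1 u u'" "lsub x A2 (Bag m1) (Bag m')"
        "Bag m0' = Bag (add_mset u' m')"
      by blast
    have "lsub x (A + A2) (Bag m) (Bag (add_mset w' m'))"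
      using m h(3) ls_bag.hyps(1) by (simp add: lsub_lsub_v.ls_bag)
    then show ?thesis
      using h by (intro exI[of _ A1] exI[of _ "A + A2"] exI[of _ u'] exI[of _ "add_mset w' m'"])
        (auto simp: add_mset_commute)
  qed (use ls_bag in auto)
qed auto

lemma lsub_to_Bag_add_msetD:
  "lsub x A T (Bag (add_mset u' m')) \<Longrightarrow>
   \<exists>A1 A2 u m. A = A1 + A2 \<and> lsub_v x A1 u u' \<and> lsub x A2 (Bag m) (Bag m') \<and> T = Bag (add_mset u m)"
proof (induction x A T "Bag (add_mset u' m')" arbitrary: u' m'
    rule: lsub_lsub_v.inducts(1)[where ?P2.0 = "\<lambda>_ _ _ _. True"])
  case (ls_bag x A w w' B m0 m0')
  show ?case
  proof (cases "w' = u'")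
    case False
    then obtain m1 where m1: "m0' = add_mset u' m1" and m: "m' = add_mset w' m1"
      using ls_bag.hyps(5) by (auto simp: add_eq_conv_ex)
    from ls_bag.hyps(4)[OF m1] obtain A1 A2 u m where
      h: "B = A1 + A2" "lsub_v x A1 u u'" "lsub x A2 (Bag m) (Bag m1)" "Bag m0 = Bag (add_mset u m)"
      by blast
    have "lsub x (A + A2) (Bag (add_mset w m)) (Bag m')"
      using m h(3) ls_bag.hyps(1) by (simp add: lsub_lsub_v.ls_bag)
    then show ?thesis
      using h by (intro exI[of _ A1] exI[of _ "A + A2"] exI[of _ u] exI[of _ "add_mset w m"])
        (auto simp: add_mset_commute)
  qed (use ls_bag in auto)
qed auto

lemma lsub_to_Bag_emptyD: "lsub x B (Bag bs) (Bag {#}) \<Longrightarrow> bs = {#} \<and> B = {#}"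
  using lsub_BagD lsub_Bag_emptyD by fastforce

lemma lsub_Bag_single: "lsub_v x B b y \<Longrightarrow> lsub x B (Bag {#b#}) (Bag {#y#})"
  using ls_bag[of x B b y "{#}" "{#}" "{#}"] ls_nil[of x] by simp

lemma lsub_Bag_singleD: "lsub x B (Bag {#b#}) z \<Longrightarrow> \<exists>y. z = Bag {#y#} \<and> lsub_v x B b y"
  using lsub_Bag_add_msetD[of x B b "{#}"] lsub_Bag_emptyD by fastforce

lemma lsub_to_Bag_singleD: "lsub x B (Bag bs) (Bag {#y#}) \<Longrightarrow> \<exists>b. bs = {#b#} \<and> lsub_v x B b y"
  using lsub_to_Bag_add_msetD[of x B "Bag bs" y "{#}"] lsub_to_Bag_emptyD by fastforce

lemma lsub_Bag_Lam: "lsub (Suc x) (image_mset (rlift_v 0) A) t t' \<Longrightarrow>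
  lsub x A (Bag {#RLam t#}) (Bag {#RLam t'#})"
  by (intro lsub_Bag_single ls_lam)

lemma lsub_Bag_LamD:
  "lsub x A (Bag {#RLam t#}) w \<Longrightarrow> \<exists>t'. w = Bag {#RLam t'#} \<and>
    lsub (Suc x) (image_mset (rlift_v 0) A) t t'"
  using lsub_Bag_singleD[of x A "RLam t" w] unfolding lsub_Lam_iff by blast

lemma lsub_Bag_plus:
  "lsub x A1 (Bag m1) (Bag m1') \<Longrightarrow> lsub x A2 (Bag m2) (Bag m2') \<Longrightarrow>
   lsub x (A1 + A2) (Bag (m1 + m2)) (Bag (m1' + m2'))"
proof (induction m1 arbitrary: A1 m1')
  case empty
  then show ?case using lsub_Bag_emptyD by force
next
  case (add u m1)
  obtain B1 B2 u' m'' where h: "A1 = B1 + B2" "lsub_v x B1 u u'" "lsub x B2 (Bag m1) (Bag m'')"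
     "Bag m1' = Bag (add_mset u' m'')" using lsub_Bag_add_msetD[OF add.prems(1)] by blast
  have "lsub x (B2 + A2) (Bag (m1 + m2)) (Bag (m'' + m2'))" using add.IH[OF h(3) add.prems(2)] .
  from lsub_lsub_v.ls_bag[OF h(2) this] show ?case using h by (simp add: add.assoc)
qed

lemma lsub_to_Bag_plusD:
  "lsub x A T (Bag (m1' + m2')) \<Longrightarrow>
   \<exists>A1 A2 m1 m2. A = A1 + A2 \<and> lsub x A1 (Bag m1) (Bag m1') \<and> lsub x A2 (Bag m2) (Bag m2') \<and>
     T = Bag (m1 + m2)"
proof (induction m1' arbitrary: A T)
  case empty
  then obtain m where "T = Bag m" using lsub.cases by blast
  then show ?case using empty lsub_lsub_v.ls_nil
    by (intro exI[of _ "{#}"] exI[of _ A] exI[of _ "{#}"] exI[of _ m]) auto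
next
  case (add u' m1')
  obtain B1 B2 u m'' where h: "A = B1 + B2" "lsub_v x B1 u u'"
    "lsub x B2 (Bag m'') (Bag (m1' + m2'))"
     "T = Bag (add_mset u m'')" using lsub_to_Bag_add_msetD[of x A T u' "m1' + m2'"] add.prems by auto
  obtain C1 C2 m1 m2 where h2: "B2 = C1 + C2" "lsub x C1 (Bag m1) (Bag m1')"
    "lsub x C2 (Bag m2) (Bag m2')"
    "Bag m'' = Bag (m1 + m2)"
    using add.IH[OF h(3)] by blast
  show ?case using h h2 lsub_lsub_v.ls_bag[OF h(2) h2(2)]
    by (intro exI[of _ "B1 + C1"] exI[of _ C2] exI[of _ "add_mset u m1"] exI[of _ m2]) (auto simp: add.assoc)
qed

fun bag_insert :: "rval \<Rightarrow> rterm \<Rightarrow> rterm" where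
  "bag_insert u (Bag m) = Bag (add_mset u m)"
| "bag_insert u t = t"

lemma finite_lsub_Bag:
  assumes "\<forall>v\<in>#m. \<forall>x A. finite {v'. lsub_v x A v v'}"
  shows "finite {t'. lsub x A (Bag m) t'}"
  using assms
proof (induction m arbitrary: A)
  case empty
  have "{t'. lsub x A (Bag {#}) t'} \<subseteq> {Bag {#}}" using lsub_BagD by fastforce
  moreover have "finite {Bag {#}}" by simp
  ultimately show ?case by (rule finite_subset)
next
  case (add u m)
  let ?S = "\<Union>p\<in>{p. fst p + snd p = A}. (\<lambda>(u', t''). bag_insert u' t'') ` ({u'. lsub_v x (fst p) u u'} \<times> {t''. lsub x (snd p) (Bag m) t''})"
  have "{t'. lsub x A (Bag (add_mset u m)) t'} \<subseteq> ?S"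
  proof
    fix t' assume "t' \<in> {t'. lsub x A (Bag (add_mset u m)) t'}"
    then obtain A1 A2 u' m' where "A = A1 + A2" "lsub_v x A1 u u'" "lsub x A2 (Bag m) (Bag m')"
      "t' = Bag (add_mset u' m')"
      using lsub_Bag_add_msetD by blast
    then show "t' \<in> ?S" by (intro UN_I[of "(A1, A2)"]) (auto intro!: image_eqI[of _ _ "(u', Bag m')"])
  qed
  moreover have "finite ?S" using add finite_mset_splits by (intro finite_UN_I) auto
  ultimately show ?case by (rule finite_subset)
qed

lemma finite_lsub: "\<And>x A. finite {t'. lsub x A t t'}" "\<And>x A. finite {v'. lsub_v x A v v'}"
proof (induction t and v rule: rterm.induct rval.induct)
  case (RApp s t)
  let ?S = "\<Union>p\<in>{p. fst p + snd p = A}. (\<lambda>(s', t'). RApp s' t') ` ({s'. lsub x (fst p) s s'} \<times> {t'. lsub x (snd p) t t'})"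
  have "{t'. lsub x A (RApp s t) t'} \<subseteq> ?S"
  proof
    fix t' assume "t' \<in> {t'. lsub x A (RApp s t) t'}"
    then obtain A1 A2 s' t'' where "A = A1 + A2" "lsub x A1 s s'" "lsub x A2 t t''"
      "t' = RApp s' t''"
      by (auto elim: lsub.cases)
    then show "t' \<in> ?S" by (intro UN_I[of "(A1, A2)"]) (auto intro!: image_eqI[of _ _ "(s', t'')"])
  qed
  moreover have "finite ?S" using RApp finite_mset_splits by (intro finite_UN_I) auto
  ultimately show ?case by (rule finite_subset)
next
  case (Bag m)
  then show ?case using finite_lsub_Bag by blast
next
  case (RVar y)
  have "{v'. lsub_v x A (RVar y) v'} \<subseteq> set_mset A \<union> {RVar (if y < x then y else y - 1)}"
    by (auto elim: lsub_v.cases)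
  moreover have "finite (set_mset A \<union> {RVar (if y < x then y else y - 1)})" by simp
  ultimately show ?case by (rule finite_subset)
next
  case (RLam t)
  have "{v'. lsub_v x A (RLam t) v'} \<subseteq> RLam ` {t'. lsub (Suc x) (image_mset (rlift_v 0) A) t t'}"
    by (auto elim: lsub_v.cases)
  moreover have "finite (RLam ` {t'. lsub (Suc x) (image_mset (rlift_v 0) A) t t'})"
    using RLam by simp
  ultimately show ?case by (rule finite_subset)
qed

lemma finite_lin_subst: "finite (lin_subst t x A)"
  unfolding lin_subst_def by (rule finite_lsub)

lemma rstep_finite: "rstep e E \<Longrightarrow> finite E" "rstep_v v V \<Longrightarrow> finite V"
  by (induction rule: rstep_rstep_v.inducts) (auto simp: finite_lin_subst)

section \<open>Linear substitution and lifting\<close>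

lemma lsub_rlift: "\<And>k. lsub k {#} (rlift k s) s" "\<And>k. lsub_v k {#} (rlift_v k v) v"
proof (induction s and v rule: rterm.induct rval.induct)
  case (RApp s t)
  then show ?case using ls_app[of k "{#}" "rlift k s" s "{#}" "rlift k t" t] by simp
next
  case (Bag m)
  then show ?case
  proof (induction m)
    case empty then show ?case by (simp add: ls_nil)
  next
    case (add u m)
    then show ?case using ls_bag[of k "{#}" "rlift_v k u" u "{#}"
      "image_mset (rlift_v k) m" m] by simp
  qed
next
  case (RVar y)
  show ?case
  proof (cases "y < k")
    case True then show ?thesis using ls_var[of y k] by simp
  next
    case False then show ?thesis using ls_var[of "Suc y" k] by simp
  qed
next
  case (RLam t)
  have "lsub (Suc k) (image_mset (rlift_v 0) {#}) (rlift (Suc k) t) t" using RLam by simp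
  then have "lsub_v k {#} (RLam (rlift (Suc k) t)) (RLam t)" by (rule ls_lam)
  then show ?case by simp
qed

lemma lsub_rliftD: "\<And>k A s'. lsub k A (rlift k s) s' \<Longrightarrow> A = {#} \<and> s' = s"
   "\<And>k A v'. lsub_v k A (rlift_v k v) v' \<Longrightarrow> A = {#} \<and> v' = v"
proof (induction s and v rule: rterm.induct rval.induct)
  case (RApp s t)
  from RApp.prems have "lsub k A (RApp (rlift k s) (rlift k t)) s'" by simp
  then show ?case by (rule lsub_AppE) (use RApp.IH in force)
next
  case (Bag m)
  then show ?case
  proof (induction m arbitrary: A s')
    case empty then show ?case by (auto elim: lsub_emptyE)
  next
    case (add u m)
    from add.prems(2) obtain A1 A2 u' m' where h: "A = A1 + A2" "lsub_v k A1 (rlift_v k u) u'"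
      "lsub k A2 (Bag (image_mset (rlift_v k) m)) (Bag m')" "s' = Bag (add_mset u' m')"
      using lsub_Bag_add_msetD by fastforce
    have "A2 = {#} \<and> Bag m' = Bag m" using add.IH[of A2 "Bag m'"] add.prems(1) h(3) by auto
    moreover have "A1 = {#} \<and> u' = u" using add.prems(1) h(2) by auto
    ultimately show ?case using h by auto
  qed
next
  case (RVar y)
  from RVar.prems have "lsub_v k A (RVar (if y < k then y else Suc y)) v'"
    by (simp split: if_splits)
  then show ?case by (rule lsub_VarE) (auto split: if_splits)
next
  case (RLam t)
  from RLam.prems have "lsub_v k A (RLam (rlift (Suc k) t)) v'" by simp
  then show ?case by (rule lsub_LamE) (use RLam.IH in force)
qed

lemma lsub_rlift_below: "lsub x A t t' \<Longrightarrow> (\<And>k. k \<le> x \<Longrightarrow>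
  lsub (Suc x) (image_mset (rlift_v k) A) (rlift k t) (rlift k t'))"
  "lsub_v x A v v' \<Longrightarrow> (\<And>k. k \<le> x \<Longrightarrow> lsub_v (Suc x) (image_mset (rlift_v k) A) (rlift_v k v) (rlift_v k v'))"
proof (induction rule: lsub_lsub_v.inducts)
  case (ls_app x A s s' B t t')
  then show ?case using ls_app by (simp add: lsub_lsub_v.ls_app)
next
  case (ls_nil x)
  then show ?case by (simp add: lsub_lsub_v.ls_nil)
next
  case (ls_bag x A u u' B m m')
  then show ?case using lsub_lsub_v.ls_bag[of "Suc x" "image_mset (rlift_v k) A" "rlift_v k u"
    "rlift_v k u'" "image_mset (rlift_v k) B"] by simp
next
  case (ls_hit x v)
  then show ?case using lsub_lsub_v.ls_hit[of "Suc x" "rlift_v k v"] by simp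
next
  case (ls_var y x)
  then show ?case using lsub_lsub_v.ls_var[of "if y < k then y else Suc y" "Suc x"]
    by (auto split: if_splits)
next
  case (ls_lam x A t t')
  have "lsub (Suc (Suc x)) (image_mset (rlift_v (Suc k)) (image_mset (rlift_v 0) A)) (rlift (Suc k) t) (rlift (Suc k) t')"
    using ls_lam by simp
  then show ?case by (simp add: image_mset_rlift_v_commute lsub_lsub_v.ls_lam)
qed

lemma lsub_rlift_above: "lsub x A t t' \<Longrightarrow> (\<And>k. x \<le> k \<Longrightarrow>
  lsub x (image_mset (rlift_v k) A) (rlift (Suc k) t) (rlift k t'))"
  "lsub_v x A v v' \<Longrightarrow> (\<And>k. x \<le> k \<Longrightarrow> lsub_v x (image_mset (rlift_v k) A) (rlift_v (Suc k) v) (rlift_v k v'))"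
proof (induction rule: lsub_lsub_v.inducts)
  case (ls_app x A s s' B t t')
  then show ?case using ls_app by (simp add: lsub_lsub_v.ls_app)
next
  case (ls_nil x)
  then show ?case by (simp add: lsub_lsub_v.ls_nil)
next
  case (ls_bag x A u u' B m m')
  then show ?case using lsub_lsub_v.ls_bag[of x "image_mset (rlift_v k) A" "rlift_v (Suc k) u"
    "rlift_v k u'" "image_mset (rlift_v k) B"] by simp
next
  case (ls_hit x v)
  then show ?case using lsub_lsub_v.ls_hit[of x "rlift_v k v"] by simp
next
  case (ls_var y x)
  then show ?case using lsub_lsub_v.ls_var[of "if y < Suc k then y else Suc y" x]
    by (auto split: if_splits)
next
  case (ls_lam x A t t')
  have "lsub (Suc x) (image_mset (rlift_v (Suc k)) (image_mset (rlift_v 0) A)) (rlift (Suc (Suc k)) t) (rlift (Suc k) t')"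
    using ls_lam by simp
  then show ?case by (simp add: image_mset_rlift_v_commute lsub_lsub_v.ls_lam)
qed

lemma lsub_App_image_msetD:
  "lsub x (image_mset f A) (RApp s t) z \<Longrightarrow>
   \<exists>A1 A2 s' t'. A = A1 + A2 \<and> lsub x (image_mset f A1) s s' \<and> lsub x (image_mset f A2) t t' \<and>
     z = RApp s' t'"
  unfolding lsub_App_iff by (metis image_mset_eq_plusD)

lemma lsub_Bag_image_msetD:
  assumes "\<And>u A z. u \<in># m \<Longrightarrow> lsub_v x' (image_mset f A) (g u) z \<Longrightarrow> \<exists>u'. lsub_v x A u u' \<and> z = f u'"
    and "lsub x' (image_mset f A) (Bag (image_mset g m)) z"
  shows "\<exists>m'. lsub x A (Bag m) (Bag m') \<and> z = Bag (image_mset f m')"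
  using assms
proof (induction m arbitrary: A z)
  case empty
  then show ?case using lsub_Bag_emptyD ls_nil by fastforce
next
  case (add u m)
  from add.prems(2) obtain A1' A2' u1 m1 where h: "image_mset f A = A1' + A2'"
    "lsub_v x' A1' (g u) u1" "lsub x' A2' (Bag (image_mset g m)) (Bag m1)"
      "z = Bag (add_mset u1 m1)"
    using lsub_Bag_add_msetD[of x' "image_mset f A" "g u" "image_mset g m" z] by auto
  obtain A1 A2 where A: "A = A1 + A2" "A1' = image_mset f A1" "A2' = image_mset f A2"
    using image_mset_eq_plusD[OF h(1)] by blast
  obtain u' where u': "lsub_v x A1 u u'" "u1 = f u'"
    using add.prems(1)[of u A1 u1] h(2) A(2) by auto
  obtain m' where m': "lsub x A2 (Bag m) (Bag m')" "Bag m1 = Bag (image_mset f m')"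
    using add.IH[of A2 "Bag m1"] add.prems(1) h(3) A(3) by auto
  show ?case using ls_bag[OF u'(1) m'(1)] u' m' h(4) A(1) by auto
qed

lemma lsub_rlift_belowD:
  "\<And>x k A z. k \<le> x \<Longrightarrow> lsub (Suc x) (image_mset (rlift_v k) A) (rlift k t) z \<Longrightarrow>
    \<exists>t'. lsub x A t t' \<and> z = rlift k t'"
  "\<And>x k A z. k \<le> x \<Longrightarrow> lsub_v (Suc x) (image_mset (rlift_v k) A) (rlift_v k v) z \<Longrightarrow>
    \<exists>v'. lsub_v x A v v' \<and> z = rlift_v k v'"
proof (induction t and v rule: rterm.induct rval.induct)
  case (RApp s t)
  from RApp.prems(2) obtain A1 A2 s1 t1 where h: "A = A1 + A2"
    "lsub (Suc x) (image_mset (rlift_v k) A1) (rlift k s) s1"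
    "lsub (Suc x) (image_mset (rlift_v k) A2) (rlift k t) t1" "z = RApp s1 t1"
    using lsub_App_image_msetD by fastforce
  obtain s' where s': "lsub x A1 s s'" "s1 = rlift k s'"
    using RApp.IH(1)[OF RApp.prems(1)] h(2) by blast
  obtain t' where t': "lsub x A2 t t'" "t1 = rlift k t'"
    using RApp.IH(2)[OF RApp.prems(1)] h(3) by blast
  show ?case using ls_app[OF s'(1) t'(1)] s' t' h(4) h(1) by auto
next
  case (Bag m)
  have "\<exists>m'. lsub x A (Bag m) (Bag m') \<and> z = Bag (image_mset (rlift_v k) m')"
    using Bag.prems by (intro lsub_Bag_image_msetD[where g = "rlift_v k"]) (auto intro: Bag.IH)
  then show ?case by auto
next
  case (RVar y)
  from RVar.prems(2) have h: "lsub_v (Suc x) (image_mset (rlift_v k) A) (RVar (if y < k then y else Suc y)) z" by (simp split: if_splits)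
  show ?case
  proof (cases "y = x")
    case True
    then have "\<not> y < k" using RVar.prems(1) by simp
    then have "image_mset (rlift_v k) A = {#z#}" using h True unfolding lsub_Var_iff by auto
    from image_mset_eq_single[OF this] obtain a where "A = {#a#}" "z = rlift_v k a" by blast
    then show ?thesis using True ls_hit[of x a] by auto
  next
    case False
    then have "(if y < k then y else Suc y) \<noteq> Suc x" using RVar.prems(1) by auto
    then have "image_mset (rlift_v k) A = {#} \<and>
      z = RVar (if (if y < k then y else Suc y) < Suc x then (if y < k then y else Suc y) else (if y < k then y else Suc y) - 1)"
      using h unfolding lsub_Var_iff by auto
    then show ?thesis using False RVar.prems(1) ls_var[of y x]
      by (intro exI[of _ "RVar (if y < x then y else y - 1)"]) (auto split: if_splits)
  qed
next
  case (RLam t)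
  from RLam.prems(2) have "lsub_v (Suc x) (image_mset (rlift_v k) A) (RLam (rlift (Suc k) t)) z" by simp
  then obtain z0 where h: "lsub (Suc (Suc x)) (image_mset (rlift_v 0) (image_mset (rlift_v k) A)) (rlift (Suc k) t) z0" "z = RLam z0"
    by (rule lsub_LamE) blast
  from h(1) have "lsub (Suc (Suc x)) (image_mset (rlift_v (Suc k)) (image_mset (rlift_v 0) A)) (rlift (Suc k) t) z0"
    by (simp add: image_mset_rlift_v_commute)
  then obtain t' where t': "lsub (Suc x) (image_mset (rlift_v 0) A) t t'" "z0 = rlift (Suc k) t'"
    using RLam.IH[of "Suc k" "Suc x"] RLam.prems(1) by auto
  show ?case using ls_lam[OF t'(1)] t' h(2) by auto
qed

lemma lsub_rlift_aboveD:
  "\<And>x k A z. x \<le> k \<Longrightarrow> lsub x (image_mset (rlift_v k) A) (rlift (Suc k) t) z \<Longrightarrow>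
    \<exists>t'. lsub x A t t' \<and> z = rlift k t'"
  "\<And>x k A z. x \<le> k \<Longrightarrow> lsub_v x (image_mset (rlift_v k) A) (rlift_v (Suc k) v) z \<Longrightarrow>
    \<exists>v'. lsub_v x A v v' \<and> z = rlift_v k v'"
proof (induction t and v rule: rterm.induct rval.induct)
  case (RApp s t)
  from RApp.prems(2) obtain A1 A2 s1 t1 where h: "A = A1 + A2"
    "lsub x (image_mset (rlift_v k) A1) (rlift (Suc k) s) s1"
    "lsub x (image_mset (rlift_v k) A2) (rlift (Suc k) t) t1" "z = RApp s1 t1"
    using lsub_App_image_msetD by fastforce
  obtain s' where s': "lsub x A1 s s'" "s1 = rlift k s'"
    using RApp.IH(1)[OF RApp.prems(1)] h(2) by blast
  obtain t' where t': "lsub x A2 t t'" "t1 = rlift k t'"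
    using RApp.IH(2)[OF RApp.prems(1)] h(3) by blast
  show ?case using ls_app[OF s'(1) t'(1)] s' t' h(4) h(1) by auto
next
  case (Bag m)
  have "\<exists>m'. lsub x A (Bag m) (Bag m') \<and> z = Bag (image_mset (rlift_v k) m')"
    using Bag.prems by (intro lsub_Bag_image_msetD[where g =
      "rlift_v (Suc k)"]) (auto intro: Bag.IH)
  then show ?case by auto
next
  case (RVar y)
  from RVar.prems(2) have h: "lsub_v x (image_mset (rlift_v k) A) (RVar (if y < Suc k then y else Suc y)) z" by (simp split: if_splits)
  show ?case
  proof (cases "y = x")
    case True
    then have "y < Suc k" using RVar.prems(1) by simp
    then have "image_mset (rlift_v k) A = {#z#}" using h True unfolding lsub_Var_iff by auto
    from image_mset_eq_single[OF this] obtain a where "A = {#a#}" "z = rlift_v k a" by blast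
    then show ?thesis using True ls_hit[of x a] by auto
  next
    case False
    then have "(if y < Suc k then y else Suc y) \<noteq> x" using RVar.prems(1) by auto
    then have "image_mset (rlift_v k) A = {#} \<and>
      z = RVar (if (if y < Suc k then y else Suc y) < x then (if y < Suc k then y else Suc y) else (if y < Suc k then y else Suc y) - 1)"
      using h unfolding lsub_Var_iff by auto
    then show ?thesis using False RVar.prems(1) ls_var[of y x]
      by (intro exI[of _ "RVar (if y < x then y else y - 1)"]) (auto split: if_splits)
  qed
next
  case (RLam t)
  from RLam.prems(2) have "lsub_v x (image_mset (rlift_v k) A) (RLam (rlift (Suc (Suc k)) t)) z" by simp
  then obtain z0 where h: "lsub (Suc x) (image_mset (rlift_v 0) (image_mset (rlift_v k) A)) (rlift (Suc (Suc k)) t) z0" "z = RLam z0"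
    by (rule lsub_LamE) blast
  from h(1) have "lsub (Suc x) (image_mset (rlift_v (Suc k)) (image_mset (rlift_v 0) A)) (rlift (Suc (Suc k)) t) z0"
    by (simp add: image_mset_rlift_v_commute)
  then obtain t' where t': "lsub (Suc x) (image_mset (rlift_v 0) A) t t'" "z0 = rlift (Suc k) t'"
    using RLam.IH[of "Suc x" "Suc k"] RLam.prems(1) by auto
  show ?case using ls_lam[OF t'(1)] t' h(2) by auto
qed

lemma lin_subst_rlift: "lin_subst (rlift (Suc k) t) 0 (image_mset (rlift_v k) vs) =
  rlift k ` lin_subst t 0 vs"
proof
  show "rlift k ` lin_subst t 0 vs \<subseteq> lin_subst (rlift (Suc k) t) 0 (image_mset (rlift_v k) vs)"
    unfolding lin_subst_def using lsub_rlift_above(1) by blast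
next
  show "lin_subst (rlift (Suc k) t) 0 (image_mset (rlift_v k) vs) \<subseteq> rlift k ` lin_subst t 0 vs"
  proof
    fix z assume "z \<in> lin_subst (rlift (Suc k) t) 0 (image_mset (rlift_v k) vs)"
    then have "lsub 0 (image_mset (rlift_v k) vs) (rlift (Suc k) t) z" by (simp add: lin_subst_def)
    from lsub_rlift_aboveD(1)[OF _ this] obtain t' where "lsub 0 vs t t'" "z = rlift k t'" by blast
    then show "z \<in> rlift k ` lin_subst t 0 vs" by (simp add: lin_subst_def)
  qed
qed

lemma rstep_rlift: "rstep s S \<Longrightarrow> (\<And>k. rstep (rlift k s) (rlift k ` S))"
  "rstep_v v V \<Longrightarrow> (\<And>k. rstep_v (rlift_v k v) (rlift_v k ` V))"
proof (induction rule: rstep_rstep_v.inducts)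
  case (beta_r t vs)
  have "rstep (RApp (Bag {#RLam (rlift (Suc k) t)#}) (Bag (image_mset (rlift_v k) vs))) (lin_subst (rlift (Suc k) t) 0 (image_mset (rlift_v k) vs))"
    by (rule rstep_rstep_v.beta_r)
  then show ?case by (simp add: lin_subst_rlift)
next
  case (zero_r m t)
  have "rstep (RApp (Bag (image_mset (rlift_v k) m)) (rlift k t)) {}"
    using zero_r by (intro rstep_rstep_v.zero_r) simp
  then show ?case by simp
next
  case (sigma1_r t s1 s2)
  have "rstep (RApp (RApp (Bag {#RLam (rlift (Suc k) t)#}) (rlift k s1)) (rlift k s2))
     {RApp (Bag {#RLam (RApp (rlift (Suc k) t) (rlift 0 (rlift k s2)))#}) (rlift k s1)}"
    by (rule rstep_rstep_v.sigma1_r)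
  then show ?case by (simp add: rlift_rlift(1)[of 0 k])
next
  case (sigma3_r v t s)
  have "rstep (RApp (Bag {#rlift_v k v#}) (RApp (Bag {#RLam (rlift (Suc k) t)#}) (rlift k s)))
     {RApp (Bag {#RLam (RApp (Bag {#rlift_v 0 (rlift_v k v)#}) (rlift (Suc k) t))#}) (rlift k s)}"
    by (rule rstep_rstep_v.sigma3_r)
  then show ?case by (simp add: rlift_rlift(2)[of 0 k])
next
  case (ctx_appL_r s S t)
  have "rstep (RApp (rlift k s) (rlift k t)) ((\<lambda>s'. RApp s' (rlift k t)) ` (rlift k ` S))"
    using ctx_appL_r by (intro rstep_rstep_v.ctx_appL_r) auto
  then show ?case by (simp add: image_image)
next
  case (ctx_appR_r t T s)
  have "rstep (RApp (rlift k s) (rlift k t)) (RApp (rlift k s) ` (rlift k ` T))"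
    using ctx_appR_r by (intro rstep_rstep_v.ctx_appR_r) auto
  then show ?case by (simp add: image_image)
next
  case (ctx_bag_r u U m)
  have "rstep (Bag (add_mset (rlift_v k u) (image_mset (rlift_v k) m))) ((\<lambda>u'. Bag (add_mset u' (image_mset (rlift_v k) m))) ` (rlift_v k ` U))"
    using ctx_bag_r by (intro rstep_rstep_v.ctx_bag_r) auto
  then show ?case by (simp add: image_image)
next
  case (ctx_lam_r t T)
  have "rstep_v (RLam (rlift (Suc k) t)) (RLam ` (rlift (Suc k) ` T))"
    using ctx_lam_r by (intro rstep_rstep_v.ctx_lam_r) auto
  then show ?case by (simp add: image_image)
qed

section \<open>Termination\<close>

text \<open>The \<open>\<sigma>\<close>-rules preserve \<open>rsize\<close>; the polynomial interpretation \<open>rweight\<close>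
  decreases along them.\<close>

primrec rsize :: "rterm \<Rightarrow> nat" and rsize_v :: "rval \<Rightarrow> nat" where
  "rsize (RApp s t) = Suc (rsize s + rsize t)"
| "rsize (Bag m) = Suc (sum_mset (image_mset rsize_v m))"
| "rsize_v (RVar x) = 1"
| "rsize_v (RLam t) = Suc (rsize t)"

primrec rweight :: "rterm \<Rightarrow> nat" and rweight_v :: "rval \<Rightarrow> nat" where
  "rweight (RApp s t) = rweight s * (rweight t + 1)"
| "rweight (Bag m) = 2 + sum_mset (image_mset rweight_v m)"
| "rweight_v (RVar x) = 1"
| "rweight_v (RLam t) = rweight t"

definition rless :: "rterm \<Rightarrow> rterm \<Rightarrow> bool" where
  "rless a b \<longleftrightarrow> rsize a < rsize b \<or> rsize a = rsize b \<and> rweight a < rweight b"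

definition rless_v :: "rval \<Rightarrow> rval \<Rightarrow> bool" where
  "rless_v a b \<longleftrightarrow> rsize_v a < rsize_v b \<or> rsize_v a = rsize_v b \<and> rweight_v a < rweight_v b"

lemma rless_trans: "rless a b \<Longrightarrow> rless b c \<Longrightarrow> rless a c"
  unfolding rless_def by auto

lemma wf_rless: "wf {(a, b). rless a b}"
proof -
  have "{(a, b). rless a b} = inv_image (less_than <*lex*> less_than) (\<lambda>a. (rsize a, rweight a))"
    unfolding rless_def by auto
  then show ?thesis by (simp add: wf_lex_prod)
qed

lemma rsize_rlift: "\<And>k. rsize (rlift k s) = rsize s" "\<And>k. rsize_v (rlift_v k v) = rsize_v v"
  by (induction s and v rule: rterm.induct rval.induct)
    (auto simp: multiset.map_comp comp_def intro!: arg_cong[where f=sum_mset] image_mset_cong)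

lemma rweight_rlift: "\<And>k. rweight (rlift k s) = rweight s"
  "\<And>k. rweight_v (rlift_v k v) = rweight_v v"
  by (induction s and v rule: rterm.induct rval.induct)
    (auto simp: multiset.map_comp comp_def intro!: arg_cong[where f=sum_mset] image_mset_cong)

lemma rweight_ge: "rweight s \<ge> 2" "rweight_v v \<ge> 1"
proof (induction s and v rule: rterm.induct rval.induct)
  case (RApp x1 x2)
  have "rweight x1 * 1 \<le> rweight x1 * (rweight x2 + 1)" by (intro mult_le_mono) auto
  then show ?case using RApp by simp
qed auto

lemma rsize_pos: "rsize s \<ge> 1" "rsize_v v \<ge> 1"
  by (cases s; simp) (cases v; simp)

lemma lsub_rsize:
  "lsub x A t t' \<Longrightarrow> rsize t' + size A = rsize t + sum_mset (image_mset rsize_v A)"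
  "lsub_v x A v v' \<Longrightarrow> rsize_v v' + size A = rsize_v v + sum_mset (image_mset rsize_v A)"
  by (induction rule: lsub_lsub_v.inducts) (auto simp: multiset.map_comp comp_def rsize_rlift)

lemma rstep_rless: "rstep e E \<Longrightarrow> x \<in> E \<Longrightarrow> rless x e"
   "rstep_v v V \<Longrightarrow> w \<in> V \<Longrightarrow> rless_v w v"
proof (induction arbitrary: x and w rule: rstep_rstep_v.inducts)
  case (beta_r t vs)
  then have "lsub 0 vs t x" by (simp add: lin_subst_def)
  from lsub_rsize(1)[OF this] show ?case by (simp add: rless_def)
next
  case (zero_r m t)
  then show ?case by simp
next
  case (sigma1_r t s1 s2)
  let ?T = "rweight t" and ?S1 = "rweight s1" and ?S2 = "rweight s2"
  have "?S2 \<ge> 2" by (rule rweight_ge)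
  have eq: "(2 + ?T) * (?S1 + 1) * (?S2 + 1) =
    (2 + ?T * (?S2 + 1)) * (?S1 + 1) + 2 * (?S1 + 1) * ?S2"
    by (simp add: algebra_simps)
  have "(2 + ?T * (?S2 + 1)) * (?S1 + 1) < (2 + ?T) * (?S1 + 1) * (?S2 + 1)"
    unfolding eq using \<open>?S2 \<ge> 2\<close> by simp
  then show ?case using sigma1_r by (simp add: rless_def rsize_rlift rweight_rlift)
next
  case (sigma3_r v t s)
  let ?T = "rweight t" and ?S = "rweight s" and ?a = "rweight_v v"
  have eq: "(2 + ?a) * ((2 + ?T) * (?S + 1) + 1) =
    (2 + (2 + ?a) * (?T + 1)) * (?S + 1) + ?a * (?S + 1) + 2 + ?a"
    by (simp add: algebra_simps)
  have "(2 + (2 + ?a) * (?T + 1)) * (?S + 1) < (2 + ?a) * ((2 + ?T) * (?S + 1) + 1)"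
    unfolding eq by simp
  then show ?case using sigma3_r by (simp add: rless_def rsize_rlift rweight_rlift algebra_simps)
next
  case (ctx_appL_r s S t)
  then obtain s' where "s' \<in> S" "x = RApp s' t" by auto
  with ctx_appL_r.IH have "rless s' s" by auto
  moreover have "rweight s' < rweight s \<Longrightarrow>
    rweight s' * (rweight t + 1) < rweight s * (rweight t + 1)"
    by (rule mult_strict_right_mono) auto
  ultimately show ?case using \<open>x = RApp s' t\<close> unfolding rless_def by auto
next
  case (ctx_appR_r t T s)
  then obtain t' where "t' \<in> T" "x = RApp s t'" by auto
  with ctx_appR_r.IH have "rless t' t" by auto
  moreover have "rweight s > 0" using rweight_ge(1)[of s] by simp
  ultimately show ?case using \<open>x = RApp s t'\<close> by (auto simp: rless_def)
next
  case (ctx_bag_r u U m)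
  then obtain u' where "u' \<in> U" "x = Bag (add_mset u' m)" by auto
  with ctx_bag_r.IH have "rless_v u' u" by auto
  then show ?case using \<open>x = Bag (add_mset u' m)\<close> by (auto simp: rless_def rless_v_def)
next
  case (ctx_lam_r t T)
  then obtain t' where "t' \<in> T" "w = RLam t'" by auto
  with ctx_lam_r.IH have "rless t' t" by auto
  then show ?case using \<open>w = RLam t'\<close> unfolding rless_def rless_v_def by auto
qed

lemma rless_AppL: "rless s (RApp s t)"
  unfolding rless_def by simp

lemma rless_AppR: "rless t (RApp s t)"
  unfolding rless_def by simp

lemma rless_Bag_add_mset: "rless (Bag m) (Bag (add_mset u m))"
  unfolding rless_def using rsize_pos(2)[of u] by simp

lemma rless_Bag_Lam: "RLam t \<in># m \<Longrightarrow> rless t (Bag m)"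
  unfolding rless_def by (auto dest!: multi_member_split)

inductive_cases rstep_BagE: "rstep (Bag m) E"
inductive_cases rstep_v_LamE: "rstep_v (RLam t) V"
inductive_cases rstep_v_VarE: "rstep_v (RVar y) V"

lemma rstep_vD: "rstep_v u V \<Longrightarrow> \<exists>t T. u = RLam t \<and> rstep t T \<and> V = RLam ` T"
  by (cases u) (auto elim: rstep_v_LamE rstep_v_VarE)

lemma rstep_BagD:
  "rstep (Bag m) E \<Longrightarrow> \<exists>u U m0. m = add_mset u m0 \<and> rstep_v u U \<and> E = (\<lambda>u'. Bag (add_mset u' m0)) ` U"
  by (erule rstep_BagE) auto

lemma rstep_Bag_sizeD: "rstep (Bag m) S \<Longrightarrow> x \<in> S \<Longrightarrow> \<exists>m'. x = Bag m' \<and> size m' = size m"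
  by (auto dest: rstep_BagD)

lemma rstep_Bag_singleD: "rstep (Bag {#v#}) S \<Longrightarrow> \<exists>V. rstep_v v V \<and> S = (\<lambda>v'. Bag {#v'#}) ` V"
  by (auto dest: rstep_BagD)

lemma rstep_Bag_single_LamD: "rstep (Bag {#RLam u#}) S \<Longrightarrow>
  \<exists>U. rstep u U \<and> S = (\<lambda>u'. Bag {#RLam u'#}) ` U"
  by (auto simp: image_image dest!: rstep_Bag_singleD rstep_vD)

lemma rstep_Bag_insert: "rstep (Bag m) E \<Longrightarrow> rstep (Bag (add_mset w m)) (bag_insert w ` E)"
proof -
  assume "rstep (Bag m) E"
  from rstep_BagD[OF this] obtain u U m0
    where h: "m = add_mset u m0" "rstep_v u U" "E = (\<lambda>u'. Bag (add_mset u' m0)) ` U"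
    by blast
  have "rstep (Bag (add_mset u (add_mset w m0))) ((\<lambda>u'. Bag (add_mset u' (add_mset w m0))) ` U)"
    using h(2) by (rule ctx_bag_r)
  moreover have "bag_insert w ` E = (\<lambda>u'. Bag (add_mset u' (add_mset w m0))) ` U"
    using h(3) by (auto simp: add_mset_commute image_image)
  ultimately show ?thesis using h(1) by (simp add: add_mset_commute)
qed

lemma rstep_Bag_Lam:
  "rstep x X \<Longrightarrow> rstep (Bag (add_mset (RLam x) m)) ((\<lambda>x. Bag (add_mset (RLam x) m)) ` X)"
  using ctx_bag_r[OF ctx_lam_r, of x X m] by (simp add: image_image)

lemma rstep_App_Bag_Lam:
  "rstep x X \<Longrightarrow> rstep (RApp (Bag {#RLam x#}) r) ((\<lambda>y. RApp (Bag {#RLam y#}) r) ` X)"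
  using ctx_appL_r[OF rstep_Bag_Lam, of x X "{#}" r] by (simp add: image_image)

lemma rstep_App_Bag_single:
  "rstep_v y Y \<Longrightarrow> rstep (RApp (Bag {#y#}) r) ((\<lambda>y'. RApp (Bag {#y'#}) r) ` Y)"
  using ctx_appL_r[OF ctx_bag_r, of y Y "{#}" r] by (simp add: image_image)

section \<open>The substitution lemma\<close>

text \<open>For \<open>j \<le> x\<close>, \<open>t[x+1 := A0][j := bs[x := B]] = t[j := bs][x := A0 + B]\<close>, the values
  of \<open>A0\<close> being lifted past the binder \<open>j\<close>; the two lemmas are the two inclusions.\<close>

lemma lsub_lsub_commute:
  "lsub x' A t t' \<Longrightarrow> (\<And>x j A0 B bs bs' y. x' = Suc x \<Longrightarrow> j \<le> x \<Longrightarrow> A = image_mset (rlift_v j) A0 \<Longrightarrow>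
      lsub x B (Bag bs) (Bag bs') \<Longrightarrow> lsub j bs' t' y \<Longrightarrow> \<exists>u'. lsub j bs t u' \<and> lsub x (A0 + B) u' y)"
  "lsub_v x' A v v' \<Longrightarrow> (\<And>x j A0 B bs bs' y. x' = Suc x \<Longrightarrow> j \<le> x \<Longrightarrow> A = image_mset (rlift_v j) A0 \<Longrightarrow>
      lsub x B (Bag bs) (Bag bs') \<Longrightarrow> lsub_v j bs' v' y \<Longrightarrow>
        \<exists>u'. lsub_v j bs v u' \<and> lsub_v x (A0 + B) u' y)"
proof (induction rule: lsub_lsub_v.inducts)
  case (ls_app x' A1 s s' A2 t t')
  obtain C1 C2 y1 y2 where y: "bs' = C1 + C2" "lsub j C1 s' y1" "lsub j C2 t' y2" "y = RApp y1 y2"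
    using ls_app.prems(5) unfolding lsub_App_iff by blast
  obtain A01 A02 where A0: "A0 = A01 + A02" "A1 = image_mset (rlift_v j) A01"
    "A2 = image_mset (rlift_v j) A02"
    using image_mset_eq_plusD[OF ls_app.prems(3)[symmetric]] by blast
  obtain B1 B2 bs1 bs2 where B: "B = B1 + B2" "lsub x B1 (Bag bs1) (Bag C1)"
    "lsub x B2 (Bag bs2) (Bag C2)" "Bag bs = Bag (bs1 + bs2)"
    using lsub_to_Bag_plusD[of x B "Bag bs" C1 C2] ls_app.prems(4) y(1) by blast
  obtain u1 where u1: "lsub j bs1 s u1" "lsub x (A01 + B1) u1 y1"
    using ls_app.IH(1)[OF ls_app.prems(1,2) A0(2) B(2) y(2)] by blast
  obtain u2 where u2: "lsub j bs2 t u2" "lsub x (A02 + B2) u2 y2"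
    using ls_app.IH(2)[OF ls_app.prems(1,2) A0(3) B(3) y(3)] by blast
  have "lsub j bs (RApp s t) (RApp u1 u2)" using lsub_lsub_v.ls_app[OF u1(1) u2(1)] B(4) by simp
  moreover have "lsub x (A0 + B) (RApp u1 u2) y"
    using lsub_lsub_v.ls_app[OF u1(2) u2(2)] A0(1) B(1) y(4)
    by (simp add: ac_simps)
  ultimately show ?case by blast
next
  case (ls_nil x')
  then have "A0 = {#}" by simp
  from ls_nil.prems(5) have "bs' = {#} \<and> y = Bag {#}" by (rule lsub_Bag_emptyD)
  then have "bs = {#} \<and> B = {#}" using ls_nil.prems(4) lsub_to_Bag_emptyD by blast
  then show ?case using \<open>A0 = {#}\<close> \<open>bs' = {#} \<and> y = Bag {#}\<close> lsub_lsub_v.ls_nil by auto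
next
  case (ls_bag x' A1 u u' A2 m m')
  obtain C1 C2 y1 y2m where y: "bs' = C1 + C2" "lsub_v j C1 u' y1" "lsub j C2 (Bag m') (Bag y2m)"
    "y = Bag (add_mset y1 y2m)"
    using lsub_Bag_add_msetD[OF ls_bag.prems(5)] by blast
  obtain A01 A02 where A0: "A0 = A01 + A02" "A1 = image_mset (rlift_v j) A01"
    "A2 = image_mset (rlift_v j) A02"
    using image_mset_eq_plusD[OF ls_bag.prems(3)[symmetric]] by blast
  obtain B1 B2 bs1 bs2 where B: "B = B1 + B2" "lsub x B1 (Bag bs1) (Bag C1)"
    "lsub x B2 (Bag bs2) (Bag C2)" "Bag bs = Bag (bs1 + bs2)"
    using lsub_to_Bag_plusD[of x B "Bag bs" C1 C2] ls_bag.prems(4) y(1) by blast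
  obtain u1 where u1: "lsub_v j bs1 u u1" "lsub_v x (A01 + B1) u1 y1"
    using ls_bag.IH(1)[OF ls_bag.prems(1,2) A0(2) B(2) y(2)] by blast
  obtain u2 where u2: "lsub j bs2 (Bag m) u2" "lsub x (A02 + B2) u2 (Bag y2m)"
    using ls_bag.IH(2)[OF ls_bag.prems(1,2) A0(3) B(3) y(3)] by blast
  obtain m2 where m2: "u2 = Bag m2" using lsub_BagD[OF u2(1)] by blast
  have "lsub j bs (Bag (add_mset u m)) (Bag (add_mset u1 m2))"
    using lsub_lsub_v.ls_bag[OF u1(1) u2(1)[unfolded m2]] B(4) by simp
  moreover have "lsub x (A0 + B) (Bag (add_mset u1 m2)) y"
    using lsub_lsub_v.ls_bag[OF u1(2) u2(2)[unfolded m2]] A0(1) B(1) y(4)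
    by (simp add: ac_simps)
  ultimately show ?case by blast
next
  case (ls_hit x' v)
  from ls_hit.prems(3) obtain a where a: "A0 = {#a#}" "v = rlift_v j a"
    using image_mset_eq_single[of "rlift_v j" A0 v] by auto
  from lsub_rliftD(2)[of j bs' a y] ls_hit.prems(5) a have "bs' = {#} \<and> y = a" by simp
  then have "bs = {#} \<and> B = {#}" using ls_hit.prems(4) lsub_to_Bag_emptyD by blast
  have "lsub_v j {#} (RVar (Suc x)) (RVar x)" using ls_var[of "Suc x" j] ls_hit.prems(2) by simp
  moreover have "lsub_v x {#a#} (RVar x) a" by (rule lsub_lsub_v.ls_hit)
  ultimately show ?case using ls_hit.prems(1) \<open>bs = {#} \<and> B = {#}\<close> \<open>bs' = {#} \<and> y = a\<close> a by auto
next
  case (ls_var y0 x')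
  then have A0: "A0 = {#}" by simp
  let ?y1 = "if y0 < x' then y0 else y0 - 1"
  show ?case
  proof (cases "?y1 = j")
    case True
    then have y0j: "y0 = j" using ls_var.hyps ls_var.prems(1,2) by (auto split: if_splits)
    from ls_var.prems(5) True have "bs' = {#y#}" unfolding lsub_Var_iff by auto
    then obtain b where b: "bs = {#b#}" "lsub_v x B b y"
      using lsub_to_Bag_singleD ls_var.prems(4) by blast
    show ?thesis using b y0j A0 lsub_lsub_v.ls_hit[of j b] by auto
  next
    case False
    from ls_var.prems(5) False have h: "bs' = {#}" "y = RVar (if ?y1 < j then ?y1 else ?y1 - 1)"
      unfolding lsub_Var_iff by auto
    then have "bs = {#} \<and> B = {#}" using ls_var.prems(4) lsub_to_Bag_emptyD by blast
    have y0j: "y0 \<noteq> j" using False ls_var.hyps ls_var.prems by (auto split: if_splits)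
    let ?z = "if y0 < j then y0 else y0 - 1"
    have "?z \<noteq> x" using ls_var.hyps ls_var.prems y0j by (auto split: if_splits)
    then have "lsub_v x {#} (RVar ?z) (RVar (if ?z < x then ?z else ?z - 1))"
      by (rule lsub_lsub_v.ls_var)
    moreover have "RVar (if ?z < x then ?z else ?z - 1) = y"
      using h(2) ls_var.hyps ls_var.prems False y0j by (auto split: if_splits)
    moreover have "lsub_v j {#} (RVar y0) (RVar ?z)" using y0j by (rule lsub_lsub_v.ls_var)
    ultimately show ?thesis using A0 \<open>bs = {#} \<and> B = {#}\<close> by auto
  qed
next
  case (ls_lam x' A t t')
  from ls_lam.prems(5) obtain y0 where y: "y = RLam y0"
    "lsub (Suc j) (image_mset (rlift_v 0) bs') t' y0"
    unfolding lsub_Lam_iff by blast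
  have A': "image_mset (rlift_v 0) A = image_mset (rlift_v (Suc j)) (image_mset (rlift_v 0) A0)"
    using ls_lam.prems(3) by (simp add: image_mset_rlift_v_commute)
  have B': "lsub (Suc x) (image_mset (rlift_v 0) B) (Bag (image_mset (rlift_v 0) bs)) (Bag (image_mset (rlift_v 0) bs'))"
    using lsub_rlift_below(1)[OF ls_lam.prems(4), of 0] by simp
  obtain u0 where u0: "lsub (Suc j) (image_mset (rlift_v 0) bs) t u0"
    "lsub (Suc x) (image_mset (rlift_v 0) A0 + image_mset (rlift_v 0) B) u0 y0"
    using ls_lam.IH[of "Suc x" "Suc j"
      "image_mset (rlift_v 0) A0", OF _ _ A' B' y(2)] ls_lam.prems(1,2) by auto
  have "lsub_v j bs (RLam t) (RLam u0)" using u0(1) by (rule lsub_lsub_v.ls_lam)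
  moreover have "lsub_v x (A0 + B) (RLam u0) (RLam y0)"
    using u0(2) by (intro lsub_lsub_v.ls_lam) simp
  ultimately show ?case using y by blast
qed

lemma lsub_lsub_commute_rev:
  "lsub j bs t u' \<Longrightarrow> (\<And>x VS y. j \<le> x \<Longrightarrow> lsub x VS u' y \<Longrightarrow>
     \<exists>A0 B t' bs'. VS = A0 + B \<and> lsub (Suc x) (image_mset (rlift_v j) A0) t t' \<and>
       lsub x B (Bag bs) (Bag bs') \<and> lsub j bs' t' y)"
  "lsub_v j bs v v' \<Longrightarrow> (\<And>x VS y. j \<le> x \<Longrightarrow> lsub_v x VS v' y \<Longrightarrow>
     \<exists>A0 B t' bs'. VS = A0 + B \<and> lsub_v (Suc x) (image_mset (rlift_v j) A0) v t' \<and>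
       lsub x B (Bag bs) (Bag bs') \<and> lsub_v j bs' t' y)"
proof (induction rule: lsub_lsub_v.inducts)
  case (ls_app j C1 s s1 C2 t t1)
  obtain V1 V2 y1 y2 where y: "VS = V1 + V2" "lsub x V1 s1 y1" "lsub x V2 t1 y2" "y = RApp y1 y2"
    using ls_app.prems(2) unfolding lsub_App_iff by blast
  obtain A01 B1 s' C1' where h1: "V1 = A01 + B1" "lsub (Suc x) (image_mset (rlift_v j) A01) s s'"
      "lsub x B1 (Bag C1) (Bag C1')" "lsub j C1' s' y1"
    using ls_app.IH(1)[OF ls_app.prems(1) y(2)] by blast
  obtain A02 B2 t' C2' where h2: "V2 = A02 + B2" "lsub (Suc x) (image_mset (rlift_v j) A02) t t'"
      "lsub x B2 (Bag C2) (Bag C2')" "lsub j C2' t' y2"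
    using ls_app.IH(2)[OF ls_app.prems(1) y(3)] by blast
  have "VS = (A01 + A02) + (B1 + B2)" using y(1) h1(1) h2(1) by (simp add: ac_simps)
  moreover have "lsub (Suc x) (image_mset (rlift_v j) (A01 + A02)) (RApp s t) (RApp s' t')"
    using lsub_lsub_v.ls_app[OF h1(2) h2(2)] by simp
  moreover have "lsub x (B1 + B2) (Bag (C1 + C2)) (Bag (C1' + C2'))"
    using lsub_Bag_plus[OF h1(3) h2(3)] .
  moreover have "lsub j (C1' + C2') (RApp s' t') y"
    using lsub_lsub_v.ls_app[OF h1(4) h2(4)] y(4) by simp
  ultimately show ?case by blast
next
  case (ls_nil j)
  from lsub_Bag_emptyD[OF ls_nil.prems(2)] have "VS = {#}" "y = Bag {#}" by auto
  then show ?case using lsub_lsub_v.ls_nil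
    by (intro exI[of _ "{#}"] exI[of _ "{#}"] exI[of _ "Bag {#}"] exI[of _ "{#}"]) auto
next
  case (ls_bag j C1 u u1 C2 m m1)
  obtain V1 V2 y1 y2m where y: "VS = V1 + V2" "lsub_v x V1 u1 y1" "lsub x V2 (Bag m1) (Bag y2m)"
    "y = Bag (add_mset y1 y2m)"
    using lsub_Bag_add_msetD[OF ls_bag.prems(2)] by blast
  obtain A01 B1 u' C1' where h1: "V1 = A01 + B1" "lsub_v (Suc x) (image_mset (rlift_v j) A01) u u'"
      "lsub x B1 (Bag C1) (Bag C1')" "lsub_v j C1' u' y1"
    using ls_bag.IH(1)[OF ls_bag.prems(1) y(2)] by blast
  obtain A02 B2 t' C2' where h2: "V2 = A02 + B2"
    "lsub (Suc x) (image_mset (rlift_v j) A02) (Bag m) t'"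
      "lsub x B2 (Bag C2) (Bag C2')" "lsub j C2' t' (Bag y2m)"
    using ls_bag.IH(2)[OF ls_bag.prems(1) y(3)] by blast
  obtain m2 where m2: "t' = Bag m2" using lsub_BagD[OF h2(2)] by blast
  have "VS = (A01 + A02) + (B1 + B2)" using y(1) h1(1) h2(1) by (simp add: ac_simps)
  moreover have "lsub (Suc x) (image_mset (rlift_v j) (A01 + A02)) (Bag (add_mset u m)) (Bag (add_mset u' m2))"
    using lsub_lsub_v.ls_bag[OF h1(2) h2(2)[unfolded m2]] by simp
  moreover have "lsub x (B1 + B2) (Bag (C1 + C2)) (Bag (C1' + C2'))"
    using lsub_Bag_plus[OF h1(3) h2(3)] .
  moreover have "lsub j (C1' + C2') (Bag (add_mset u' m2)) y"
    using lsub_lsub_v.ls_bag[OF h1(4) h2(4)[unfolded m2]] y(4) by simp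
  ultimately show ?case by blast
next
  case (ls_hit j v)
  have "lsub_v (Suc x) {#} (RVar j) (RVar j)" using ls_var[of j "Suc x"] ls_hit.prems(1) by simp
  moreover have "lsub x VS (Bag {#v#}) (Bag {#y#})" using lsub_Bag_single[OF ls_hit.prems(2)] .
  moreover have "lsub_v j {#y#} (RVar j) y" by (rule lsub_lsub_v.ls_hit)
  ultimately show ?case by (intro exI[of _ "{#}"] exI[of _ VS] exI[of _ "RVar j"] exI[of _ "{#y#}"]) simp
next
  case (ls_var y0 j)
  let ?z = "if y0 < j then y0 else y0 - 1"
  show ?case
  proof (cases "?z = x")
    case True
    then have y0: "y0 = Suc x" using ls_var.hyps ls_var.prems(1) by (auto split: if_splits)
    from ls_var.prems(2) True have VS: "VS = {#y#}" unfolding lsub_Var_iff by auto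
    have "lsub_v (Suc x) (image_mset (rlift_v j) {#y#}) (RVar y0) (rlift_v j y)"
      using y0 lsub_lsub_v.ls_hit by simp
    moreover have "lsub x {#} (Bag {#}) (Bag {#})" by (rule lsub_lsub_v.ls_nil)
    moreover have "lsub_v j {#} (rlift_v j y) y" by (rule lsub_rlift(2))
    ultimately show ?thesis using VS
      by (intro exI[of _ "{#y#}"] exI[of _ "{#}"] exI[of _ "rlift_v j y"] exI[of _ "{#}"]) simp
  next
    case False
    from ls_var.prems(2) False have h: "VS = {#}" "y = RVar (if ?z < x then ?z else ?z - 1)"
      unfolding lsub_Var_iff by auto
    have y0x: "y0 \<noteq> Suc x" using False ls_var.hyps ls_var.prems(1) by (auto split: if_splits)
    let ?w = "if y0 < Suc x then y0 else y0 - 1"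
    have "lsub_v (Suc x) {#} (RVar y0) (RVar ?w)" using y0x by (rule lsub_lsub_v.ls_var)
    moreover have wj: "?w \<noteq> j" using y0x ls_var.hyps ls_var.prems(1) by (auto split: if_splits)
    have "lsub_v j {#} (RVar ?w) (RVar (if ?w < j then ?w else ?w - 1))"
      using wj by (rule lsub_lsub_v.ls_var)
    moreover have "RVar (if ?w < j then ?w else ?w - 1) = y"
      using h(2) ls_var.hyps ls_var.prems(1) y0x False by (auto split: if_splits)
    moreover have "lsub x {#} (Bag {#}) (Bag {#})" by (rule lsub_lsub_v.ls_nil)
    ultimately show ?thesis using h(1)
      by (intro exI[of _ "{#}"] exI[of _ "{#}"] exI[of _ "RVar ?w"] exI[of _ "{#}"]) simp
  qed
next
  case (ls_lam j bs t u0)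
  from ls_lam.prems(2) obtain y0 where y: "y = RLam y0"
    "lsub (Suc x) (image_mset (rlift_v 0) VS) u0 y0"
    unfolding lsub_Lam_iff by blast
  obtain A0' B' t' bs'' where h: "image_mset (rlift_v 0) VS = A0' + B'"
     "lsub (Suc (Suc x)) (image_mset (rlift_v (Suc j)) A0') t t'"
     "lsub (Suc x) B' (Bag (image_mset (rlift_v 0) bs)) (Bag bs'')" "lsub (Suc j) bs'' t' y0"
    using ls_lam.IH[of "Suc x", OF _ y(2)] ls_lam.prems(1) by auto
  obtain A0 B where AB: "VS = A0 + B" "A0' = image_mset (rlift_v 0) A0"
    "B' = image_mset (rlift_v 0) B"
    using image_mset_eq_plusD[OF h(1)] by blast
  have "lsub (Suc x) (image_mset (rlift_v 0) B) (rlift 0 (Bag bs)) (Bag bs'')"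
    using h(3) AB(3) by simp
  from lsub_rlift_belowD(1)[OF _ this] obtain t1 where t1: "lsub x B (Bag bs) t1"
    "Bag bs'' = rlift 0 t1" by blast
  obtain bs' where bs': "t1 = Bag bs'" using lsub_BagD[OF t1(1)] by blast
  have "lsub_v (Suc x) (image_mset (rlift_v j) A0) (RLam t) (RLam t')"
    using h(2) AB(2) by (intro lsub_lsub_v.ls_lam) (simp add: image_mset_rlift_v_commute)
  moreover have "lsub_v j bs' (RLam t') (RLam y0)"
    using h(4) t1(2) bs' by (intro lsub_lsub_v.ls_lam) simp
  ultimately show ?case using AB(1) t1(1) bs' y(1) by blast
qed

section \<open>Reduction commutes with linear substitution\<close>

lemma lsub_simulates_beta:
  assumes "lsub x vs (RApp (Bag {#RLam t#}) (Bag bs)) w"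
  shows "\<exists>W. rstep w W \<and> (\<forall>w'\<in>W. \<exists>u'\<in>lin_subst t 0 bs. lsub x vs u' w')"
proof -
  obtain A B w1 w2 where h: "vs = A + B" "lsub x A (Bag {#RLam t#}) w1" "lsub x B (Bag bs) w2"
    "w = RApp w1 w2"
    using assms unfolding lsub_App_iff by blast
  obtain t' where t': "w1 = Bag {#RLam t'#}" "lsub (Suc x) (image_mset (rlift_v 0) A) t t'"
    using lsub_Bag_LamD[OF h(2)] by blast
  obtain bs' where bs': "w2 = Bag bs'" using lsub_BagD[OF h(3)] by blast
  have "rstep w (lin_subst t' 0 bs')" using h(4) t'(1) bs' by (simp add: rstep_rstep_v.beta_r)
  moreover have "\<forall>w'\<in>lin_subst t' 0 bs'. \<exists>u'\<in>lin_subst t 0 bs. lsub x vs u' w'"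
  proof
    fix w' assume "w' \<in> lin_subst t' 0 bs'"
    then have "lsub 0 bs' t' w'" by (simp add: lin_subst_def)
    from lsub_lsub_commute(1)[OF t'(2) refl _ _ h(3)[unfolded bs'] this] obtain u' where "lsub 0 bs t u'" "lsub x (A + B) u' w'" by auto
    then show "\<exists>u'\<in>lin_subst t 0 bs. lsub x vs u' w'" using h(1) by (auto simp: lin_subst_def)
qed
ultimately show ?thesis by blast
qed

lemma lsub_simulates_sigma1:
  assumes "lsub x vs (RApp (RApp (Bag {#RLam t#}) s1) s2) w"
  shows "\<exists>w'. rstep w {w'} \<and> lsub x vs (RApp (Bag {#RLam (RApp t (rlift 0 s2))#}) s1) w'"
proof -
  obtain AB C w12 s2' where h: "vs = AB + C" "lsub x AB (RApp (Bag {#RLam t#}) s1) w12"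
    "lsub x C s2 s2'" "w = RApp w12 s2'"
    using assms unfolding lsub_App_iff by blast
  obtain A B w1 s1' where h2: "AB = A + B" "lsub x A (Bag {#RLam t#}) w1" "lsub x B s1 s1'"
    "w12 = RApp w1 s1'"
    using h(2) unfolding lsub_App_iff by blast
  obtain t' where t': "w1 = Bag {#RLam t'#}" "lsub (Suc x) (image_mset (rlift_v 0) A) t t'"
    using lsub_Bag_LamD[OF h2(2)] by blast
  let ?w' = "RApp (Bag {#RLam (RApp t' (rlift 0 s2'))#}) s1'"
  have "rstep w {?w'}" using h(4) h2(4) t'(1) by (simp add: rstep_rstep_v.sigma1_r)
  moreover have "lsub x vs (RApp (Bag {#RLam (RApp t (rlift 0 s2))#}) s1) ?w'"
  proof -
    have "lsub (Suc x) (image_mset (rlift_v 0) C) (rlift 0 s2) (rlift 0 s2')"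
      using lsub_rlift_below(1)[OF h(3), of 0] by simp
    then have "lsub (Suc x) (image_mset (rlift_v 0) (A + C)) (RApp t (rlift 0 s2)) (RApp t' (rlift 0 s2'))"
      using ls_app[OF t'(2)] by simp
    from ls_app[OF lsub_Bag_Lam[OF this] h2(3)] show ?thesis
      using h(1) h2(1) by (simp add: ac_simps)
qed
ultimately show ?thesis by blast
qed

lemma lsub_simulates_sigma3:
  assumes "lsub x vs (RApp (Bag {#v#}) (RApp (Bag {#RLam t#}) s)) w"
  shows "\<exists>w'. rstep w {w'} \<and> lsub x vs (RApp (Bag {#RLam (RApp (Bag {#rlift_v 0 v#}) t)#}) s) w'"
proof -
  obtain A BC w1 w23 where h: "vs = A + BC" "lsub x A (Bag {#v#}) w1"
    "lsub x BC (RApp (Bag {#RLam t#}) s) w23" "w = RApp w1 w23"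
    using assms unfolding lsub_App_iff by blast
  obtain v' where v': "w1 = Bag {#v'#}" "lsub_v x A v v'" using lsub_Bag_singleD[OF h(2)] by blast
  obtain B C w2 s' where h2: "BC = B + C" "lsub x B (Bag {#RLam t#}) w2" "lsub x C s s'"
    "w23 = RApp w2 s'"
    using h(3) unfolding lsub_App_iff by blast
  obtain t' where t': "w2 = Bag {#RLam t'#}" "lsub (Suc x) (image_mset (rlift_v 0) B) t t'"
    using lsub_Bag_LamD[OF h2(2)] by blast
  let ?w' = "RApp (Bag {#RLam (RApp (Bag {#rlift_v 0 v'#}) t')#}) s'"
  have "rstep w {?w'}" using h(4) h2(4) t'(1) v'(1) by (simp add: rstep_rstep_v.sigma3_r)
  moreover have "lsub x vs (RApp (Bag {#RLam (RApp (Bag {#rlift_v 0 v#}) t)#}) s) ?w'"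
  proof -
    have "lsub_v (Suc x) (image_mset (rlift_v 0) A) (rlift_v 0 v) (rlift_v 0 v')"
      using lsub_rlift_below(2)[OF v'(2), of 0] by simp
    then have "lsub (Suc x) (image_mset (rlift_v 0) (A + B)) (RApp (Bag {#rlift_v 0 v#}) t) (RApp (Bag {#rlift_v 0 v'#}) t')"
      using ls_app[OF lsub_Bag_single t'(2)] by simp
    from ls_app[OF lsub_Bag_Lam[OF this] h2(3)] show ?thesis
      using h(1) h2(1) by (simp add: ac_simps)
qed
ultimately show ?thesis by blast
qed

lemma lsub_simulates_rstep: "rstep u U \<Longrightarrow> (\<And>x vs w. lsub x vs u w \<Longrightarrow>
  \<exists>W. rstep w W \<and> (\<forall>w'\<in>W. \<exists>u'\<in>U. lsub x vs u' w'))"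
  "rstep_v v V \<Longrightarrow> (\<And>x vs w. lsub_v x vs v w \<Longrightarrow> \<exists>W. rstep_v w W \<and> (\<forall>w'\<in>W. \<exists>v'\<in>V. lsub_v x vs v' w'))"
proof (induction rule: rstep_rstep_v.inducts)
  case (beta_r t bs)
  then show ?case by (rule lsub_simulates_beta)
next
  case (zero_r m t)
  obtain A B w1 w2 where h: "vs = A + B" "lsub x A (Bag m) w1" "lsub x B t w2" "w = RApp w1 w2"
    using zero_r unfolding lsub_App_iff by blast
  obtain m' where "w1 = Bag m'" "size m' = size m" using lsub_BagD[OF h(2)] by blast
  then have "rstep w {}" using h(4) zero_r(1) by (simp add: rstep_rstep_v.zero_r)
  then show ?case by blast
next
  case (sigma1_r t s1 s2)
  then show ?case using lsub_simulates_sigma1 by blast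
next
  case (sigma3_r v t s)
  then show ?case using lsub_simulates_sigma3 by blast
next
  case (ctx_appL_r s S t)
  obtain A B w1 w2 where h: "vs = A + B" "lsub x A s w1" "lsub x B t w2" "w = RApp w1 w2"
    using ctx_appL_r.prems unfolding lsub_App_iff by blast
  obtain W1 where W1: "rstep w1 W1" "\<forall>w'\<in>W1. \<exists>u'\<in>S. lsub x A u' w'"
    using ctx_appL_r.IH[OF h(2)] by blast
  have "rstep w ((\<lambda>a. RApp a w2) ` W1)" using h(4) W1(1) by (simp add: rstep_rstep_v.ctx_appL_r)
  moreover have "\<forall>w'\<in>(\<lambda>a. RApp a w2) ` W1. \<exists>u'\<in>(\<lambda>s'. RApp s' t) ` S. lsub x vs u' w'"
    using W1(2) h(1) h(3) ls_app by fastforce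
  ultimately show ?case by blast
next
  case (ctx_appR_r t T s)
  obtain A B w1 w2 where h: "vs = A + B" "lsub x A s w1" "lsub x B t w2" "w = RApp w1 w2"
    using ctx_appR_r.prems unfolding lsub_App_iff by blast
  obtain W2 where W2: "rstep w2 W2" "\<forall>w'\<in>W2. \<exists>u'\<in>T. lsub x B u' w'"
    using ctx_appR_r.IH[OF h(3)] by blast
  have "rstep w (RApp w1 ` W2)" using h(4) W2(1) by (simp add: rstep_rstep_v.ctx_appR_r)
  moreover have "\<forall>w'\<in>RApp w1 ` W2. \<exists>u'\<in>RApp s ` T. lsub x vs u' w'"
    using W2(2) h(1) h(2) ls_app by fastforce
  ultimately show ?case by blast
next
  case (ctx_bag_r u U m)
  obtain A B u' m' where h: "vs = A + B" "lsub_v x A u u'" "lsub x B (Bag m) (Bag m')"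
    "w = Bag (add_mset u' m')"
    using lsub_Bag_add_msetD[OF ctx_bag_r.prems] by blast
  obtain W1 where W1: "rstep_v u' W1" "\<forall>w'\<in>W1. \<exists>v'\<in>U. lsub_v x A v' w'"
    using ctx_bag_r.IH[OF h(2)] by blast
  have "rstep w ((\<lambda>z. Bag (add_mset z m')) ` W1)"
    using h(4) W1(1) by (simp add: rstep_rstep_v.ctx_bag_r)
  moreover have "\<forall>w'\<in>(\<lambda>z. Bag (add_mset z m')) ` W1. \<exists>u'\<in>(\<lambda>u'. Bag (add_mset u' m)) ` U. lsub x vs u' w'"
    using W1(2) h(1) h(3) ls_bag by fastforce
  ultimately show ?case by blast
next
  case (ctx_lam_r t T)
  obtain t' where h: "w = RLam t'" "lsub (Suc x) (image_mset (rlift_v 0) vs) t t'"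
    using ctx_lam_r.prems unfolding lsub_Lam_iff by blast
  obtain W1 where W1: "rstep t' W1" "\<forall>w'\<in>W1. \<exists>u'\<in>T. lsub (Suc x) (image_mset (rlift_v 0) vs) u' w'"
    using ctx_lam_r.IH[OF h(2)] by blast
  have "rstep_v w (RLam ` W1)" using h(1) W1(1) by (simp add: rstep_rstep_v.ctx_lam_r)
  moreover have "\<forall>w'\<in>RLam ` W1. \<exists>v'\<in>RLam ` T. lsub_v x vs v' w'"
    using W1(2) ls_lam by fastforce
  ultimately show ?case by blast
qed

lemma lsub_reflects_beta:
  assumes "lsub 0 bs t u'" "lsub x vs u' y"
  shows "\<exists>w W. lsub x vs (RApp (Bag {#RLam t#}) (Bag bs)) w \<and> rstep w W \<and> y \<in> W"
proof -
  from lsub_lsub_commute_rev(1)[OF assms(1) _ assms(2)] obtain A0 B t' bs' where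
    h: "vs = A0 + B" "lsub (Suc x) (image_mset (rlift_v 0) A0) t t'" "lsub x B (Bag bs) (Bag bs')"
      "lsub 0 bs' t' y" by auto
  have "lsub x vs (RApp (Bag {#RLam t#}) (Bag bs)) (RApp (Bag {#RLam t'#}) (Bag bs'))"
    using ls_app[OF lsub_Bag_Lam[OF h(2)] h(3)] h(1) by simp
  moreover have "rstep (RApp (Bag {#RLam t'#}) (Bag bs')) (lin_subst t' 0 bs')"
    by (rule rstep_rstep_v.beta_r)
  moreover have "y \<in> lin_subst t' 0 bs'" using h(4) by (simp add: lin_subst_def)
  ultimately show ?thesis by blast
qed

lemma lsub_reflects_sigma1:
  assumes y: "lsub x vs (RApp (Bag {#RLam (RApp t (rlift 0 s2))#}) s1) y"
  shows "\<exists>w W. lsub x vs (RApp (RApp (Bag {#RLam t#}) s1) s2) w \<and> rstep w W \<and> y \<in> W"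
proof -
  obtain A' B w1 y1 where h: "vs = A' + B" "lsub x A' (Bag {#RLam (RApp t (rlift 0 s2))#}) w1"
    "lsub x B s1 y1" "y = RApp w1 y1"
    using y unfolding lsub_App_iff by blast
  obtain y0 where y0: "w1 = Bag {#RLam y0#}"
    "lsub (Suc x) (image_mset (rlift_v 0) A') (RApp t (rlift 0 s2)) y0"
    using lsub_Bag_LamD[OF h(2)] by blast
  obtain P Q t' z where h2: "image_mset (rlift_v 0) A' = P + Q" "lsub (Suc x) P t t'"
    "lsub (Suc x) Q (rlift 0 s2) z" "y0 = RApp t' z"
    using y0(2) unfolding lsub_App_iff by blast
  obtain A1 C1 where AC: "A' = A1 + C1" "P = image_mset (rlift_v 0) A1"
    "Q = image_mset (rlift_v 0) C1"
    using image_mset_eq_plusD[OF h2(1)] by blast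
  obtain s2' where s2': "lsub x C1 s2 s2'" "z = rlift 0 s2'"
    using lsub_rlift_belowD(1)[of 0 x C1 s2 z] h2(3) AC(3) by auto
  have "lsub x vs (RApp (RApp (Bag {#RLam t#}) s1) s2) (RApp (RApp (Bag {#RLam t'#}) y1) s2')"
    using ls_app[OF ls_app[OF lsub_Bag_Lam[OF h2(2)[unfolded AC(2)]] h(3)] s2'(1)] h(1) AC(1)
      by (simp add: ac_simps)
  moreover have "rstep (RApp (RApp (Bag {#RLam t'#}) y1) s2') {RApp (Bag {#RLam (RApp t' (rlift 0 s2'))#}) y1}"
    by (rule rstep_rstep_v.sigma1_r)
  moreover have "y = RApp (Bag {#RLam (RApp t' (rlift 0 s2'))#}) y1"
    using h(4) y0(1) h2(4) s2'(2) by simp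
  ultimately show ?thesis by blast
qed

lemma lsub_reflects_sigma3:
  assumes y: "lsub x vs (RApp (Bag {#RLam (RApp (Bag {#rlift_v 0 v#}) t)#}) s) y"
  shows "\<exists>w W. lsub x vs (RApp (Bag {#v#}) (RApp (Bag {#RLam t#}) s)) w \<and> rstep w W \<and> y \<in> W"
proof -
  obtain A' C w1 s' where h: "vs = A' + C"
    "lsub x A' (Bag {#RLam (RApp (Bag {#rlift_v 0 v#}) t)#}) w1" "lsub x C s s'" "y = RApp w1 s'"
    using y unfolding lsub_App_iff by blast
  obtain y0 where y0: "w1 = Bag {#RLam y0#}"
    "lsub (Suc x) (image_mset (rlift_v 0) A') (RApp (Bag {#rlift_v 0 v#}) t) y0"
    using lsub_Bag_LamD[OF h(2)] by blast
  obtain P Q zb t' where h2: "image_mset (rlift_v 0) A' = P + Q"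
    "lsub (Suc x) P (Bag {#rlift_v 0 v#}) zb" "lsub (Suc x) Q t t'" "y0 = RApp zb t'"
    using y0(2) unfolding lsub_App_iff by blast
  obtain z where z: "zb = Bag {#z#}" "lsub_v (Suc x) P (rlift_v 0 v) z"
    using lsub_Bag_singleD[OF h2(2)] by blast
  obtain A1 B1 where AB: "A' = A1 + B1" "P = image_mset (rlift_v 0) A1"
    "Q = image_mset (rlift_v 0) B1"
    using image_mset_eq_plusD[OF h2(1)] by blast
  obtain v' where v': "lsub_v x A1 v v'" "z = rlift_v 0 v'"
    using lsub_rlift_belowD(2)[of 0 x A1 v z] z(2) AB(2) by auto
  have "lsub x vs (RApp (Bag {#v#}) (RApp (Bag {#RLam t#}) s)) (RApp (Bag {#v'#}) (RApp (Bag {#RLam t'#}) s'))"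
    using ls_app[OF lsub_Bag_single[OF v'(1)] ls_app[OF lsub_Bag_Lam[OF h2(3)[unfolded AB(3)]] h(3)]] h(1) AB(1) by (simp add: ac_simps)
  moreover have "rstep (RApp (Bag {#v'#}) (RApp (Bag {#RLam t'#}) s')) {RApp (Bag {#RLam (RApp (Bag {#rlift_v 0 v'#}) t')#}) s'}"
    by (rule rstep_rstep_v.sigma3_r)
  moreover have "y = RApp (Bag {#RLam (RApp (Bag {#rlift_v 0 v'#}) t')#}) s'"
    using h(4) y0(1) h2(4) z(1) v'(2) by simp
  ultimately show ?thesis by blast
qed

lemma lsub_reflects_rstep: "rstep u U \<Longrightarrow> (\<And>x vs u' y. u' \<in> U \<Longrightarrow> lsub x vs u' y \<Longrightarrow>
  \<exists>w W. lsub x vs u w \<and> rstep w W \<and> y \<in> W)"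
  "rstep_v v V \<Longrightarrow> (\<And>x vs v' y. v' \<in> V \<Longrightarrow> lsub_v x vs v' y \<Longrightarrow>
    \<exists>w W. lsub_v x vs v w \<and> rstep_v w W \<and> y \<in> W)"
proof (induction rule: rstep_rstep_v.inducts)
  case (beta_r t bs)
  then show ?case using lsub_reflects_beta by (simp add: lin_subst_def)
next
  case (zero_r m t)
  then show ?case by simp
next
  case (sigma1_r t s1 s2)
  then show ?case using lsub_reflects_sigma1 by simp
next
  case (sigma3_r v t s)
  then show ?case using lsub_reflects_sigma3 by simp
next
  case (ctx_appL_r s S t)
  then obtain s' where s': "s' \<in> S" "u' = RApp s' t" by auto
  obtain A B y1 y2 where h: "vs = A + B" "lsub x A s' y1" "lsub x B t y2" "y = RApp y1 y2"
    using ctx_appL_r.prems(2)[unfolded s'(2)] unfolding lsub_App_iff by blast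
  obtain w1 W1 where W1: "lsub x A s w1" "rstep w1 W1" "y1 \<in> W1"
    using ctx_appL_r.IH[OF s'(1) h(2)] by blast
  have "lsub x vs (RApp s t) (RApp w1 y2)" using ls_app[OF W1(1) h(3)] h(1) by simp
  moreover have "rstep (RApp w1 y2) ((\<lambda>a. RApp a y2) ` W1)"
    using W1(2) by (rule rstep_rstep_v.ctx_appL_r)
  ultimately show ?case using W1(3) h(4) by blast
next
  case (ctx_appR_r t T s)
  then obtain t' where t': "t' \<in> T" "u' = RApp s t'" by auto
  obtain A B y1 y2 where h: "vs = A + B" "lsub x A s y1" "lsub x B t' y2" "y = RApp y1 y2"
    using ctx_appR_r.prems(2)[unfolded t'(2)] unfolding lsub_App_iff by blast
  obtain w2 W2 where W2: "lsub x B t w2" "rstep w2 W2" "y2 \<in> W2"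
    using ctx_appR_r.IH[OF t'(1) h(3)] by blast
  have "lsub x vs (RApp s t) (RApp y1 w2)" using ls_app[OF h(2) W2(1)] h(1) by simp
  moreover have "rstep (RApp y1 w2) (RApp y1 ` W2)" using W2(2) by (rule rstep_rstep_v.ctx_appR_r)
  ultimately show ?case using W2(3) h(4) by blast
next
  case (ctx_bag_r u U m)
  then obtain u1 where u1: "u1 \<in> U" "u' = Bag (add_mset u1 m)" by auto
  obtain A B z m' where h: "vs = A + B" "lsub_v x A u1 z" "lsub x B (Bag m) (Bag m')"
    "y = Bag (add_mset z m')"
    using lsub_Bag_add_msetD[of x vs u1 m y] ctx_bag_r.prems(2) u1(2) by blast
  obtain w1 W1 where W1: "lsub_v x A u w1" "rstep_v w1 W1" "z \<in> W1"
    using ctx_bag_r.IH[OF u1(1) h(2)] by blast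
  have "lsub x vs (Bag (add_mset u m)) (Bag (add_mset w1 m'))"
    using ls_bag[OF W1(1) h(3)] h(1) by simp
  moreover have "rstep (Bag (add_mset w1 m')) ((\<lambda>z. Bag (add_mset z m')) ` W1)"
    using W1(2) by (rule rstep_rstep_v.ctx_bag_r)
  ultimately show ?case using W1(3) h(4) by blast
next
  case (ctx_lam_r t T)
  then obtain t' where t': "t' \<in> T" "v' = RLam t'" by auto
  obtain y0 where h: "y = RLam y0" "lsub (Suc x) (image_mset (rlift_v 0) vs) t' y0"
    using ctx_lam_r.prems(2)[unfolded t'(2)] unfolding lsub_Lam_iff by blast
  obtain w0 W0 where W0: "lsub (Suc x) (image_mset (rlift_v 0) vs) t w0" "rstep w0 W0" "y0 \<in> W0"
    using ctx_lam_r.IH[OF t'(1) h(2)] by blast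
  have "lsub_v x vs (RLam t) (RLam w0)" using W0(1) by (rule ls_lam)
  moreover have "rstep_v (RLam w0) (RLam ` W0)" using W0(2) by (rule rstep_rstep_v.ctx_lam_r)
  ultimately show ?case using W0(3) h(1) by blast
qed

lemma lsub_simulates_rstep_arg: "lsub x M t w \<Longrightarrow> (\<And>v V' VS. M = add_mset v VS \<Longrightarrow> rstep_v v V' \<Longrightarrow>
     \<exists>W. rstep w W \<and> (\<forall>w'\<in>W. \<exists>v'\<in>V'. lsub x (add_mset v' VS) t w'))"
  "lsub_v x M u wv \<Longrightarrow> (\<And>v V' VS. M = add_mset v VS \<Longrightarrow> rstep_v v V' \<Longrightarrow>
     \<exists>W. rstep_v wv W \<and> (\<forall>w'\<in>W. \<exists>v'\<in>V'. lsub_v x (add_mset v' VS) u w'))"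
proof (induction rule: lsub_lsub_v.inducts)
  case (ls_app x A s s' B t t')
  from plus_eq_add_mset_cases[OF ls_app.prems(1)] show ?case
  proof
    assume "\<exists>A'. A = add_mset v A' \<and> VS = A' + B"
    then obtain A' where A': "A = add_mset v A'" "VS = A' + B" by blast
    obtain W1 where W1: "rstep s' W1" "\<forall>w'\<in>W1. \<exists>v'\<in>V'. lsub x (add_mset v' A') s w'"
      using ls_app.IH(1)[OF A'(1) ls_app.prems(2)] by blast
    have "rstep (RApp s' t') ((\<lambda>a. RApp a t') ` W1)" using W1(1) by (rule ctx_appL_r)
    moreover have "\<forall>w'\<in>(\<lambda>a. RApp a t') ` W1. \<exists>v'\<in>V'. lsub x (add_mset v' VS) (RApp s t) w'"
      using W1(2) lsub_lsub_v.ls_app[OF _ ls_app.hyps(2)] A'(2) by fastforce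
    ultimately show ?case by blast
  next
    assume "\<exists>B'. B = add_mset v B' \<and> VS = A + B'"
    then obtain B' where B': "B = add_mset v B'" "VS = A + B'" by blast
    obtain W1 where W1: "rstep t' W1" "\<forall>w'\<in>W1. \<exists>v'\<in>V'. lsub x (add_mset v' B') t w'"
      using ls_app.IH(2)[OF B'(1) ls_app.prems(2)] by blast
    have "rstep (RApp s' t') (RApp s' ` W1)" using W1(1) by (rule ctx_appR_r)
    moreover have "\<forall>w'\<in>RApp s' ` W1. \<exists>v'\<in>V'. lsub x (add_mset v' VS) (RApp s t) w'"
      using W1(2) lsub_lsub_v.ls_app[OF ls_app.hyps(1)] B'(2) by fastforce
    ultimately show ?case by blast
  qed
next
  case (ls_nil x)
  then show ?case by simp
next
  case (ls_bag x A u u' B m m')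
  from plus_eq_add_mset_cases[OF ls_bag.prems(1)] show ?case
  proof
    assume "\<exists>A'. A = add_mset v A' \<and> VS = A' + B"
    then obtain A' where A': "A = add_mset v A'" "VS = A' + B" by blast
    obtain W1 where W1: "rstep_v u' W1" "\<forall>w'\<in>W1. \<exists>v'\<in>V'. lsub_v x (add_mset v' A') u w'"
      using ls_bag.IH(1)[OF A'(1) ls_bag.prems(2)] by blast
    have "rstep (Bag (add_mset u' m')) ((\<lambda>z. Bag (add_mset z m')) ` W1)"
      using W1(1) by (rule ctx_bag_r)
    moreover have "\<forall>w'\<in>(\<lambda>z. Bag (add_mset z m')) ` W1. \<exists>v'\<in>V'. lsub x (add_mset v' VS) (Bag (add_mset u m)) w'"
      using W1(2) lsub_lsub_v.ls_bag[OF _ ls_bag.hyps(2)] A'(2) by fastforce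
    ultimately show ?case by blast
  next
    assume "\<exists>B'. B = add_mset v B' \<and> VS = A + B'"
    then obtain B' where B': "B = add_mset v B'" "VS = A + B'" by blast
    obtain W1 where W1: "rstep (Bag m') W1" "\<forall>w'\<in>W1. \<exists>v'\<in>V'. lsub x (add_mset v' B') (Bag m) w'"
      using ls_bag.IH(2)[OF B'(1) ls_bag.prems(2)] by blast
    have "rstep (Bag (add_mset u' m')) (bag_insert u' ` W1)" using W1(1) by (rule rstep_Bag_insert)
    moreover have "\<forall>w'\<in>bag_insert u' ` W1. \<exists>v'\<in>V'. lsub x (add_mset v' VS) (Bag (add_mset u m)) w'"
    proof
      fix w' assume "w' \<in> bag_insert u' ` W1"
      then obtain a where a: "a \<in> W1" "w' = bag_insert u' a" by blast
      then obtain v' where v': "v' \<in> V'" "lsub x (add_mset v' B') (Bag m) a" using W1(2) by blast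
      obtain ma where ma: "a = Bag ma" using lsub_BagD[OF v'(2)] by blast
      show "\<exists>v'\<in>V'. lsub x (add_mset v' VS) (Bag (add_mset u m)) w'"
        using lsub_lsub_v.ls_bag[OF ls_bag.hyps(1) v'(2)[unfolded ma]] a ma v'(1) B'(2) by fastforce
    qed
    ultimately show ?case by blast
  qed
next
  case (ls_hit x v0)
  then have "v0 = v" "VS = {#}" by (auto simp: add_mset_eq_single)
  then show ?case using ls_hit.prems(2) lsub_lsub_v.ls_hit by blast
next
  case (ls_var y x)
  then show ?case by simp
next
  case (ls_lam x A t t')
  have M: "image_mset (rlift_v 0) A = add_mset (rlift_v 0 v) (image_mset (rlift_v 0) VS)"
    using ls_lam.prems(1) by simp
  obtain W0 where W0: "rstep t' W0"
    "\<forall>w'\<in>W0. \<exists>v'\<in>rlift_v 0 ` V'. lsub (Suc x) (add_mset v' (image_mset (rlift_v 0) VS)) t w'"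
    using ls_lam.IH[OF M rstep_rlift(2)[OF ls_lam.prems(2)]] by blast
  have "rstep_v (RLam t') (RLam ` W0)" using W0(1) by (rule ctx_lam_r)
  moreover have "\<forall>w'\<in>RLam ` W0. \<exists>v'\<in>V'. lsub_v x (add_mset v' VS) (RLam t) w'"
  proof
    fix w' assume "w' \<in> RLam ` W0"
    then obtain a where a: "a \<in> W0" "w' = RLam a" by blast
    then obtain v' where "v' \<in> V'" "lsub (Suc x) (add_mset (rlift_v 0 v') (image_mset (rlift_v 0) VS)) t a" using W0(2) by blast
    then show "\<exists>v'\<in>V'. lsub_v x (add_mset v' VS) (RLam t) w'"
      using a lsub_lsub_v.ls_lam[of x "add_mset v' VS" t a] by auto
  qed
  ultimately show ?case by blast
qed

lemma lsub_reflects_rstep_arg: "lsub x M t y \<Longrightarrow> (\<And>v v' V' VS. M = add_mset v' VS \<Longrightarrow>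
  rstep_v v V' \<Longrightarrow> v' \<in> V' \<Longrightarrow>
     \<exists>w W. lsub x (add_mset v VS) t w \<and> rstep w W \<and> y \<in> W)"
  "lsub_v x M u yv \<Longrightarrow> (\<And>v v' V' VS. M = add_mset v' VS \<Longrightarrow> rstep_v v V' \<Longrightarrow> v' \<in> V' \<Longrightarrow>
     \<exists>w W. lsub_v x (add_mset v VS) u w \<and> rstep_v w W \<and> yv \<in> W)"
proof (induction rule: lsub_lsub_v.inducts)
  case (ls_app x A s s' B t t')
  from plus_eq_add_mset_cases[OF ls_app.prems(1)] show ?case
  proof
    assume "\<exists>A'. A = add_mset v' A' \<and> VS = A' + B"
    then obtain A' where A': "A = add_mset v' A'" "VS = A' + B" by blast
    obtain w W where W: "lsub x (add_mset v A') s w" "rstep w W" "s' \<in> W"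
      using ls_app.IH(1)[OF A'(1) ls_app.prems(2,3)] by blast
    have "lsub x (add_mset v VS) (RApp s t) (RApp w t')"
      using lsub_lsub_v.ls_app[OF W(1) ls_app.hyps(2)] A'(2) by simp
    moreover have "rstep (RApp w t') ((\<lambda>a. RApp a t') ` W)" using W(2) by (rule ctx_appL_r)
    ultimately show ?case using W(3) by blast
  next
    assume "\<exists>B'. B = add_mset v' B' \<and> VS = A + B'"
    then obtain B' where B': "B = add_mset v' B'" "VS = A + B'" by blast
    obtain w W where W: "lsub x (add_mset v B') t w" "rstep w W" "t' \<in> W"
      using ls_app.IH(2)[OF B'(1) ls_app.prems(2,3)] by blast
    have "lsub x (add_mset v VS) (RApp s t) (RApp s' w)"
      using lsub_lsub_v.ls_app[OF ls_app.hyps(1) W(1)] B'(2) by simp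
    moreover have "rstep (RApp s' w) (RApp s' ` W)" using W(2) by (rule ctx_appR_r)
    ultimately show ?case using W(3) by blast
  qed
next
  case (ls_nil x)
  then show ?case by simp
next
  case (ls_bag x A u u' B m m')
  from plus_eq_add_mset_cases[OF ls_bag.prems(1)] show ?case
  proof
    assume "\<exists>A'. A = add_mset v' A' \<and> VS = A' + B"
    then obtain A' where A': "A = add_mset v' A'" "VS = A' + B" by blast
    obtain w W where W: "lsub_v x (add_mset v A') u w" "rstep_v w W" "u' \<in> W"
      using ls_bag.IH(1)[OF A'(1) ls_bag.prems(2,3)] by blast
    have "lsub x (add_mset v VS) (Bag (add_mset u m)) (Bag (add_mset w m'))"
      using lsub_lsub_v.ls_bag[OF W(1) ls_bag.hyps(2)] A'(2) by simp
    moreover have "rstep (Bag (add_mset w m')) ((\<lambda>z. Bag (add_mset z m')) ` W)"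
      using W(2) by (rule ctx_bag_r)
    ultimately show ?case using W(3) by blast
  next
    assume "\<exists>B'. B = add_mset v' B' \<and> VS = A + B'"
    then obtain B' where B': "B = add_mset v' B'" "VS = A + B'" by blast
    obtain w W where W: "lsub x (add_mset v B') (Bag m) w" "rstep w W" "Bag m' \<in> W"
      using ls_bag.IH(2)[OF B'(1) ls_bag.prems(2,3)] by blast
    obtain mw where mw: "w = Bag mw" using lsub_BagD[OF W(1)] by blast
    have "lsub x (add_mset v VS) (Bag (add_mset u m)) (Bag (add_mset u' mw))"
      using lsub_lsub_v.ls_bag[OF ls_bag.hyps(1) W(1)[unfolded mw]] B'(2) by simp
    moreover have "rstep (Bag (add_mset u' mw)) (bag_insert u' ` W)"
      using rstep_Bag_insert[OF W(2)[unfolded mw]] .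
    moreover have "Bag (add_mset u' m') \<in> bag_insert u' ` W" using W(3) by force
    ultimately show ?case by blast
  qed
next
  case (ls_hit x v0)
  then have "v0 = v'" "VS = {#}" by (auto simp: add_mset_eq_single)
  then show ?case using ls_hit.prems(2,3) lsub_lsub_v.ls_hit by blast
next
  case (ls_var y x)
  then show ?case by simp
next
  case (ls_lam x A t t')
  have M: "image_mset (rlift_v 0) A = add_mset (rlift_v 0 v') (image_mset (rlift_v 0) VS)"
    using ls_lam.prems(1) by simp
  obtain w W where W: "lsub (Suc x) (add_mset (rlift_v 0 v) (image_mset (rlift_v 0) VS)) t w"
    "rstep w W" "t' \<in> W"
    using ls_lam.IH[OF M rstep_rlift(2)[OF ls_lam.prems(2)]] ls_lam.prems(3) by blast
  have "lsub_v x (add_mset v VS) (RLam t) (RLam w)" using W(1) by (intro lsub_lsub_v.ls_lam) simp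
  moreover have "rstep_v (RLam w) (RLam ` W)" using W(2) by (rule ctx_lam_r)
  ultimately show ?case using W(3) by blast
qed

section \<open>Normal forms\<close>

definition rnf :: "rterm \<Rightarrow> bool" where
  "rnf e \<longleftrightarrow> \<not> (\<exists>E. rstep e E)"

lemma rstep_set_elim: "rstep_set X Y \<Longrightarrow>
  \<exists>e E1 E2. X = insert e E2 \<and> Y = E1 \<union> E2 \<and> rstep e E1 \<and> e \<notin> E2 \<and> finite E2"
  by (erule rstep_set.cases) blast

lemma rstep_set_finite: "rstep_set X Y \<Longrightarrow> finite X \<and> finite Y"
  using rstep_set_elim rstep_finite(1) by fastforce

lemma rstep_set_intro: "e \<in> X \<Longrightarrow> finite X \<Longrightarrow> rstep e E \<Longrightarrow> rstep_set X (E \<union> (X - {e}))"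
proof -
  assume a: "e \<in> X" "finite X" "rstep e E"
  have "rstep_set (insert e (X - {e})) (E \<union> (X - {e}))" using a by (intro rstep_set.intros) auto
  then show ?thesis using a(1) by (simp add: insert_absorb)
qed

lemma r_normal_iff: "finite E \<Longrightarrow> r_normal E \<longleftrightarrow> (\<forall>e\<in>E. rnf e)"
proof
  assume "finite E" "r_normal E"
  then show "\<forall>e\<in>E. rnf e" unfolding rnf_def r_normal_def using rstep_set_intro by blast
next
  assume "\<forall>e\<in>E. rnf e"
  then show "r_normal E" unfolding r_normal_def rnf_def using rstep_set_elim by blast
qed

lemma rsteps_finite: "rstep_set\<^sup>*\<^sup>* X Y \<Longrightarrow> finite X \<Longrightarrow> finite Y"
  by (induction rule: rtranclp_induct) (auto dest: rstep_set_finite)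

lemma NF_union: "NF (A \<union> B) = NF A \<union> NF B"
  unfolding NF_def by auto

lemma NF_insert: "NF (insert a B) = nf a \<union> NF B"
  unfolding NF_def by auto

lemma NF_empty [simp]: "NF {} = {}"
  unfolding NF_def by auto

lemma NF_image: "NF (f ` A) = (\<Union>x\<in>A. nf (f x))"
  unfolding NF_def by auto

text \<open>Coherence is the induction invariant: all terms turn out to be coherent
  (\<open>coherent_all\<close>), but to show this for \<open>e\<close> one may only assume it for the terms below \<open>e\<close>.\<close>

definition coherent :: "rterm \<Rightarrow> bool" where
  "coherent e \<longleftrightarrow> (\<exists>!F. rstep_set\<^sup>*\<^sup>* {e} F \<and> r_normal F) \<and> (\<forall>E. rstep e E \<longrightarrow> NF E = nf e)"

definition hcoherent :: "rterm \<Rightarrow> bool" where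
  "hcoherent e \<longleftrightarrow> (\<forall>z. z = e \<or> rless z e \<longrightarrow> coherent z)"

lemma coherent_nf: "coherent e \<Longrightarrow> rstep_set\<^sup>*\<^sup>* {e} (nf e) \<and> r_normal (nf e)"
  unfolding coherent_def nf_def by (metis (mono_tags, lifting) theI')

lemma coherent_nf_unique: "coherent e \<Longrightarrow> rstep_set\<^sup>*\<^sup>* {e} F \<Longrightarrow> r_normal F \<Longrightarrow> F = nf e"
  unfolding coherent_def nf_def by (metis (mono_tags, lifting) the_equality)

lemma coherent_rstep: "coherent e \<Longrightarrow> rstep e E \<Longrightarrow> NF E = nf e"
  unfolding coherent_def by blast

lemma coherent_nf_finite: "coherent e \<Longrightarrow> finite (nf e)"
  using coherent_nf rsteps_finite by blast

lemma coherent_rnf: "coherent e \<Longrightarrow> rnf e \<Longrightarrow> nf e = {e}"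
proof -
  assume "coherent e" "rnf e"
  then have "r_normal {e}" using r_normal_iff by auto
  then show ?thesis using coherent_nf_unique[OF \<open>coherent e\<close>] by auto
qed

lemma coherent_nf_rnf: "coherent e \<Longrightarrow> y \<in> nf e \<Longrightarrow> rnf y"
  using coherent_nf coherent_nf_finite r_normal_iff by blast

lemma hcoherent_rless: "hcoherent e \<Longrightarrow> rless z e \<Longrightarrow> hcoherent z"
  unfolding hcoherent_def using rless_trans by blast

lemma hcoherent_coherent: "hcoherent e \<Longrightarrow> coherent e"
  unfolding hcoherent_def by blast

lemma hcoherent_if_below: "(\<And>z. rless z e \<Longrightarrow> coherent z) \<Longrightarrow> rless z e \<Longrightarrow> hcoherent z"
  unfolding hcoherent_def using rless_trans by blast

lemma rstep_hcoherent: "(\<And>z. rless z e \<Longrightarrow> coherent z) \<Longrightarrow> rstep e E \<Longrightarrow> \<forall>x\<in>E. hcoherent x"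
  using hcoherent_if_below rstep_rless(1) by blast

lemma rstep_set_hcoherent: "rstep_set X Y \<Longrightarrow> \<forall>x\<in>X. hcoherent x \<Longrightarrow> \<forall>y\<in>Y. hcoherent y"
proof -
  assume "rstep_set X Y" "\<forall>x\<in>X. hcoherent x"
  then obtain e E1 E2 where h: "X = insert e E2" "Y = E1 \<union> E2" "rstep e E1"
    by (auto elim: rstep_set.cases)
  then show ?thesis using \<open>\<forall>x\<in>X. hcoherent x\<close> rstep_rless(1)[OF h(3)] hcoherent_rless by auto
qed

lemma rsteps_hcoherent: "rstep_set\<^sup>*\<^sup>* X Y \<Longrightarrow> \<forall>x\<in>X. hcoherent x \<Longrightarrow> \<forall>y\<in>Y. hcoherent y"
  by (induction rule: rtranclp_induct) (auto dest: rstep_set_hcoherent)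

lemma NF_rnf: "\<forall>x\<in>X. hcoherent x \<Longrightarrow> \<forall>x\<in>X. rnf x \<Longrightarrow> NF X = X"
  unfolding NF_def using coherent_rnf hcoherent_coherent by auto

lemma rsteps_normal_eq_NF: "rstep_set\<^sup>*\<^sup>* X F \<Longrightarrow> finite X \<Longrightarrow> \<forall>x\<in>X. hcoherent x \<Longrightarrow>
  r_normal F \<Longrightarrow> F = NF X"
proof (induction rule: converse_rtranclp_induct)
  case base
  then show ?case using NF_rnf r_normal_iff by auto
next
  case (step X X')
  obtain e E1 E2 where h: "X = insert e E2" "X' = E1 \<union> E2" "rstep e E1" "e \<notin> E2" "finite E2"
    using rstep_set_elim[OF step.hyps(1)] by blast
  have "finite X'" using rstep_set_finite step.hyps(1) by blast
  moreover have "\<forall>x\<in>X'. hcoherent x" using rstep_set_hcoherent step.hyps(1) step.prems(2) by blast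
  ultimately have "F = NF X'" using step.IH step.prems(3) by blast
  also have "\<dots> = NF E1 \<union> NF E2" using h(2) NF_union by simp
  also have "\<dots> = nf e \<union> NF E2" using coherent_rstep[OF hcoherent_coherent h(3)] step.prems(2) h(1) by simp
  also have "\<dots> = NF X" using h(1) NF_insert by simp
  finally show ?case .
qed

lemma mult_mset_set_replace:
  assumes "e \<notin> E2" "finite E2" "finite E1" "\<forall>x\<in>E1. rless x e"
  shows "(mset_set (E1 \<union> E2), mset_set (insert e E2)) \<in> mult {(a, b). rless a b}"
proof -
  have "mset_set (E1 \<union> E2) = mset_set E2 + mset_set (E1 - E2)"
    using assms by (subst mset_set_Union[symmetric]) (auto intro: arg_cong[where f=mset_set])
  moreover have "mset_set (insert e E2) = mset_set E2 + {#e#}" using assms by simp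
  moreover have "(mset_set E2 + mset_set (E1 - E2), mset_set E2 + {#e#}) \<in> mult {(a, b). rless a b}"
    using assms by (intro one_step_implies_mult) auto
  ultimately show ?thesis by simp
qed

lemma rsteps_to_NF: "finite X \<Longrightarrow> \<forall>x\<in>X. hcoherent x \<Longrightarrow> rstep_set\<^sup>*\<^sup>* X (NF X)"
proof (induction "mset_set X" arbitrary: X rule: wf_induct_rule[OF wf_mult[OF wf_rless]])
  case 1
  show ?case
  proof (cases "\<forall>x\<in>X. rnf x")
    case True
    then show ?thesis using NF_rnf 1 by simp
  next
    case False
    then obtain e E1 where e: "e \<in> X" "rstep e E1" unfolding rnf_def by blast
    let ?X' = "E1 \<union> (X - {e})"
    have step: "rstep_set X ?X'" using rstep_set_intro e 1 by blast
    have fin: "finite E1" using rstep_finite(1) e(2) .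
    have "(mset_set ?X', mset_set (insert e (X - {e}))) \<in> mult {(a, b). rless a b}"
      using mult_mset_set_replace[of e "X - {e}" E1] fin 1(2) rstep_rless(1)[OF e(2)] by auto
    then have lt: "(mset_set ?X', mset_set X) \<in> mult {(a, b). rless a b}"
      using e(1) by (simp add: insert_absorb)
    have "finite ?X'" using fin 1(2) by simp
    moreover have "\<forall>x\<in>?X'. hcoherent x" using rstep_set_hcoherent[OF step] 1(3) by blast
    ultimately have "rstep_set\<^sup>*\<^sup>* ?X' (NF ?X')" using 1(1)[OF lt] by blast
    moreover have "NF ?X' = NF X"
    proof -
      have "NF ?X' = NF E1 \<union> NF (X - {e})" by (rule NF_union)
      also have "\<dots> = nf e \<union> NF (X - {e})"
        using coherent_rstep[OF hcoherent_coherent e(2)] 1(3) e(1) by simp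
      also have "\<dots> = NF X" using NF_insert[of e "X - {e}"] e(1) by (simp add: insert_absorb)
      finally show ?thesis .
    qed
    ultimately show ?thesis using step by (metis converse_rtranclp_into_rtranclp)
  qed
qed

lemma r_normal_NF: "finite X \<Longrightarrow> \<forall>x\<in>X. hcoherent x \<Longrightarrow> r_normal (NF X)"
proof -
  assume a: "finite X" "\<forall>x\<in>X. hcoherent x"
  have "finite (NF X)" unfolding NF_def using a coherent_nf_finite hcoherent_coherent by auto
  moreover have "\<forall>y\<in>NF X. rnf y" unfolding NF_def using a coherent_nf_rnf hcoherent_coherent by auto
  ultimately show ?thesis using r_normal_iff by blast
qed

lemma rsteps_NF_eq: "rstep_set\<^sup>*\<^sup>* X Y \<Longrightarrow> finite X \<Longrightarrow> \<forall>x\<in>X. hcoherent x \<Longrightarrow> NF X = NF Y"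
proof -
  assume a: "rstep_set\<^sup>*\<^sup>* X Y" "finite X" "\<forall>x\<in>X. hcoherent x"
  have fY: "finite Y" using rsteps_finite a by blast
  have hY: "\<forall>y\<in>Y. hcoherent y" using rsteps_hcoherent a by blast
  have "rstep_set\<^sup>*\<^sup>* Y (NF Y)" using rsteps_to_NF fY hY by blast
  then have "rstep_set\<^sup>*\<^sup>* X (NF Y)" using a(1) by simp
  moreover have "r_normal (NF Y)" using r_normal_NF fY hY by blast
  ultimately show ?thesis using rsteps_normal_eq_NF a by metis
qed

lemma rsteps_singleton_normalD:
  assumes IH: "\<And>z. rless z e \<Longrightarrow> coherent z"
    and F: "rstep_set\<^sup>*\<^sup>* {e} F" "r_normal F" and "\<not> rnf e"
  shows "\<exists>E. rstep e E \<and> F = NF E"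
proof -
  obtain E where E: "rstep e E" using \<open>\<not> rnf e\<close> unfolding rnf_def by blast
  have "{e} \<noteq> F" using F(2) E rstep_set_intro[of e "{e}" E] unfolding r_normal_def by auto
  then obtain X where X: "rstep_set {e} X" "rstep_set\<^sup>*\<^sup>* X F"
    using F(1) by (metis converse_rtranclpE)
  obtain a A1 A2 where h: "{e} = insert a A2" "X = A1 \<union> A2" "rstep a A1" "a \<notin> A2"
    using rstep_set_elim[OF X(1)] by blast
  then have A1: "rstep e A1" "X = A1" by auto
  have "F = NF A1"
    using rsteps_normal_eq_NF[OF X(2)[unfolded A1(2)] rstep_finite(1)[OF A1(1)] rstep_hcoherent[OF IH A1(1)] F(2)] .
  then show ?thesis using A1(1) by blast
qed

lemma coherent_if_NF_joinable:
  assumes IH: "\<And>z. rless z e \<Longrightarrow> coherent z"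
    and joinable: "\<And>E1 E2. rstep e E1 \<Longrightarrow> rstep e E2 \<Longrightarrow> NF E1 = NF E2"
  shows "coherent e"
proof (cases "rnf e")
  case True
  then have nrm: "r_normal {e}" using r_normal_iff by auto
  have "rstep_set\<^sup>*\<^sup>* {e} F \<Longrightarrow> F = {e}" for F
    using nrm unfolding r_normal_def by (metis converse_rtranclpE)
  then have "\<exists>!F. rstep_set\<^sup>*\<^sup>* {e} F \<and> r_normal F" using nrm by blast
  then show ?thesis using True unfolding coherent_def rnf_def by blast
next
  case False
  then obtain E1 where E1: "rstep e E1" unfolding rnf_def by blast
  have hE1: "\<forall>x\<in>E1. hcoherent x" using rstep_hcoherent[OF IH E1] .
  have fE1: "finite E1" using rstep_finite(1)[OF E1] .
  have "rstep_set {e} E1" using rstep_set_intro[of e "{e}" E1] E1 by simp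
  then have ex: "rstep_set\<^sup>*\<^sup>* {e} (NF E1) \<and> r_normal (NF E1)"
    using rsteps_to_NF[OF fE1 hE1] r_normal_NF[OF fE1 hE1] by simp
  have uniq: "F = NF E1" if "rstep_set\<^sup>*\<^sup>* {e} F" "r_normal F" for F
    using rsteps_singleton_normalD[OF IH that False] joinable[OF _ E1] by metis
  have "nf e = NF E1" using uniq ex unfolding nf_def by (metis (mono_tags, lifting) the_equality)
  then show ?thesis using ex uniq joinable[OF _ E1] unfolding coherent_def by auto
qed

section \<open>Normal forms in contexts\<close>

definition rcontext :: "(rterm \<Rightarrow> rterm) \<Rightarrow> rterm set \<Rightarrow> bool" where
  "rcontext f D \<longleftrightarrow> inj_on f D \<and> (\<forall>x\<in>D. \<forall>X. rstep x X \<longrightarrow> X \<subseteq> D \<and> rstep (f x) (f ` X))"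

lemma rcontext_rsteps: "rstep_set\<^sup>*\<^sup>* X Y \<Longrightarrow> rcontext f D \<Longrightarrow> X \<subseteq> D \<Longrightarrow>
  rstep_set\<^sup>*\<^sup>* (f ` X) (f ` Y) \<and> Y \<subseteq> D"
proof (induction rule: rtranclp_induct)
  case base
  then show ?case by simp
next
  case (step Y Z)
  then have IH: "rstep_set\<^sup>*\<^sup>* (f ` X) (f ` Y)" "Y \<subseteq> D" by auto
  obtain e E1 E2 where h: "Y = insert e E2" "Z = E1 \<union> E2" "rstep e E1" "e \<notin> E2" "finite E2"
    using rstep_set_elim[OF step.hyps(2)] by blast
  have eD: "e \<in> D" "E2 \<subseteq> D" using IH(2) h(1) by auto
  have E1D: "E1 \<subseteq> D" "rstep (f e) (f ` E1)"
    using step.prems(1) eD h(3) unfolding rcontext_def by auto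
  have "f e \<notin> f ` E2" using step.prems(1) eD h(4) unfolding rcontext_def inj_on_def by blast
  then have "rstep_set (insert (f e) (f ` E2)) (f ` E1 \<union> f ` E2)"
    using E1D(2) h(5) by (intro rstep_set.intros) auto
  then have "rstep_set (f ` Y) (f ` Z)" using h(1,2) by (simp add: image_Un)
  then show ?case using IH E1D eD h(2) by auto
qed

lemma nf_rcontext: "rcontext f D \<Longrightarrow> x \<in> D \<Longrightarrow> coherent x \<Longrightarrow> hcoherent (f x) \<Longrightarrow>
  nf (f x) = NF (f ` nf x) \<and> (\<forall>y\<in>f ` nf x. hcoherent y)"
proof -
  assume a: "rcontext f D" "x \<in> D" "coherent x" "hcoherent (f x)"
  have "rstep_set\<^sup>*\<^sup>* {x} (nf x)" using coherent_nf[OF a(3)] by blast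
  from rcontext_rsteps[OF this a(1)] a(2) have r: "rstep_set\<^sup>*\<^sup>* {f x} (f ` nf x)" by simp
  have "NF {f x} = NF (f ` nf x)" using rsteps_NF_eq[OF r] a(4) by simp
  moreover have "\<forall>y\<in>f ` nf x. hcoherent y" using rsteps_hcoherent[OF r] a(4) by simp
  ultimately show ?thesis by (simp add: NF_def)
qed

lemma rcontext_AppL: "rcontext (\<lambda>s. RApp s t) UNIV"
  unfolding rcontext_def inj_on_def by (auto intro: ctx_appL_r)

lemma rcontext_AppR: "rcontext (RApp s) UNIV"
  unfolding rcontext_def inj_on_def by (auto intro: ctx_appR_r)

lemma rcontext_Bag_Lam: "rcontext (\<lambda>x. Bag (add_mset (RLam x) m)) UNIV"
  unfolding rcontext_def inj_on_def by (auto intro: rstep_Bag_Lam)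

lemma rcontext_bag_insert: "rcontext (bag_insert w) (range Bag)"
  unfolding rcontext_def
proof
  show "inj_on (bag_insert w) (range Bag)" unfolding inj_on_def by auto
next
  show "\<forall>x\<in>range Bag. \<forall>X. rstep x X \<longrightarrow> X \<subseteq> range Bag \<and> rstep (bag_insert w x) (bag_insert w ` X)"
  proof (intro ballI allI impI)
    fix x X assume "x \<in> range Bag" "rstep x X"
    then obtain m where m: "x = Bag m" by blast
    from rstep_BagD[OF \<open>rstep x X\<close>[unfolded m]] have "X \<subseteq> range Bag" by auto
    then show "X \<subseteq> range Bag \<and> rstep (bag_insert w x) (bag_insert w ` X)"
      using rstep_Bag_insert \<open>rstep x X\<close> m by simp
  qed
qed

definition nf_parts :: "rterm \<Rightarrow> rterm \<Rightarrow> rterm set" where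
  "nf_parts s t = (\<Union>s'\<in>nf s. \<Union>t'\<in>nf t. nf (RApp s' t'))"

lemma nf_App: "hcoherent (RApp s t) \<Longrightarrow> nf (RApp s t) = nf_parts s t"
proof -
  assume h: "hcoherent (RApp s t)"
  have gs: "coherent s" using h rless_AppL hcoherent_def by blast
  have gt: "coherent t" using h rless_AppR hcoherent_def by blast
  from nf_rcontext[OF rcontext_AppL _ gs, of t] h have 1: "nf (RApp s t) =
    NF ((\<lambda>s. RApp s t) ` nf s)" "\<forall>y\<in>(\<lambda>s. RApp s t) ` nf s. hcoherent y"
    by auto
  have "nf (RApp s' t) = (\<Union>t'\<in>nf t. nf (RApp s' t'))" if "s' \<in> nf s" for s'
  proof -
    have "hcoherent (RApp s' t)" using 1(2) that by auto
    from nf_rcontext[OF rcontext_AppR _ gt this] show ?thesis by (simp add: NF_image)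
  qed
  then show ?thesis using 1(1) unfolding nf_parts_def NF_image by auto
qed

lemma NF_AppL: "coherent s \<Longrightarrow> rstep s S \<Longrightarrow> \<forall>s'\<in>S. hcoherent (RApp s' t) \<Longrightarrow>
  NF ((\<lambda>s'. RApp s' t) ` S) = nf_parts s t"
proof -
  assume a: "coherent s" "rstep s S" "\<forall>s'\<in>S. hcoherent (RApp s' t)"
  have "NF ((\<lambda>s'. RApp s' t) ` S) = (\<Union>s'\<in>S. nf_parts s' t)"
    using a(3) nf_App by (simp add: NF_image)
  also have "\<dots> = (\<Union>s''\<in>NF S. \<Union>t'\<in>nf t. nf (RApp s'' t'))" unfolding nf_parts_def NF_def by auto
  also have "\<dots> = nf_parts s t" using coherent_rstep[OF a(1,2)] unfolding nf_parts_def by simp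
  finally show ?thesis .
qed

lemma NF_AppR: "coherent t \<Longrightarrow> rstep t T \<Longrightarrow> \<forall>t'\<in>T. hcoherent (RApp s t') \<Longrightarrow>
  NF (RApp s ` T) = nf_parts s t"
proof -
  assume a: "coherent t" "rstep t T" "\<forall>t'\<in>T. hcoherent (RApp s t')"
  have "NF (RApp s ` T) = (\<Union>t'\<in>T. nf_parts s t')" using a(3) nf_App by (simp add: NF_image)
  also have "\<dots> = (\<Union>s'\<in>nf s. \<Union>t''\<in>NF T. nf (RApp s' t''))" unfolding nf_parts_def NF_def by auto
  also have "\<dots> = nf_parts s t" using coherent_rstep[OF a(1,2)] unfolding nf_parts_def by simp
  finally show ?thesis .
qed

fun nf_val :: "rval \<Rightarrow> rval set" where
  "nf_val (RVar x) = {RVar x}"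
| "nf_val (RLam t) = RLam ` nf t"

definition nf_bag :: "rval multiset \<Rightarrow> rterm set" where
  "nf_bag m = {Bag m' | m'. rel_mset (\<lambda>u u'. u' \<in> nf_val u) m m'}"

lemma nf_bag_empty: "nf_bag {#} = {Bag {#}}"
  unfolding nf_bag_def by auto

lemma nf_bag_add_mset: "nf_bag (add_mset u m) = (\<Union>z\<in>nf_val u. bag_insert z ` nf_bag m)"
proof
  show "nf_bag (add_mset u m) \<subseteq> (\<Union>z\<in>nf_val u. bag_insert z ` nf_bag m)"
  proof
    fix x assume "x \<in> nf_bag (add_mset u m)"
    then obtain m' where "x = Bag m'" "rel_mset (\<lambda>u u'. u' \<in> nf_val u) (add_mset u m) m'"
      unfolding nf_bag_def by blast
    from msed_rel_invL[OF this(2)] obtain N1 b where "m' = add_mset b N1" "b \<in> nf_val u"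
      "rel_mset (\<lambda>u u'. u' \<in> nf_val u) m N1" by blast
    then show "x \<in> (\<Union>z\<in>nf_val u. bag_insert z ` nf_bag m)"
      using \<open>x = Bag m'\<close> unfolding nf_bag_def by force
  qed
next
  show "(\<Union>z\<in>nf_val u. bag_insert z ` nf_bag m) \<subseteq> nf_bag (add_mset u m)"
    unfolding nf_bag_def using rel_mset_Plus[of "\<lambda>u u'. u' \<in> nf_val u"] by force
qed

lemma rnf_Bag_iff: "rnf (Bag m) \<longleftrightarrow> (\<forall>t. RLam t \<in># m \<longrightarrow> rnf t)"
proof
  assume "rnf (Bag m)"
  then show "\<forall>t. RLam t \<in># m \<longrightarrow> rnf t"
    unfolding rnf_def by (metis multi_member_split rstep_Bag_Lam)
next
  assume "\<forall>t. RLam t \<in># m \<longrightarrow> rnf t"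
  then show "rnf (Bag m)"
    unfolding rnf_def by (metis rstep_BagD rstep_vD union_single_eq_member)
qed

lemma nf_Bag: "hcoherent (Bag m) \<Longrightarrow> nf (Bag m) = nf_bag m"
proof (induction m)
  case empty
  have "rnf (Bag {#})" by (simp add: rnf_Bag_iff)
  then show ?case using coherent_rnf[OF hcoherent_coherent[OF empty]] nf_bag_empty by simp
next
  case (add u m)
  have hm: "hcoherent (Bag m)" using hcoherent_rless[OF add.prems rless_Bag_add_mset] .
  have IH: "nf (Bag m) = nf_bag m" using add.IH[OF hm] .
  have gm: "coherent (Bag m)" using hcoherent_coherent[OF hm] .
  have key: "nf (Bag (add_mset z m)) =
    bag_insert z ` nf_bag m" if z: "hcoherent (Bag (add_mset z m))" "\<And>t. z = RLam t \<Longrightarrow> rnf t" for z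
  proof -
    from nf_rcontext[OF rcontext_bag_insert _ gm, of z] z(1) have h: "nf (Bag (add_mset z m)) =
      NF (bag_insert z ` nf (Bag m))" "\<forall>y\<in>bag_insert z ` nf (Bag m). hcoherent y"
      by auto
    have "\<forall>y\<in>bag_insert z ` nf (Bag m). rnf y"
    proof
      fix y assume "y \<in> bag_insert z ` nf (Bag m)"
      then obtain b where b: "b \<in> nf (Bag m)" "y = bag_insert z b" by blast
      have "rnf b" using coherent_nf_rnf[OF gm b(1)] .
      moreover obtain mb where "b = Bag mb" using b(1) IH unfolding nf_bag_def by auto
      ultimately show "rnf y" using z(2) b(2) by (auto simp: rnf_Bag_iff)
    qed
    then show ?thesis using h NF_rnf IH by metis
  qed
  show ?case
  proof (cases u)
    case (RVar y)
    then show ?thesis using key[of u] add.prems nf_bag_add_mset by simp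
  next
    case (RLam w)
    have gw: "coherent w" using add.prems rless_Bag_Lam[of w "add_mset u m"] RLam hcoherent_def by auto
    from nf_rcontext[OF rcontext_Bag_Lam _ gw, of m] add.prems RLam
    have h: "nf (Bag (add_mset u m)) = NF ((\<lambda>x. Bag (add_mset (RLam x) m)) ` nf w)"
      "\<forall>y\<in>(\<lambda>x. Bag (add_mset (RLam x) m)) ` nf w. hcoherent y"
      by auto
    have "nf (Bag (add_mset (RLam w') m)) = bag_insert (RLam w') ` nf_bag m" if "w' \<in> nf w" for w'
      using key[of "RLam w'"] h(2) that coherent_nf_rnf[OF gw] by auto
    then have "nf (Bag (add_mset u m)) = (\<Union>w'\<in>nf w. bag_insert (RLam w') ` nf_bag m)"
      using h(1) by (simp add: NF_image)
    then show ?thesis using RLam nf_bag_add_mset by simp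
  qed
qed

lemma NF_rstep_Bag: "rstep (Bag m) E \<Longrightarrow> \<forall>x\<in>E. hcoherent x \<Longrightarrow> (\<And>w. RLam w \<in># m \<Longrightarrow> coherent w) \<Longrightarrow>
  NF E = nf_bag m"
proof -
  assume a: "rstep (Bag m) E" "\<forall>x\<in>E. hcoherent x" "\<And>w. RLam w \<in># m \<Longrightarrow> coherent w"
  from rstep_BagD[OF a(1)] obtain u U m1 where h: "m = add_mset u m1" "rstep_v u U"
    "E = (\<lambda>u'. Bag (add_mset u' m1)) ` U" by blast
  from rstep_vD[OF h(2)] obtain w W where w: "u = RLam w" "rstep w W" "U = RLam ` W" by blast
  have gw: "coherent w" using a(3) h(1) w(1) by simp
  have "NF E = (\<Union>w'\<in>W. nf (Bag (add_mset (RLam w') m1)))"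
    using h(3) w(3) by (simp add: NF_image image_image)
  also have "\<dots> = (\<Union>w'\<in>W. nf_bag (add_mset (RLam w') m1))" using nf_Bag a(2) h(3) w(3) by auto
  also have "\<dots> = (\<Union>w''\<in>NF W. bag_insert (RLam w'') ` nf_bag m1)"
    by (auto simp: nf_bag_add_mset NF_def)
  also have "\<dots> = nf_bag m" using coherent_rstep[OF gw w(2)] h(1) w(1) by (simp add: nf_bag_add_mset)
  finally show ?thesis .
qed

lemma NF_eq_if_rstep_related:
  assumes IH: "\<And>z. rless z e \<Longrightarrow> coherent z"
    and sm: "\<forall>w\<in>X. rless w e"
    and d1: "\<forall>w\<in>X. \<exists>W. rstep w W \<and> W \<subseteq> Y"
    and d2: "\<forall>y\<in>Y. \<exists>w\<in>X. \<exists>W. rstep w W \<and> y \<in> W"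
  shows "NF X = NF Y"
proof
  show "NF X \<subseteq> NF Y"
  proof
    fix x assume "x \<in> NF X"
    then obtain w where w: "w \<in> X" "x \<in> nf w" unfolding NF_def by blast
    then obtain W where W: "rstep w W" "W \<subseteq> Y" using d1 by blast
    have "nf w = NF W" using coherent_rstep[OF IH W(1)] sm w(1) by simp
    then show "x \<in> NF Y" using w(2) W(2) unfolding NF_def by blast
  qed
next
  show "NF Y \<subseteq> NF X"
  proof
    fix x assume "x \<in> NF Y"
    then obtain y where y: "y \<in> Y" "x \<in> nf y" unfolding NF_def by blast
    then obtain w W where W: "w \<in> X" "rstep w W" "y \<in> W" using d2 by blast
    have "nf w = NF W" using coherent_rstep[OF IH W(2)] sm W(1) by simp
    then show "x \<in> NF X" using y(2) W(1,3) unfolding NF_def by blast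
  qed
qed

section \<open>Local confluence\<close>

inductive root_step :: "rterm \<Rightarrow> rterm set \<Rightarrow> bool" where
  root_beta: "root_step (RApp (Bag {#RLam t#}) (Bag vs)) (lin_subst t 0 vs)"
| root_zero: "size m \<noteq> 1 \<Longrightarrow> root_step (RApp (Bag m) t) {}"
| root_sigma1: "root_step (RApp (RApp (Bag {#RLam t#}) s1) s2) {RApp (Bag {#RLam (RApp t (rlift 0 s2))#}) s1}"
| root_sigma3: "root_step (RApp (Bag {#v#}) (RApp (Bag {#RLam t#}) s))
    {RApp (Bag {#RLam (RApp (Bag {#rlift_v 0 v#}) t)#}) s}"

lemma root_step_unique: "root_step e E1 \<Longrightarrow> root_step e E2 \<Longrightarrow> E1 = E2"
  by (auto elim!: root_step.cases)

lemma rstep_App_cases: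
  assumes "rstep (RApp s t) E"
  obtains (root) "root_step (RApp s t) E"
  | (AppL) S where "rstep s S" "E = (\<lambda>s'. RApp s' t) ` S"
  | (AppR) T where "rstep t T" "E = RApp s ` T"
  using assms by (cases rule: rstep.cases) (auto intro: root_step.intros[unfolded One_nat_def])

lemma NF_singleton_rstep:
  assumes IH: "\<And>z. rless z e \<Longrightarrow> coherent z"
  shows "rless x e \<Longrightarrow> rstep x Y \<Longrightarrow> NF {x} = NF Y"
  using coherent_rstep[OF IH] by (simp add: NF_def)

lemma NF_image_rstep_single:
  assumes IH: "\<And>z. rless z e \<Longrightarrow> coherent z"
    and h: "\<forall>a\<in>A. rless (f a) e \<and> rstep (f a) {g a}"
  shows "NF (f ` A) = NF (g ` A)"
proof -
  have "nf (f a) = nf (g a)" if "a \<in> A" for a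
    using coherent_rstep[OF IH, of "f a" "{g a}"] h that by (simp add: NF_def)
  then show ?thesis by (simp add: NF_image)
qed

lemma NF_join_via:
  assumes IH: "\<And>z. rless z e \<Longrightarrow> coherent z"
    and "rless a e" "rstep a (g ` A)" "\<forall>x\<in>A. rless (f x) e \<and> rstep (f x) {g x}"
  shows "NF {a} = NF (f ` A)"
  using NF_singleton_rstep[OF IH assms(2,3)] NF_image_rstep_single[OF IH assms(4)] by simp

lemma lin_subst_App_rlift: "lin_subst (RApp u (rlift 0 s2)) 0 vs =
  (\<lambda>w. RApp w s2) ` lin_subst u 0 vs"
proof
  show "lin_subst (RApp u (rlift 0 s2)) 0 vs \<subseteq> (\<lambda>w. RApp w s2) ` lin_subst u 0 vs"
  proof
    fix z assume "z \<in> lin_subst (RApp u (rlift 0 s2)) 0 vs"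
    then obtain A B w z2 where h: "vs = A + B" "lsub 0 A u w" "lsub 0 B (rlift 0 s2) z2"
      "z = RApp w z2"
      unfolding lin_subst_def lsub_App_iff by blast
    from lsub_rliftD(1)[OF h(3)] have "B = {#}" "z2 = s2" by auto
    then show "z \<in> (\<lambda>w. RApp w s2) ` lin_subst u 0 vs" using h by (auto simp: lin_subst_def)
  qed
next
  show "(\<lambda>w. RApp w s2) ` lin_subst u 0 vs \<subseteq> lin_subst (RApp u (rlift 0 s2)) 0 vs"
  proof
    fix z assume "z \<in> (\<lambda>w. RApp w s2) ` lin_subst u 0 vs"
    then obtain w where w: "lsub 0 vs u w" "z = RApp w s2" by (auto simp: lin_subst_def)
    have "lsub 0 (vs + {#}) (RApp u (rlift 0 s2)) (RApp w s2)"
      using w(1) lsub_rlift(1) by (rule ls_app)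
    then show "z \<in> lin_subst (RApp u (rlift 0 s2)) 0 vs" using w(2) by (simp add: lin_subst_def)
  qed
qed

lemma lin_subst_App_Bag_rlift: "lin_subst (RApp (Bag {#rlift_v 0 v#}) u) 0 vs =
  RApp (Bag {#v#}) ` lin_subst u 0 vs"
proof
  show "lin_subst (RApp (Bag {#rlift_v 0 v#}) u) 0 vs \<subseteq> RApp (Bag {#v#}) ` lin_subst u 0 vs"
  proof
    fix z assume "z \<in> lin_subst (RApp (Bag {#rlift_v 0 v#}) u) 0 vs"
    then obtain A B zb w where h: "vs = A + B" "lsub 0 A (Bag {#rlift_v 0 v#}) zb" "lsub 0 B u w"
      "z = RApp zb w"
      unfolding lin_subst_def lsub_App_iff by blast
    from lsub_Bag_singleD[OF h(2)] obtain y where y: "zb = Bag {#y#}"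
      "lsub_v 0 A (rlift_v 0 v) y" by blast
    from lsub_rliftD(2)[OF y(2)] have "A = {#}" "y = v" by auto
    then show "z \<in> RApp (Bag {#v#}) ` lin_subst u 0 vs" using h y by (auto simp: lin_subst_def)
  qed
next
  show "RApp (Bag {#v#}) ` lin_subst u 0 vs \<subseteq> lin_subst (RApp (Bag {#rlift_v 0 v#}) u) 0 vs"
  proof
    fix z assume "z \<in> RApp (Bag {#v#}) ` lin_subst u 0 vs"
    then obtain w where w: "lsub 0 vs u w" "z = RApp (Bag {#v#}) w" by (auto simp: lin_subst_def)
    have "lsub 0 ({#} + vs) (RApp (Bag {#rlift_v 0 v#}) u) (RApp (Bag {#v#}) w)"
      using lsub_Bag_single[OF lsub_rlift(2)] w(1) by (rule ls_app)
    then show "z \<in> lin_subst (RApp (Bag {#rlift_v 0 v#}) u) 0 vs"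
      using w(2) by (simp add: lin_subst_def)
  qed
qed

lemma join_beta_fun:
  assumes IH: "\<And>z. rless z e \<Longrightarrow> coherent z"
    and e: "e = RApp (Bag {#RLam u#}) (Bag vs)"
    and S: "rstep (Bag {#RLam u#}) S"
  shows "NF (lin_subst u 0 vs) = NF ((\<lambda>s'. RApp s' (Bag vs)) ` S)"
proof -
  obtain U where U: "rstep u U" "S = (\<lambda>u'. Bag {#RLam u'#}) ` U"
    using rstep_Bag_single_LamD[OF S] by blast
  have E1: "rstep e (lin_subst u 0 vs)" using e beta_r by simp
  have E2: "rstep e ((\<lambda>s'. RApp s' (Bag vs)) ` S)" using e S ctx_appL_r by simp
  let ?Y = "\<Union>u'\<in>U. lin_subst u' 0 vs"
  have "NF ((\<lambda>s'. RApp s' (Bag vs)) ` S) = (\<Union>u'\<in>U. nf (RApp (Bag {#RLam u'#}) (Bag vs)))"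
    using U(2) by (simp add: NF_image image_image)
  also have "\<dots> = (\<Union>u'\<in>U. NF (lin_subst u' 0 vs))"
  proof -
    have "nf (RApp (Bag {#RLam u'#}) (Bag vs)) = NF (lin_subst u' 0 vs)" if "u' \<in> U" for u'
    proof -
      have "rless (RApp (Bag {#RLam u'#}) (Bag vs)) e" using rstep_rless(1)[OF E2] U(2) that by auto
      then show ?thesis using coherent_rstep[OF IH beta_r] by simp
    qed
    then show ?thesis by simp
  qed
  also have "\<dots> = NF ?Y" unfolding NF_def by auto
  finally have 2: "NF ((\<lambda>s'. RApp s' (Bag vs)) ` S) = NF ?Y" .
  have "NF (lin_subst u 0 vs) = NF ?Y"
  proof (rule NF_eq_if_rstep_related[OF IH])
    show "\<forall>w\<in>lin_subst u 0 vs. rless w e" using rstep_rless(1)[OF E1] by blast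
    show "\<forall>w\<in>lin_subst u 0 vs. \<exists>W. rstep w W \<and> W \<subseteq> ?Y"
    proof
      fix w assume "w \<in> lin_subst u 0 vs"
      then have "lsub 0 vs u w" by (simp add: lin_subst_def)
      from lsub_simulates_rstep(1)[OF U(1) this] obtain W where "rstep w W"
        "\<forall>w'\<in>W. \<exists>u'\<in>U. lsub 0 vs u' w'" by blast
      then show "\<exists>W. rstep w W \<and> W \<subseteq> ?Y" by (auto simp: lin_subst_def)
    qed
    show "\<forall>y\<in>?Y. \<exists>w\<in>lin_subst u 0 vs. \<exists>W. rstep w W \<and> y \<in> W"
    proof
      fix y assume "y \<in> ?Y"
      then obtain u' where "u' \<in> U" "lsub 0 vs u' y" by (auto simp: lin_subst_def)
      from lsub_reflects_rstep(1)[OF U(1) this] show "\<exists>w\<in>lin_subst u 0 vs. \<exists>W. rstep w W \<and> y \<in> W"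
        by (auto simp: lin_subst_def)
    qed
  qed
  then show ?thesis using 2 by simp
qed

lemma join_beta_arg:
  assumes IH: "\<And>z. rless z e \<Longrightarrow> coherent z"
    and e: "e = RApp (Bag {#RLam u#}) (Bag vs)"
    and T: "rstep (Bag vs) T"
  shows "NF (lin_subst u 0 vs) = NF (RApp (Bag {#RLam u#}) ` T)"
proof -
  from rstep_BagD[OF T] obtain v V' vs0 where h: "vs = add_mset v vs0" "rstep_v v V'"
    "T = (\<lambda>u'. Bag (add_mset u' vs0)) ` V'" by blast
  have E1: "rstep e (lin_subst u 0 vs)" using e beta_r by simp
  have E2: "rstep e (RApp (Bag {#RLam u#}) ` T)" using e T ctx_appR_r by simp
  let ?Y = "\<Union>v'\<in>V'. lin_subst u 0 (add_mset v' vs0)"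
  have "NF (RApp (Bag {#RLam u#}) ` T) =
    (\<Union>v'\<in>V'. nf (RApp (Bag {#RLam u#}) (Bag (add_mset v' vs0))))"
      using h(3) by (simp add: NF_image image_image)
  also have "\<dots> = (\<Union>v'\<in>V'. NF (lin_subst u 0 (add_mset v' vs0)))"
  proof -
    have "nf (RApp (Bag {#RLam u#}) (Bag (add_mset v' vs0))) =
      NF (lin_subst u 0 (add_mset v' vs0))" if "v' \<in> V'" for v'
    proof -
      have "rless (RApp (Bag {#RLam u#}) (Bag (add_mset v' vs0))) e"
        using rstep_rless(1)[OF E2] h(3) that by auto
      then show ?thesis using coherent_rstep[OF IH beta_r] by simp
    qed
    then show ?thesis by simp
  qed
  also have "\<dots> = NF ?Y" unfolding NF_def by auto
  finally have 2: "NF (RApp (Bag {#RLam u#}) ` T) = NF ?Y" .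
  have "NF (lin_subst u 0 vs) = NF ?Y"
  proof (rule NF_eq_if_rstep_related[OF IH])
    show "\<forall>w\<in>lin_subst u 0 vs. rless w e" using rstep_rless(1)[OF E1] by blast
    show "\<forall>w\<in>lin_subst u 0 vs. \<exists>W. rstep w W \<and> W \<subseteq> ?Y"
    proof
      fix w assume "w \<in> lin_subst u 0 vs"
      then have "lsub 0 (add_mset v vs0) u w" using h(1) by (simp add: lin_subst_def)
      from lsub_simulates_rstep_arg(1)[OF this refl h(2)] obtain W where "rstep w W"
        "\<forall>w'\<in>W. \<exists>v'\<in>V'. lsub 0 (add_mset v' vs0) u w'" by blast
      then show "\<exists>W. rstep w W \<and> W \<subseteq> ?Y" by (auto simp: lin_subst_def)
    qed
    show "\<forall>y\<in>?Y. \<exists>w\<in>lin_subst u 0 vs. \<exists>W. rstep w W \<and> y \<in> W"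
    proof
      fix y assume "y \<in> ?Y"
      then obtain v' where "v' \<in> V'" "lsub 0 (add_mset v' vs0) u y" by (auto simp: lin_subst_def)
      from lsub_reflects_rstep_arg(1)[OF this(2) refl h(2) this(1)] show "\<exists>w\<in>lin_subst u 0 vs. \<exists>W. rstep w W \<and> y \<in> W"
        using h(1) by (auto simp: lin_subst_def)
    qed
  qed
  then show ?thesis using 2 by simp
qed

lemma join_zero_fun:
  assumes IH: "\<And>z. rless z e \<Longrightarrow> coherent z"
    and e: "e = RApp (Bag m) t" and m: "size m \<noteq> 1"
    and S: "rstep (Bag m) S"
  shows "NF {} = NF ((\<lambda>s'. RApp s' t) ` S)"
proof -
  have E2: "rstep e ((\<lambda>s'. RApp s' t) ` S)" using e S ctx_appL_r by simp
  have "nf (RApp s' t) = {}" if s': "s' \<in> S" for s'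
  proof -
    obtain m' where m': "s' = Bag m'" "size m' = size m" using rstep_Bag_sizeD[OF S s'] by blast
    have "rless (RApp s' t) e" using rstep_rless(1)[OF E2] s' by auto
    moreover have "rstep (RApp s' t) {}" using m' m zero_r by simp
    ultimately show ?thesis using coherent_rstep[OF IH] by fastforce
  qed
  then show ?thesis by (simp add: NF_image)
qed

lemma join_zero_arg:
  assumes IH: "\<And>z. rless z e \<Longrightarrow> coherent z"
    and e: "e = RApp (Bag m) t" and m: "size m \<noteq> 1"
    and T: "rstep t T"
  shows "NF {} = NF (RApp (Bag m) ` T)"
proof -
  have E2: "rstep e (RApp (Bag m) ` T)" using e T ctx_appR_r by simp
  have "nf (RApp (Bag m) t') = {}" if "t' \<in> T" for t'
  proof -
    have "rless (RApp (Bag m) t') e" using rstep_rless(1)[OF E2] that by auto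
    moreover have "rstep (RApp (Bag m) t') {}" using m zero_r by simp
    ultimately show ?thesis using coherent_rstep[OF IH] by fastforce
  qed
  then show ?thesis by (simp add: NF_image)
qed

text \<open>Both sides reduce to a common term: the \<open>\<sigma>\<^sub>3\<close>-reduct of the \<open>\<sigma>\<^sub>1\<close>-reduct is the
  \<open>\<sigma>\<^sub>1\<close>-reduct, under the binder, of the \<open>\<sigma>\<^sub>1\<close>-reduct of the \<open>\<sigma>\<^sub>3\<close>-reduct.\<close>

lemma join_sigma1_sigma3:
  assumes IH: "\<And>z. rless z e \<Longrightarrow> coherent z"
    and e: "e = RApp (RApp (Bag {#RLam u#}) (RApp (Bag {#RLam w#}) r)) s2"
  shows "NF {RApp (Bag {#RLam (RApp u (rlift 0 s2))#}) (RApp (Bag {#RLam w#}) r)}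
       = NF {RApp (RApp (Bag {#RLam (RApp (Bag {#RLam (rlift (Suc 0) u)#}) w)#}) r) s2}"
proof -
  let ?a = "RApp (Bag {#RLam (RApp u (rlift 0 s2))#}) (RApp (Bag {#RLam w#}) r)"
  let ?b = "RApp (RApp (Bag {#RLam (RApp (Bag {#RLam (rlift (Suc 0) u)#}) w)#}) r) s2"
  let ?b1 = "RApp (Bag {#RLam (RApp (RApp (Bag {#RLam (rlift (Suc 0) u)#}) w) (rlift 0 s2))#}) r"
  let ?c = "RApp (Bag {#RLam (RApp (Bag {#RLam (RApp (rlift (Suc 0) u) (rlift 0 (rlift 0 s2)))#}) w)#}) r"
  have sa: "rless ?a e" using rstep_rless(1)[OF sigma1_r] e by simp
  have "rstep (RApp (Bag {#RLam u#}) (RApp (Bag {#RLam w#}) r))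
      {RApp (Bag {#RLam (RApp (Bag {#RLam (rlift (Suc 0) u)#}) w)#}) r}"
    using sigma3_r[of "RLam u" w r] by simp
  from rstep_rless(1)[OF ctx_appL_r[OF this]] have sb: "rless ?b e" using e by simp
  have bb1: "rstep ?b {?b1}" by (rule sigma1_r)
  have sb1: "rless ?b1 e" using rless_trans[OF rstep_rless(1)[OF bb1] sb] by simp
  have b1c: "rstep ?b1 {?c}"
    using rstep_App_Bag_Lam[OF sigma1_r[of "rlift (Suc 0) u" w "rlift 0 s2"], of r] by simp
  have "rstep ?a {RApp (Bag {#RLam (RApp (Bag {#rlift_v 0 (RLam (RApp u (rlift 0 s2)))#}) w)#}) r}"
    using sigma3_r[of "RLam (RApp u (rlift 0 s2))" w r] by simp
  then have ac: "rstep ?a {?c}" by (simp add: rlift_rlift(1)[of 0 0])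
  have "NF {?a} = NF {?c}" using NF_singleton_rstep[OF IH sa ac] .
  also have "\<dots> = NF {?b1}" using NF_singleton_rstep[OF IH sb1 b1c] by simp
  also have "\<dots> = NF {?b}" using NF_singleton_rstep[OF IH sb bb1] by simp
  finally show ?thesis .
qed

lemma join_sigma1_fun:
  assumes IH: "\<And>z. rless z e \<Longrightarrow> coherent z"
    and e: "e = RApp (RApp (Bag {#RLam u#}) s1) s2"
    and S: "rstep (RApp (Bag {#RLam u#}) s1) S"
  shows "NF {RApp (Bag {#RLam (RApp u (rlift 0 s2))#}) s1} = NF ((\<lambda>s'. RApp s' s2) ` S)"
proof -
  let ?a = "RApp (Bag {#RLam (RApp u (rlift 0 s2))#}) s1"
  have sa: "rless ?a e" using rstep_rless(1)[OF sigma1_r] e by simp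
  have sE2: "\<forall>y\<in>(\<lambda>s'. RApp s' s2) ` S. rless y e"
    using rstep_rless(1)[OF ctx_appL_r[OF S]] e by blast
  from S show ?thesis
  proof (cases rule: rstep_App_cases)
    case root
    then show ?thesis
    proof cases
      case (root_beta u' vs)
      have "NF {?a} = NF (lin_subst (RApp u (rlift 0 s2)) 0 vs)"
        using NF_singleton_rstep[OF IH sa] beta_r root_beta by simp
      then show ?thesis using root_beta lin_subst_App_rlift by simp
    next
      case (root_sigma3 v' w r)
      then show ?thesis using join_sigma1_sigma3[of e u w r s2, OF IH] e
        by (simp add: eq_commute[of "RLam u"])
    qed auto
  next
    case (AppL S0)
    obtain U where U: "rstep u U" "S0 = (\<lambda>u'. Bag {#RLam u'#}) ` U"
      using rstep_Bag_single_LamD[OF AppL(1)] by blast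
    let ?f = "\<lambda>u'. RApp (RApp (Bag {#RLam u'#}) s1) s2"
    let ?g = "\<lambda>u'. RApp (Bag {#RLam (RApp u' (rlift 0 s2))#}) s1"
    have E2f: "(\<lambda>s'. RApp s' s2) ` S = ?f ` U" using AppL(2) U(2) by (simp add: image_image)
    have "rstep ?a ((\<lambda>y. RApp (Bag {#RLam y#}) s1) ` ((\<lambda>y. RApp y (rlift 0 s2)) ` U))"
      by (rule rstep_App_Bag_Lam) (rule ctx_appL_r[OF U(1)])
    then have r: "rstep ?a (?g ` U)" by (simp add: image_image)
    have q: "\<forall>x\<in>U. rless (?f x) e \<and> rstep (?f x) {?g x}" using sE2 E2f sigma1_r by auto
    from NF_join_via[OF IH sa r q] show ?thesis using E2f by simp
  next
    case (AppR T1)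
    let ?f = "\<lambda>y. RApp (RApp (Bag {#RLam u#}) y) s2"
    let ?g = "\<lambda>y. RApp (Bag {#RLam (RApp u (rlift 0 s2))#}) y"
    have E2f: "(\<lambda>s'. RApp s' s2) ` S = ?f ` T1" using AppR(2) by (simp add: image_image)
    have r: "rstep ?a (?g ` T1)" using ctx_appR_r[OF AppR(1)] by simp
    have q: "\<forall>x\<in>T1. rless (?f x) e \<and> rstep (?f x) {?g x}" using sE2 E2f sigma1_r by auto
    from NF_join_via[OF IH sa r q] show ?thesis using E2f by simp
  qed
qed

lemma join_sigma1_arg:
  assumes IH: "\<And>z. rless z e \<Longrightarrow> coherent z"
    and e: "e = RApp (RApp (Bag {#RLam u#}) s1) s2"
    and S2: "rstep s2 S2"
  shows "NF {RApp (Bag {#RLam (RApp u (rlift 0 s2))#}) s1} =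
    NF (RApp (RApp (Bag {#RLam u#}) s1) ` S2)"
proof -
  let ?a = "RApp (Bag {#RLam (RApp u (rlift 0 s2))#}) s1"
  have E1: "rstep e {?a}" using e sigma1_r by simp
  have E2: "rstep e (RApp (RApp (Bag {#RLam u#}) s1) ` S2)" using e S2 ctx_appR_r by simp
  have sa: "rless ?a e" using rstep_rless(1)[OF E1] by simp
  have sE2: "\<forall>y\<in>RApp (RApp (Bag {#RLam u#}) s1) ` S2. rless y e"
    using rstep_rless(1)[OF E2] by blast
  let ?f = "\<lambda>y. RApp (RApp (Bag {#RLam u#}) s1) y"
  let ?g = "\<lambda>y. RApp (Bag {#RLam (RApp u (rlift 0 y))#}) s1"
  have "rstep ?a ((\<lambda>y. RApp (Bag {#RLam y#}) s1) ` (RApp u ` (rlift 0 ` S2)))"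
    by (rule rstep_App_Bag_Lam) (rule ctx_appR_r[OF rstep_rlift(1)[OF S2]])
  then have r: "rstep ?a (?g ` S2)" by (simp add: image_image)
  have q: "\<forall>x\<in>S2. rless (?f x) e \<and> rstep (?f x) {?g x}" using sE2 sigma1_r by auto
  from NF_join_via[OF IH sa r q] show ?thesis by simp
qed

lemma join_sigma3_fun:
  assumes IH: "\<And>z. rless z e \<Longrightarrow> coherent z"
    and e: "e = RApp (Bag {#v#}) (RApp (Bag {#RLam u#}) s0)"
    and S: "rstep (Bag {#v#}) S"
  shows "NF {RApp (Bag {#RLam (RApp (Bag {#rlift_v 0 v#}) u)#}) s0} =
    NF ((\<lambda>s'. RApp s' (RApp (Bag {#RLam u#}) s0)) ` S)"
proof -
  let ?a = "RApp (Bag {#RLam (RApp (Bag {#rlift_v 0 v#}) u)#}) s0"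
  have E1: "rstep e {?a}" using e sigma3_r by simp
  have E2: "rstep e ((\<lambda>s'. RApp s' (RApp (Bag {#RLam u#}) s0)) ` S)" using e S ctx_appL_r by simp
  have sa: "rless ?a e" using rstep_rless(1)[OF E1] by simp
  have sE2: "\<forall>y\<in>(\<lambda>s'. RApp s' (RApp (Bag {#RLam u#}) s0)) ` S. rless y e"
    using rstep_rless(1)[OF E2] by blast
  obtain V where V: "rstep_v v V" "S = (\<lambda>v'. Bag {#v'#}) ` V" using rstep_Bag_singleD[OF S] by blast
  let ?f = "\<lambda>y. RApp (Bag {#y#}) (RApp (Bag {#RLam u#}) s0)"
  let ?g = "\<lambda>y. RApp (Bag {#RLam (RApp (Bag {#rlift_v 0 y#}) u)#}) s0"
  have E2f: "(\<lambda>s'. RApp s' (RApp (Bag {#RLam u#}) s0)) ` S = ?f ` V"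
    using V(2) by (simp add: image_image)
  have "rstep ?a ((\<lambda>y. RApp (Bag {#RLam y#}) s0) ` ((\<lambda>y'. RApp (Bag {#y'#}) u) ` (rlift_v 0 ` V)))"
    by (rule rstep_App_Bag_Lam) (rule rstep_App_Bag_single[OF rstep_rlift(2)[OF V(1)]])
  then have r: "rstep ?a (?g ` V)" by (simp add: image_image)
  have q: "\<forall>x\<in>V. rless (?f x) e \<and> rstep (?f x) {?g x}" using sE2 E2f sigma3_r by auto
  from NF_join_via[OF IH sa r q] show ?thesis using E2f by simp
qed

text \<open>As for \<open>join_sigma1_sigma3\<close>, with two \<open>\<sigma>\<^sub>3\<close>-steps.\<close>

lemma join_sigma3_sigma3:
  assumes IH: "\<And>z. rless z e \<Longrightarrow> coherent z"
    and e: "e = RApp (Bag {#v#}) (RApp (Bag {#RLam u#}) (RApp (Bag {#RLam w#}) r))"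
  shows "NF {RApp (Bag {#RLam (RApp (Bag {#rlift_v 0 v#}) u)#}) (RApp (Bag {#RLam w#}) r)}
       = NF {RApp (Bag {#v#}) (RApp (Bag {#RLam (RApp (Bag {#RLam (rlift (Suc 0) u)#}) w)#}) r)}"
proof -
  let ?a = "RApp (Bag {#RLam (RApp (Bag {#rlift_v 0 v#}) u)#}) (RApp (Bag {#RLam w#}) r)"
  let ?b = "RApp (Bag {#v#}) (RApp (Bag {#RLam (RApp (Bag {#RLam (rlift (Suc 0) u)#}) w)#}) r)"
  let ?b1 = "RApp (Bag {#RLam (RApp (Bag {#rlift_v 0 v#}) (RApp (Bag {#RLam (rlift (Suc 0) u)#}) w))#}) r"
  let ?c = "RApp (Bag {#RLam (RApp (Bag {#RLam (RApp (Bag {#rlift_v 0 (rlift_v 0 v)#}) (rlift (Suc 0) u))#}) w)#}) r"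
  have sa: "rless ?a e" using rstep_rless(1)[OF sigma3_r] e by simp
  have "rstep (RApp (Bag {#RLam u#}) (RApp (Bag {#RLam w#}) r))
      {RApp (Bag {#RLam (RApp (Bag {#RLam (rlift (Suc 0) u)#}) w)#}) r}"
    using sigma3_r[of "RLam u" w r] by simp
  from rstep_rless(1)[OF ctx_appR_r[OF this]] have sb: "rless ?b e" using e by simp
  have bb1: "rstep ?b {?b1}" by (rule sigma3_r)
  have sb1: "rless ?b1 e" using rless_trans[OF rstep_rless(1)[OF bb1] sb] by simp
  have b1c: "rstep ?b1 {?c}"
    using rstep_App_Bag_Lam[OF sigma3_r[of "rlift_v 0 v" "rlift (Suc 0) u" w], of r] by simp
  have "rstep ?a {RApp (Bag {#RLam (RApp (Bag {#rlift_v 0 (RLam (RApp (Bag {#rlift_v 0 v#}) u))#}) w)#}) r}"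
    using sigma3_r[of "RLam (RApp (Bag {#rlift_v 0 v#}) u)" w r] by simp
  then have ac: "rstep ?a {?c}" by (simp add: rlift_rlift(2)[of 0 0])
  have "NF {?a} = NF {?c}" using NF_singleton_rstep[OF IH sa ac] .
  also have "\<dots> = NF {?b1}" using NF_singleton_rstep[OF IH sb1 b1c] by simp
  also have "\<dots> = NF {?b}" using NF_singleton_rstep[OF IH sb bb1] by simp
  finally show ?thesis .
qed

lemma join_sigma3_arg:
  assumes IH: "\<And>z. rless z e \<Longrightarrow> coherent z"
    and e: "e = RApp (Bag {#v#}) (RApp (Bag {#RLam u#}) s0)"
    and T: "rstep (RApp (Bag {#RLam u#}) s0) T"
  shows "NF {RApp (Bag {#RLam (RApp (Bag {#rlift_v 0 v#}) u)#}) s0} = NF (RApp (Bag {#v#}) ` T)"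
proof -
  let ?a = "RApp (Bag {#RLam (RApp (Bag {#rlift_v 0 v#}) u)#}) s0"
  have sa: "rless ?a e" using rstep_rless(1)[OF sigma3_r] e by simp
  have sE2: "\<forall>y\<in>RApp (Bag {#v#}) ` T. rless y e"
    using rstep_rless(1)[OF ctx_appR_r[OF T]] e by blast
  from T show ?thesis
  proof (cases rule: rstep_App_cases)
    case root
    then show ?thesis
    proof cases
      case (root_beta u' vs)
      have "NF {?a} = NF (lin_subst (RApp (Bag {#rlift_v 0 v#}) u) 0 vs)"
        using NF_singleton_rstep[OF IH sa] beta_r root_beta by simp
      then show ?thesis using root_beta lin_subst_App_Bag_rlift by simp
    next
      case (root_sigma3 v' w r)
      then show ?thesis using join_sigma3_sigma3[of e v u w r, OF IH] e
        by (simp add: eq_commute[of "RLam u"])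
    qed auto
  next
    case (AppL S0)
    obtain U where U: "rstep u U" "S0 = (\<lambda>u'. Bag {#RLam u'#}) ` U"
      using rstep_Bag_single_LamD[OF AppL(1)] by blast
    let ?f = "\<lambda>u'. RApp (Bag {#v#}) (RApp (Bag {#RLam u'#}) s0)"
    let ?g = "\<lambda>u'. RApp (Bag {#RLam (RApp (Bag {#rlift_v 0 v#}) u')#}) s0"
    have E2f: "RApp (Bag {#v#}) ` T = ?f ` U" using AppL(2) U(2) by (simp add: image_image)
    have "rstep ?a ((\<lambda>y. RApp (Bag {#RLam y#}) s0) ` (RApp (Bag {#rlift_v 0 v#}) ` U))"
      by (rule rstep_App_Bag_Lam) (rule ctx_appR_r[OF U(1)])
    then have r: "rstep ?a (?g ` U)" by (simp add: image_image)
    have q: "\<forall>x\<in>U. rless (?f x) e \<and> rstep (?f x) {?g x}" using sE2 E2f sigma3_r by auto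
    from NF_join_via[OF IH sa r q] show ?thesis using E2f by simp
  next
    case (AppR T1)
    let ?f = "\<lambda>y. RApp (Bag {#v#}) (RApp (Bag {#RLam u#}) y)"
    let ?g = "\<lambda>y. RApp (Bag {#RLam (RApp (Bag {#rlift_v 0 v#}) u)#}) y"
    have E2f: "RApp (Bag {#v#}) ` T = ?f ` T1" using AppR(2) by (simp add: image_image)
    have r: "rstep ?a (?g ` T1)" using ctx_appR_r[OF AppR(1)] by simp
    have q: "\<forall>x\<in>T1. rless (?f x) e \<and> rstep (?f x) {?g x}" using sE2 E2f sigma3_r by auto
    from NF_join_via[OF IH sa r q] show ?thesis using E2f by simp
  qed
qed

lemma NF_joinable_root_AppL:
  assumes IH: "\<And>z. rless z (RApp s t) \<Longrightarrow> coherent z"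
    and "root_step (RApp s t) E" and S: "rstep s S"
  shows "NF E = NF ((\<lambda>s'. RApp s' t) ` S)"
  using assms(2)
proof cases
  case (root_beta u vs)
  then show ?thesis using join_beta_fun[OF IH _ S[unfolded root_beta]] by simp
next
  case (root_zero m)
  then show ?thesis using join_zero_fun[OF IH _ _ S[unfolded root_zero]] by simp
next
  case (root_sigma1 u s1)
  then show ?thesis using join_sigma1_fun[OF IH _ S[unfolded root_sigma1]] by simp
next
  case (root_sigma3 v u s0)
  then show ?thesis using join_sigma3_fun[OF IH _ S[unfolded root_sigma3]] by simp
qed

lemma NF_joinable_root_AppR:
  assumes IH: "\<And>z. rless z (RApp s t) \<Longrightarrow> coherent z"
    and "root_step (RApp s t) E" and T: "rstep t T"
  shows "NF E = NF (RApp s ` T)"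
  using assms(2)
proof cases
  case (root_beta u vs)
  then show ?thesis using join_beta_arg[OF IH _ T[unfolded root_beta]] by simp
next
  case (root_zero m)
  then show ?thesis using join_zero_arg[OF IH _ _ T] by simp
next
  case (root_sigma1 u s1)
  then show ?thesis using join_sigma1_arg[OF IH _ T] by simp
next
  case (root_sigma3 v u s0)
  then show ?thesis using join_sigma3_arg[OF IH _ T[unfolded root_sigma3]] by simp
qed

lemma NF_joinable_App:
  assumes IH: "\<And>z. rless z (RApp s t) \<Longrightarrow> coherent z"
    and E1: "rstep (RApp s t) E1" and E2: "rstep (RApp s t) E2"
  shows "NF E1 = NF E2"
proof -
  have s: "coherent s" and t: "coherent t" using IH rless_AppL rless_AppR by auto
  have hE1: "\<forall>x\<in>E1. hcoherent x" and hE2: "\<forall>x\<in>E2. hcoherent x"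
    using rstep_hcoherent[OF IH] E1 E2 by auto
  have root_joinable: "NF E = NF E'" if "root_step (RApp s t) E" "rstep (RApp s t) E'" for E E'
    using that(2)
  proof (cases rule: rstep_App_cases)
    case root
    then show ?thesis using root_step_unique[OF that(1) root] by simp
  qed (use NF_joinable_root_AppL[OF IH that(1)] NF_joinable_root_AppR[OF IH that(1)] in simp_all)
  from E1 show ?thesis
  proof (cases rule: rstep_App_cases)
    case root
    then show ?thesis using root_joinable E2 by blast
  next
    case L1: (AppL S1)
    from E2 show ?thesis
    proof (cases rule: rstep_App_cases)
      case root
      then show ?thesis using root_joinable E1 by metis
    next
      case (AppL S2)
      then show ?thesis using NF_AppL[OF s L1(1)] NF_AppL[OF s AppL(1)] L1 hE1 hE2 by auto
    next
      case (AppR T2)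
      then show ?thesis using NF_AppL[OF s L1(1)] NF_AppR[OF t AppR(1)] L1 hE1 hE2 by auto
    qed
  next
    case R1: (AppR T1)
    from E2 show ?thesis
    proof (cases rule: rstep_App_cases)
      case root
      then show ?thesis using root_joinable E1 by metis
    next
      case (AppL S2)
      then show ?thesis using NF_AppR[OF t R1(1)] NF_AppL[OF s AppL(1)] R1 hE1 hE2 by auto
    next
      case (AppR T2)
      then show ?thesis using NF_AppR[OF t R1(1)] NF_AppR[OF t AppR(1)] R1 hE1 hE2 by auto
    qed
  qed
qed

lemma NF_joinable_Bag:
  assumes IH: "\<And>z. rless z (Bag m) \<Longrightarrow> coherent z"
    and E1: "rstep (Bag m) E1" and E2: "rstep (Bag m) E2"
  shows "NF E1 = NF E2"
proof -
  have "\<And>w. RLam w \<in># m \<Longrightarrow> coherent w" using IH rless_Bag_Lam by simp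
  then show ?thesis
    using NF_rstep_Bag[OF E1 rstep_hcoherent[OF IH E1]] NF_rstep_Bag[OF E2 rstep_hcoherent[OF IH E2]] by simp
qed

lemma NF_joinable:
  assumes "\<And>z. rless z e \<Longrightarrow> coherent z" "rstep e E1" "rstep e E2"
  shows "NF E1 = NF E2"
proof (cases e)
  case (RApp s t)
  then show ?thesis using NF_joinable_App[of s t E1 E2] assms by simp
next
  case (Bag m)
  then show ?thesis using NF_joinable_Bag[of m E1 E2] assms by simp
qed

theorem coherent_all: "coherent e"
proof (induction e rule: wf_induct_rule[OF wf_rless])
  case (1 e)
  then have IH: "\<And>z. rless z e \<Longrightarrow> coherent z" by simp
  show ?case using coherent_if_NF_joinable[OF IH NF_joinable[OF IH]] .
qed

lemma hcoherent_all: "hcoherent e"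
  unfolding hcoherent_def using coherent_all by blast

lemma nf_rstep: "rstep e E \<Longrightarrow> nf e = NF E"
  using coherent_rstep[OF coherent_all] by simp

section \<open>Taylor expansion\<close>

lemma mset_image_preimage: "(\<forall>u\<in>#m. \<exists>u0. P u0 \<and> u = f u0) \<Longrightarrow>
  \<exists>m0. m = image_mset f m0 \<and> (\<forall>u0\<in>#m0. P u0)"
proof (induction m)
  case empty then show ?case by (intro exI[of _ "{#}"]) simp
next
  case (add u m)
  then obtain m0 where m0: "m = image_mset f m0" "\<forall>u0\<in>#m0. P u0" by auto
  from add.prems obtain u0 where "P u0" "u = f u0" by auto
  then show ?case using m0 by (intro exI[of _ "add_mset u0 m0"]) auto
qed

lemma taylor_lift: "taylor (lift k M) = rlift k ` taylor M"
proof (induction M arbitrary: k)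
  case (Var i)
  show ?case
  proof (intro set_eqI iffI)
    fix x assume "x \<in> taylor (lift k (Var i))"
    then obtain n where "x = Bag (replicate_mset n (RVar (if i < k then i else Suc i)))"
      by (auto split: if_splits)
    then show "x \<in> rlift k ` taylor (Var i)"
      by (intro image_eqI[of _ _ "Bag (replicate_mset n (RVar i))"]) auto
  next
    fix x assume "x \<in> rlift k ` taylor (Var i)"
    then show "x \<in> taylor (lift k (Var i))" by auto
  qed
next
  case (Lam N)
  show ?case
  proof
    show "taylor (lift k (Lam N)) \<subseteq> rlift k ` taylor (Lam N)"
    proof
      fix x assume "x \<in> taylor (lift k (Lam N))"
      then obtain m where m: "x = Bag m" "\<forall>u\<in>#m. \<exists>t\<in>taylor (lift (Suc k) N). u = RLam t" by auto
      have "\<forall>u\<in>#m. \<exists>u0. (\<exists>t\<in>taylor N. u0 = RLam t) \<and> u = rlift_v k u0"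
      proof
        fix u assume "u \<in># m"
        then obtain t where "t \<in> taylor N" "u = RLam (rlift (Suc k) t)" using m(2) Lam by auto
        then show "\<exists>u0. (\<exists>t\<in>taylor N. u0 = RLam t) \<and> u = rlift_v k u0"
          by (intro exI[of _ "RLam t"]) auto
      qed
      from mset_image_preimage[OF this] obtain m0 where "m = image_mset (rlift_v k) m0"
        "\<forall>u0\<in>#m0. \<exists>t\<in>taylor N. u0 = RLam t" by blast
      then show "x \<in> rlift k ` taylor (Lam N)"
        using m(1) by (auto intro!: image_eqI[of _ _ "Bag m0"])
    qed
  next
    show "rlift k ` taylor (Lam N) \<subseteq> taylor (lift k (Lam N))"
    proof
      fix x assume "x \<in> rlift k ` taylor (Lam N)"
      then obtain m where m: "x = Bag (image_mset (rlift_v k) m)"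
        "\<forall>u\<in>#m. \<exists>t\<in>taylor N. u = RLam t" by auto
      have "\<forall>u\<in>#image_mset (rlift_v k) m. \<exists>t\<in>taylor (lift (Suc k) N). u = RLam t"
      proof
        fix u assume "u \<in># image_mset (rlift_v k) m"
        then obtain u0 where "u0 \<in># m" "u = rlift_v k u0" by auto
        then obtain t where "t \<in> taylor N" "u = RLam (rlift (Suc k) t)" using m(2) by auto
        then show "\<exists>t\<in>taylor (lift (Suc k) N). u = RLam t" using Lam by auto
      qed
      then show "x \<in> taylor (lift k (Lam N))" using m(1) by simp
    qed
  qed
next
  case (App P Q)
  show ?case
  proof
    show "taylor (lift k (App P Q)) \<subseteq> rlift k ` taylor (App P Q)"
    proof
      fix x assume "x \<in> taylor (lift k (App P Q))"
      then obtain s t where st: "x = RApp s t" "s \<in> taylor (lift k P)"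
        "t \<in> taylor (lift k Q)" by auto
      then obtain s0 t0 where "s0 \<in> taylor P" "s = rlift k s0" "t0 \<in> taylor Q" "t = rlift k t0"
        using App by auto
      then show "x \<in> rlift k ` taylor (App P Q)"
        using st(1) by (intro image_eqI[of _ _ "RApp s0 t0"]) auto
    qed
  next
    show "rlift k ` taylor (App P Q) \<subseteq> taylor (lift k (App P Q))" using App by auto
  qed
qed

lemma is_val_lift: "is_val V \<Longrightarrow> is_val (lift k V)"
  by (cases V) auto

lemma taylor_val_bag: "is_val V \<Longrightarrow> x \<in> taylor V \<Longrightarrow> \<exists>vs. x = Bag vs"
  by (cases V) auto

lemma taylor_val_empty: "is_val V \<Longrightarrow> Bag {#} \<in> taylor V"
  by (cases V) (auto intro: exI[of _ 0])

text \<open>The expansion of a value is a set of bags closed under sums and sub-bags; this is what makes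
  linear substitution of its bags agree with the expansion of a substitution.\<close>

lemma taylor_val_plus: "is_val V \<Longrightarrow> Bag a \<in> taylor V \<Longrightarrow> Bag b \<in> taylor V \<Longrightarrow> Bag (a + b) \<in> taylor V"
proof (cases V)
  case (Var x)
  assume "Bag a \<in> taylor V" "Bag b \<in> taylor V"
  then obtain n1 n2 where "a = replicate_mset n1 (RVar x)" "b = replicate_mset n2 (RVar x)"
    using Var by auto
  moreover have "replicate_mset n1 y + replicate_mset n2 y =
    replicate_mset (n1 + n2) y" for y :: rval
    by (induction n1) auto
  ultimately have "a + b = replicate_mset (n1 + n2) (RVar x)" by simp
  then show ?thesis using Var by auto
qed auto

lemma taylor_val_sub: "is_val V \<Longrightarrow> Bag (a + b) \<in> taylor V \<Longrightarrow> Bag a \<in> taylor V"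
proof (cases V)
  case (Var x)
  assume "Bag (a + b) \<in> taylor V"
  then obtain n where n: "a + b = replicate_mset n (RVar x)" using Var by auto
  have "a \<subseteq># replicate_mset n (RVar x)" using n by (metis mset_subset_eq_add_left)
  then obtain k where "a = replicate_mset k (RVar x)" by (rule msubseteq_replicate_msetE)
  then show ?thesis using Var by auto
qed auto

lemma taylor_lift_bag: "is_val V \<Longrightarrow> Bag ws' \<in> taylor (lift 0 V) \<longleftrightarrow>
  (\<exists>ws. Bag ws \<in> taylor V \<and> ws' = image_mset (rlift_v 0) ws)"
proof
  assume a: "is_val V" "Bag ws' \<in> taylor (lift 0 V)"
  then obtain x where x: "x \<in> taylor V" "Bag ws' = rlift 0 x" using taylor_lift by auto
  then obtain ws where "x = Bag ws" using taylor_val_bag a(1) by blast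
  then show "\<exists>ws. Bag ws \<in> taylor V \<and> ws' = image_mset (rlift_v 0) ws" using x by auto
next
  assume "\<exists>ws. Bag ws \<in> taylor V \<and> ws' = image_mset (rlift_v 0) ws"
  then show "Bag ws' \<in> taylor (lift 0 V)" using taylor_lift by force
qed

lemma lsub_replicateD: "lsub k vs (Bag (replicate_mset n (RVar i))) t' \<Longrightarrow>
  (if i = k then t' = Bag vs \<and> size vs = n else vs = {#} \<and>
    t' = Bag (replicate_mset n (RVar (if i < k then i else i - 1))))"
proof (induction n arbitrary: vs t')
  case 0
  then show ?case using lsub_Bag_emptyD by auto
next
  case (Suc n)
  from Suc.prems have "lsub k vs (Bag (add_mset (RVar i) (replicate_mset n (RVar i)))) t'" by simp
  from lsub_Bag_add_msetD[OF this] obtain A1 A2 u' m' where h: "vs = A1 + A2"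
    "lsub_v k A1 (RVar i) u'"
    "lsub k A2 (Bag (replicate_mset n (RVar i))) (Bag m')" "t' = Bag (add_mset u' m')" by blast
  from Suc.IH[OF h(3)] h(2) show ?case
    using h(1,4) unfolding lsub_Var_iff by (auto split: if_splits)
qed

lemma lsub_replicate_hit: "size vs = n \<Longrightarrow> lsub k vs (Bag (replicate_mset n (RVar k))) (Bag vs)"
proof (induction n arbitrary: vs)
  case 0
  then show ?case using ls_nil by simp
next
  case (Suc n)
  then obtain v vs0 where vs: "vs = add_mset v vs0" by (metis size_eq_Suc_imp_eq_union)
  then have "size vs0 = n" using Suc.prems by simp
  from ls_bag[OF ls_hit Suc.IH[OF this]] show ?case using vs by simp
qed

lemma lsub_replicate_miss: "i \<noteq> k \<Longrightarrow>
  lsub k {#} (Bag (replicate_mset n (RVar i))) (Bag (replicate_mset n (RVar (if i < k then i else i - 1))))"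
proof (induction n)
  case 0
  then show ?case using ls_nil by simp
next
  case (Suc n)
  from ls_bag[OF ls_var[OF Suc.prems] Suc.IH[OF Suc.prems]] show ?case by simp
qed

lemma taylor_subst_Var:
  assumes Var: "is_val V"
  shows "taylor (subst (Var i) k V) = {t'. \<exists>t\<in>taylor (Var i). \<exists>vs. Bag vs \<in> taylor V \<and>
    lsub k vs t t'}"
proof (cases "i = k")
  case True
  show ?thesis
  proof (intro set_eqI iffI)
    fix x assume "x \<in> taylor (subst (Var i) k V)"
    then have x: "x \<in> taylor V" using True by simp
    then obtain vs where "x = Bag vs" using taylor_val_bag Var by blast
    then show "x \<in> {t'. \<exists>t\<in>taylor (Var i). \<exists>vs. Bag vs \<in> taylor V \<and> lsub k vs t t'}"
      using x lsub_replicate_hit[of vs "size vs" k] True by auto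
  next
    fix x assume "x \<in> {t'. \<exists>t\<in>taylor (Var i). \<exists>vs. Bag vs \<in> taylor V \<and> lsub k vs t t'}"
    then obtain n vs where "Bag vs \<in> taylor V"
      "lsub k vs (Bag (replicate_mset n (RVar i))) x" by auto
    then show "x \<in> taylor (subst (Var i) k V)" using lsub_replicateD True by fastforce
  qed
next
  case False
  show ?thesis
  proof (intro set_eqI iffI)
    fix x assume "x \<in> taylor (subst (Var i) k V)"
    then obtain n where "x = Bag (replicate_mset n (RVar (if i < k then i else i - 1)))"
      using False by (auto split: if_splits)
    moreover have "lsub k {#} (Bag (replicate_mset n (RVar i))) (Bag (replicate_mset n (RVar (if i < k then i else i - 1))))"
      using lsub_replicate_miss[OF False, of n] .
    moreover have "Bag (replicate_mset n (RVar i)) \<in> taylor (Var i)" by auto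
    ultimately show "x \<in> {t'. \<exists>t\<in>taylor (Var i). \<exists>vs. Bag vs \<in> taylor V \<and> lsub k vs t t'}"
      using taylor_val_empty[OF Var] by blast
  next
    fix x assume "x \<in> {t'. \<exists>t\<in>taylor (Var i). \<exists>vs. Bag vs \<in> taylor V \<and> lsub k vs t t'}"
    then obtain n vs where "lsub k vs (Bag (replicate_mset n (RVar i))) x" by auto
    then have "x = Bag (replicate_mset n (RVar (if i < k then i else i - 1)))"
      using lsub_replicateD False by fastforce
    then show "x \<in> taylor (subst (Var i) k V)" using False by auto
  qed
qed

lemma lsub_Lam_bag_taylorD: "lsub k vs (Bag m0) t' \<Longrightarrow> \<forall>u\<in>#m0. \<exists>t0\<in>A. u = RLam t0 \<Longrightarrow>
  Bag vs \<in> taylor V \<Longrightarrow> is_val V \<Longrightarrow>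
  \<exists>m'. t' = Bag m' \<and> (\<forall>u'\<in>#m'. \<exists>t0\<in>A. \<exists>ws. Bag ws \<in> taylor V \<and>
    (\<exists>t1. lsub (Suc k) (image_mset (rlift_v 0) ws) t0 t1 \<and> u' = RLam t1))"
proof (induction m0 arbitrary: vs t')
  case empty
  then have "t' = Bag {#}" using lsub_Bag_emptyD by blast
  then show ?case by simp
next
  case (add u m0)
  from lsub_Bag_add_msetD[OF add.prems(1)] obtain A1 A2 u' m' where h: "vs = A1 + A2"
    "lsub_v k A1 u u'"
    "lsub k A2 (Bag m0) (Bag m')" "t' = Bag (add_mset u' m')" by blast
  obtain t0 where t0: "t0 \<in> A" "u = RLam t0" using add.prems(2) by auto
  obtain t1 where t1: "u' = RLam t1" "lsub (Suc k) (image_mset (rlift_v 0) A1) t0 t1"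
    using h(2)[unfolded t0(2)] unfolding lsub_Lam_iff by blast
  have A1V: "Bag A1 \<in> taylor V" using taylor_val_sub[OF add.prems(4)] add.prems(3) h(1) by blast
  have A2V: "Bag A2 \<in> taylor V" using taylor_val_sub[OF add.prems(4), of A2 A1] add.prems(3) h(1)
    by (simp add: add.commute)
  obtain m'' where "Bag m' = Bag m''"
    "\<forall>u'\<in>#m''. \<exists>t0\<in>A. \<exists>ws. Bag ws \<in> taylor V \<and>
      (\<exists>t1. lsub (Suc k) (image_mset (rlift_v 0) ws) t0 t1 \<and> u' = RLam t1)"
    using add.IH[OF h(3) _ A2V add.prems(4)] add.prems(2) by auto
  then show ?case using h(4) t0 t1 A1V by auto
qed

lemma lsub_Lam_bag_taylor_exI: "\<forall>u'\<in>#m'. \<exists>t0\<in>A. \<exists>ws. Bag ws \<in> taylor V \<and>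
  (\<exists>t1. lsub (Suc k) (image_mset (rlift_v 0) ws) t0 t1 \<and> u' = RLam t1) \<Longrightarrow>
  is_val V \<Longrightarrow> \<exists>m0 vs. (\<forall>u\<in>#m0. \<exists>t0\<in>A. u = RLam t0) \<and> Bag vs \<in> taylor V \<and> lsub k vs (Bag m0) (Bag m')"
proof (induction m')
  case empty
  then show ?case using ls_nil taylor_val_empty by (intro exI[of _ "{#}"] exI[of _ "{#}"]) auto
next
  case (add u' m')
  then obtain m0 vs where IH: "\<forall>u\<in>#m0. \<exists>t0\<in>A. u = RLam t0" "Bag vs \<in> taylor V"
    "lsub k vs (Bag m0) (Bag m')" by auto
  from add.prems(1) obtain t0 ws t1 where h: "t0 \<in> A" "Bag ws \<in> taylor V"
    "lsub (Suc k) (image_mset (rlift_v 0) ws) t0 t1" "u' = RLam t1"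
    by auto
  have "lsub k (ws + vs) (Bag (add_mset (RLam t0) m0)) (Bag (add_mset u' m'))"
    using ls_bag[OF ls_lam[OF h(3)] IH(3)] h(4) by simp
  moreover have "Bag (ws + vs) \<in> taylor V" using taylor_val_plus[OF add.prems(2) h(2) IH(2)] .
  ultimately show ?case using IH(1) h(1)
    by (intro exI[of _ "add_mset (RLam t0) m0"] exI[of _ "ws + vs"]) auto
qed

lemma taylor_subst: "is_val V \<Longrightarrow> taylor (subst M k V) = {t'. \<exists>t\<in>taylor M. \<exists>vs. Bag vs \<in> taylor V \<and>
  lsub k vs t t'}"
proof (induction M arbitrary: k V)
  case (Var i)
  then show ?case by (rule taylor_subst_Var)
next
  case (Lam N)
  have IH: "taylor (subst N (Suc k) (lift 0 V)) = {t1. \<exists>t0\<in>taylor N. \<exists>ws. Bag ws \<in> taylor V \<and>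
    lsub (Suc k) (image_mset (rlift_v 0) ws) t0 t1}"
    using Lam.IH[OF is_val_lift[OF Lam.prems]] taylor_lift_bag[OF Lam.prems] by auto
  show ?case
  proof (intro set_eqI iffI)
    fix x assume "x \<in> taylor (subst (Lam N) k V)"
    then obtain m' where m': "x = Bag m'"
      "\<forall>u\<in>#m'. \<exists>t\<in>taylor (subst N (Suc k) (lift 0 V)). u = RLam t" by auto
    have "\<forall>u'\<in>#m'. \<exists>t0\<in>taylor N. \<exists>ws. Bag ws \<in> taylor V \<and>
      (\<exists>t1. lsub (Suc k) (image_mset (rlift_v 0) ws) t0 t1 \<and> u' = RLam t1)"
      using m'(2) unfolding IH by fastforce
    from lsub_Lam_bag_taylor_exI[OF this Lam.prems] obtain m0 vs where "\<forall>u\<in>#m0. \<exists>t0\<in>taylor N. u =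
      RLam t0" "Bag vs \<in> taylor V" "lsub k vs (Bag m0) (Bag m')"
      by blast
    then show "x \<in> {t'. \<exists>t\<in>taylor (Lam N). \<exists>vs. Bag vs \<in> taylor V \<and> lsub k vs t t'}"
      using m'(1) by auto
  next
    fix x assume "x \<in> {t'. \<exists>t\<in>taylor (Lam N). \<exists>vs. Bag vs \<in> taylor V \<and> lsub k vs t t'}"
    then obtain m0 vs where h: "\<forall>u\<in>#m0. \<exists>t0\<in>taylor N. u = RLam t0" "Bag vs \<in> taylor V"
      "lsub k vs (Bag m0) x" by auto
    from lsub_Lam_bag_taylorD[OF h(3) h(1) h(2) Lam.prems] obtain m' where m': "x = Bag m'"
      "\<forall>u'\<in>#m'. \<exists>t0\<in>taylor N. \<exists>ws. Bag ws \<in> taylor V \<and>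
        (\<exists>t1. lsub (Suc k) (image_mset (rlift_v 0) ws) t0 t1 \<and> u' = RLam t1)"
      by blast
    have "\<forall>u\<in>#m'. \<exists>t\<in>taylor (subst N (Suc k) (lift 0 V)). u = RLam t"
      using m'(2) unfolding IH by fastforce
    then show "x \<in> taylor (subst (Lam N) k V)" using m'(1) by simp
  qed
next
  case (App P Q)
  show ?case
  proof (intro set_eqI iffI)
    fix x assume "x \<in> taylor (subst (App P Q) k V)"
    then obtain s t where st: "x = RApp s t" "s \<in> taylor (subst P k V)"
      "t \<in> taylor (subst Q k V)" by auto
    obtain s0 A where s0: "s0 \<in> taylor P" "Bag A \<in> taylor V" "lsub k A s0 s"
      using st(2) App.IH(1)[OF App.prems] by auto
    obtain t0 B where t0: "t0 \<in> taylor Q" "Bag B \<in> taylor V" "lsub k B t0 t"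
      using st(3) App.IH(2)[OF App.prems] by auto
    have "lsub k (A + B) (RApp s0 t0) x" using ls_app[OF s0(3) t0(3)] st(1) by simp
    moreover have "Bag (A + B) \<in> taylor V" using taylor_val_plus[OF App.prems s0(2) t0(2)] .
    ultimately show "x \<in> {t'. \<exists>t\<in>taylor (App P Q). \<exists>vs. Bag vs \<in> taylor V \<and> lsub k vs t t'}"
      using s0(1) t0(1) by auto
  next
    fix x assume "x \<in> {t'. \<exists>t\<in>taylor (App P Q). \<exists>vs. Bag vs \<in> taylor V \<and> lsub k vs t t'}"
    then obtain s0 t0 vs where h: "s0 \<in> taylor P" "t0 \<in> taylor Q" "Bag vs \<in> taylor V"
      "lsub k vs (RApp s0 t0) x" by auto
    then obtain A B s t where h2: "vs = A + B" "lsub k A s0 s" "lsub k B t0 t" "x = RApp s t"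
      unfolding lsub_App_iff by blast
    have "Bag A \<in> taylor V" using taylor_val_sub[OF App.prems] h(3) h2(1) by blast
    moreover have "Bag B \<in> taylor V"
      using taylor_val_sub[OF App.prems, of B A] h(3) h2(1) by (simp add: add.commute)
    ultimately show "x \<in> taylor (subst (App P Q) k V)" using h h2 App.IH[OF App.prems] by auto
  qed
qed

lemma NF_taylor_App: "NF (taylor (App M N)) =
  (\<Union>s'\<in>NF (taylor M). \<Union>t'\<in>NF (taylor N). nf (RApp s' t'))"
proof -
  have "NF (taylor (App M N)) = (\<Union>s\<in>taylor M. \<Union>t\<in>taylor N. nf (RApp s t))" unfolding NF_def by auto
  also have "\<dots> = (\<Union>s\<in>taylor M. \<Union>t\<in>taylor N. nf_parts s t)" using nf_App[OF hcoherent_all] by simp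
  also have "\<dots> = (\<Union>s'\<in>NF (taylor M). \<Union>t'\<in>NF (taylor N). nf (RApp s' t'))"
    unfolding nf_parts_def NF_def by blast
  finally show ?thesis .
qed

lemma rel_mset_right_ex: "rel_mset R m m' \<Longrightarrow> u' \<in># m' \<Longrightarrow> \<exists>u\<in>#m. R u u'"
  by (induction rule: rel_mset_induct) auto

lemma rel_mset_nf_val_exI:
  assumes "\<forall>u\<in>#m'. \<exists>t\<in>NF A. u = RLam t"
  shows "\<exists>m. (\<forall>u\<in>#m. \<exists>t\<in>A. u = RLam t) \<and> rel_mset (\<lambda>u u'. u' \<in> nf_val u) m m'"
  using assms
proof (induction m')
  case empty
  then show ?case by (intro exI[of _ "{#}"]) (simp add: rel_mset_Zero)
next
  case (add u' m')
  then obtain m where m: "\<forall>u\<in>#m. \<exists>t\<in>A. u = RLam t" "rel_mset (\<lambda>u u'. u' \<in> nf_val u) m m'" by auto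
  from add.prems obtain t' where t': "t' \<in> NF A" "u' = RLam t'" by auto
  then obtain t where t: "t \<in> A" "t' \<in> nf t" unfolding NF_def by auto
  have "rel_mset (\<lambda>u u'. u' \<in> nf_val u) (add_mset (RLam t) m) (add_mset u' m')"
    using rel_mset_Plus[where a="RLam t" and b=u', OF _ m(2)] t t' by simp
  then show ?case using m(1) t(1) by (intro exI[of _ "add_mset (RLam t) m"]) auto
qed

lemma NF_taylor_Lam: "NF (taylor (Lam M)) = {Bag m | m. \<forall>u\<in>#m. \<exists>t\<in>NF (taylor M). u = RLam t}"
proof (intro set_eqI iffI)
  fix x assume "x \<in> NF (taylor (Lam M))"
  then obtain m where m: "\<forall>u\<in>#m. \<exists>t\<in>taylor M. u = RLam t" "x \<in> nf (Bag m)" unfolding NF_def by auto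
  then obtain m' where m': "x = Bag m'" "rel_mset (\<lambda>u u'. u' \<in> nf_val u) m m'"
    using nf_Bag[OF hcoherent_all] unfolding nf_bag_def by auto
  have "\<forall>u'\<in>#m'. \<exists>t\<in>NF (taylor M). u' = RLam t"
  proof
    fix u' assume "u' \<in># m'"
    from rel_mset_right_ex[OF m'(2) this] obtain u where "u \<in># m" "u' \<in> nf_val u" by blast
    then obtain t where "t \<in> taylor M" "u = RLam t" "u' \<in> RLam ` nf t" using m(1) by auto
    then show "\<exists>t\<in>NF (taylor M). u' = RLam t" unfolding NF_def by auto
  qed
  then show "x \<in> {Bag m | m. \<forall>u\<in>#m. \<exists>t\<in>NF (taylor M). u = RLam t}" using m'(1) by auto
next
  fix x assume "x \<in> {Bag m | m. \<forall>u\<in>#m. \<exists>t\<in>NF (taylor M). u = RLam t}"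
  then obtain m' where m': "x = Bag m'" "\<forall>u\<in>#m'. \<exists>t\<in>NF (taylor M). u = RLam t" by auto
  then obtain m where m: "\<forall>u\<in>#m. \<exists>t\<in>taylor M. u = RLam t" "rel_mset (\<lambda>u u'. u' \<in> nf_val u) m m'"
    using rel_mset_nf_val_exI by blast
  have "x \<in> nf (Bag m)" using nf_Bag[OF hcoherent_all] m(2) m'(1) unfolding nf_bag_def by auto
  moreover have "Bag m \<in> taylor (Lam M)" using m(1) by simp
  ultimately show "x \<in> NF (taylor (Lam M))" unfolding NF_def by blast
qed

lemma nf_zero_App: "size m \<noteq> 1 \<Longrightarrow> nf (RApp (Bag m) t) = {}"
  using nf_rstep[OF zero_r] by simp

lemma nf_zero_AppL: "size m \<noteq> 1 \<Longrightarrow> nf (RApp (RApp (Bag m) s) t) = {}"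
proof -
  assume "size m \<noteq> 1"
  then have "rstep (RApp (Bag m) s) {}" by (rule zero_r)
  from ctx_appL_r[OF this, of t] show ?thesis using nf_rstep by simp
qed

lemma nf_zero_AppR: "size m \<noteq> 1 \<Longrightarrow> nf (RApp u (RApp (Bag m) s)) = {}"
proof -
  assume "size m \<noteq> 1"
  then have "rstep (RApp (Bag m) s) {}" by (rule zero_r)
  from ctx_appR_r[OF this, of u] show ?thesis using nf_rstep by simp
qed

lemma nf_zero_Lam: "size m \<noteq> 1 \<Longrightarrow> nf (RApp (Bag {#RLam (RApp (Bag m) t)#}) s) = {}"
proof -
  assume "size m \<noteq> 1"
  then have "rstep (RApp (Bag m) t) {}" by (rule zero_r)
  from rstep_App_Bag_Lam[OF this, of s] show ?thesis using nf_rstep by simp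
qed

lemma Lam_bag_single: "\<forall>u\<in>#m. \<exists>t\<in>A. u = RLam t \<Longrightarrow> size m = 1 \<Longrightarrow> \<exists>t\<in>A. m = {#RLam t#}"
  using size_1_singleton_mset by force

lemma NF_taylor_beta: "is_val V \<Longrightarrow> NF (taylor (App (Lam M) V)) = NF (taylor (subst M 0 V))"
proof (intro set_eqI iffI)
  fix z assume V: "is_val V" and "z \<in> NF (taylor (App (Lam M) V))"
  then obtain m y where h: "\<forall>u\<in>#m. \<exists>t\<in>taylor M. u = RLam t" "y \<in> taylor V" "z \<in> nf (RApp (Bag m) y)"
    unfolding NF_def by auto
  have "size m = 1" using h(3) nf_zero_App by (cases "size m = 1") auto
  then obtain t where t: "t \<in> taylor M" "m = {#RLam t#}" using Lam_bag_single h(1) by blast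
  obtain vs where vs: "y = Bag vs" using taylor_val_bag[OF V h(2)] by blast
  have "nf (RApp (Bag m) y) = NF (lin_subst t 0 vs)" using nf_rstep[OF beta_r] t(2) vs by simp
  then obtain t' where "lsub 0 vs t t'" "z \<in> nf t'"
    using h(3) unfolding NF_def lin_subst_def by auto
  moreover have "t' \<in> taylor (subst M 0 V)"
    using taylor_subst[OF V] t(1) h(2) vs \<open>lsub 0 vs t t'\<close> by auto
  ultimately show "z \<in> NF (taylor (subst M 0 V))" unfolding NF_def by auto
next
  fix z assume V: "is_val V" and "z \<in> NF (taylor (subst M 0 V))"
  then obtain t' where t': "t' \<in> taylor (subst M 0 V)" "z \<in> nf t'" unfolding NF_def by auto
  then obtain t vs where h: "t \<in> taylor M" "Bag vs \<in> taylor V" "lsub 0 vs t t'"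
    using taylor_subst[OF V] by auto
  have "nf (RApp (Bag {#RLam t#}) (Bag vs)) = NF (lin_subst t 0 vs)"
    using nf_rstep[OF beta_r] by simp
  then have "z \<in> nf (RApp (Bag {#RLam t#}) (Bag vs))"
    using h(3) t'(2) unfolding NF_def lin_subst_def by auto
  moreover have "RApp (Bag {#RLam t#}) (Bag vs) \<in> taylor (App (Lam M) V)" using h(1,2) by auto
  ultimately show "z \<in> NF (taylor (App (Lam M) V))" unfolding NF_def by blast
qed

lemma NF_taylor_sigma1_redex: "NF (taylor (App (App (Lam M) N) P)) =
    {z. \<exists>t\<in>taylor M. \<exists>s\<in>taylor N. \<exists>p\<in>taylor P. z \<in>
      nf (RApp (Bag {#RLam (RApp t (rlift 0 p))#}) s)}" (is "_ = ?G")
proof (intro set_eqI iffI)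
  fix z assume "z \<in> NF (taylor (App (App (Lam M) N) P))"
  then obtain m s p where h: "\<forall>u\<in>#m. \<exists>t\<in>taylor M. u = RLam t" "s \<in> taylor N" "p \<in> taylor P"
    "z \<in> nf (RApp (RApp (Bag m) s) p)" unfolding NF_def by auto
  have "size m = 1" using h(4) nf_zero_AppL by (cases "size m = 1") auto
  then obtain t where t: "t \<in> taylor M" "m = {#RLam t#}" using Lam_bag_single h(1) by blast
  have "nf (RApp (RApp (Bag m) s) p) = nf (RApp (Bag {#RLam (RApp t (rlift 0 p))#}) s)"
    using nf_rstep[OF sigma1_r] t(2) by (simp add: NF_def)
  then show "z \<in> ?G" using h t by auto
next
  fix z assume "z \<in> ?G"
  then obtain t s p where h: "t \<in> taylor M" "s \<in> taylor N" "p \<in> taylor P"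
    "z \<in> nf (RApp (Bag {#RLam (RApp t (rlift 0 p))#}) s)"
    by auto
  have "nf (RApp (RApp (Bag {#RLam t#}) s) p) = nf (RApp (Bag {#RLam (RApp t (rlift 0 p))#}) s)"
    using nf_rstep[OF sigma1_r] by (simp add: NF_def)
  moreover have "RApp (RApp (Bag {#RLam t#}) s) p \<in> taylor (App (App (Lam M) N) P)"
    using h(1-3) by auto
  ultimately show "z \<in> NF (taylor (App (App (Lam M) N) P))"
    using h(4) unfolding NF_def by (metis UN_I)
qed

lemma NF_taylor_sigma1_contractum: "NF (taylor (App (Lam (App M (lift 0 P))) N)) =
    {z. \<exists>t\<in>taylor M. \<exists>s\<in>taylor N. \<exists>p\<in>taylor P. z \<in>
      nf (RApp (Bag {#RLam (RApp t (rlift 0 p))#}) s)}" (is "_ = ?G")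
proof (intro set_eqI iffI)
  fix z assume "z \<in> NF (taylor (App (Lam (App M (lift 0 P))) N))"
  then obtain m s where h: "\<forall>u\<in>#m. \<exists>t\<in>taylor (App M (lift 0 P)). u = RLam t" "s \<in> taylor N"
    "z \<in> nf (RApp (Bag m) s)" unfolding NF_def by auto
  have "size m = 1" using h(3) nf_zero_App by (cases "size m = 1") auto
  then obtain t'' where t'': "t'' \<in> taylor (App M (lift 0 P))" "m = {#RLam t''#}"
    using Lam_bag_single h(1) by blast
  then obtain t p where "t \<in> taylor M" "p \<in> taylor P" "t'' = RApp t (rlift 0 p)"
    using taylor_lift by auto
  then show "z \<in> ?G" using h t'' by auto
next
  fix z assume "z \<in> ?G"
  then obtain t s p where h: "t \<in> taylor M" "s \<in> taylor N" "p \<in> taylor P"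
    "z \<in> nf (RApp (Bag {#RLam (RApp t (rlift 0 p))#}) s)"
    by auto
  have "RApp t (rlift 0 p) \<in> taylor (App M (lift 0 P))" using h(1,3) taylor_lift by auto
  then have "RApp (Bag {#RLam (RApp t (rlift 0 p))#}) s \<in> taylor (App (Lam (App M (lift 0 P))) N)"
    using h(2) by auto
  then show "z \<in> NF (taylor (App (Lam (App M (lift 0 P))) N))"
    using h(4) unfolding NF_def by (metis UN_I)
qed

lemma NF_taylor_sigma3_redex:
  assumes V: "is_val V"
  shows "NF (taylor (App V (App (Lam M) N))) =
    {z. \<exists>v t s. Bag {#v#} \<in> taylor V \<and> t \<in> taylor M \<and> s \<in> taylor N \<and>
      z \<in> nf (RApp (Bag {#RLam (RApp (Bag {#rlift_v 0 v#}) t)#}) s)}" (is "_ = ?G")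
proof (intro set_eqI iffI)
  fix z assume "z \<in> NF (taylor (App V (App (Lam M) N)))"
  then obtain y m s where h: "y \<in> taylor V" "\<forall>u\<in>#m. \<exists>t\<in>taylor M. u = RLam t" "s \<in> taylor N"
    "z \<in> nf (RApp y (RApp (Bag m) s))" unfolding NF_def by auto
  obtain vs where vs: "y = Bag vs" using taylor_val_bag[OF V h(1)] by blast
  have "size vs = 1" using h(4) vs nf_zero_App by (cases "size vs = 1") auto
  then obtain v where v: "vs = {#v#}" using size_1_singleton_mset by blast
  have "size m = 1" using h(4) nf_zero_AppR by (cases "size m = 1") auto
  then obtain t where t: "t \<in> taylor M" "m = {#RLam t#}" using Lam_bag_single h(2) by blast
  have "nf (RApp y (RApp (Bag m) s)) = nf (RApp (Bag {#RLam (RApp (Bag {#rlift_v 0 v#}) t)#}) s)"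
    using nf_rstep[OF sigma3_r] t(2) vs v by (simp add: NF_def)
  then show "z \<in> ?G" using h t vs v by auto
next
  fix z assume "z \<in> ?G"
  then obtain v t s where h: "Bag {#v#} \<in> taylor V" "t \<in> taylor M" "s \<in> taylor N"
    "z \<in> nf (RApp (Bag {#RLam (RApp (Bag {#rlift_v 0 v#}) t)#}) s)" by auto
  have "nf (RApp (Bag {#v#}) (RApp (Bag {#RLam t#}) s)) =
    nf (RApp (Bag {#RLam (RApp (Bag {#rlift_v 0 v#}) t)#}) s)"
    using nf_rstep[OF sigma3_r] by (simp add: NF_def)
  moreover have "RApp (Bag {#v#}) (RApp (Bag {#RLam t#}) s) \<in> taylor (App V (App (Lam M) N))"
    using h(1-3) by auto
  ultimately show "z \<in> NF (taylor (App V (App (Lam M) N)))"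
    using h(4) unfolding NF_def by (metis UN_I)
qed

lemma NF_taylor_sigma3_contractum:
  assumes V: "is_val V"
  shows "NF (taylor (App (Lam (App (lift 0 V) M)) N)) =
    {z. \<exists>v t s. Bag {#v#} \<in> taylor V \<and> t \<in> taylor M \<and> s \<in> taylor N \<and>
      z \<in> nf (RApp (Bag {#RLam (RApp (Bag {#rlift_v 0 v#}) t)#}) s)}" (is "_ = ?G")
proof (intro set_eqI iffI)
  fix z assume "z \<in> NF (taylor (App (Lam (App (lift 0 V) M)) N))"
  then obtain m s where h: "\<forall>u\<in>#m. \<exists>t\<in>taylor (App (lift 0 V) M). u = RLam t" "s \<in> taylor N"
    "z \<in> nf (RApp (Bag m) s)" unfolding NF_def by auto
  have "size m = 1" using h(3) nf_zero_App by (cases "size m = 1") auto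
  then obtain t'' where t'': "t'' \<in> taylor (App (lift 0 V) M)" "m = {#RLam t''#}"
    using Lam_bag_single h(1) by blast
  then obtain b t where bt: "b \<in> taylor (lift 0 V)" "t \<in> taylor M" "t'' = RApp b t" by auto
  obtain ws where ws: "Bag ws \<in> taylor V" "b = Bag (image_mset (rlift_v 0) ws)"
    using taylor_lift_bag[OF V] bt(1) taylor_val_bag[OF is_val_lift[OF V] bt(1)] by auto
  have "size ws = 1"
  proof (rule ccontr)
    assume "size ws \<noteq> 1"
    then have "nf (RApp (Bag m) s) = {}"
      using nf_zero_Lam[of "image_mset (rlift_v 0) ws" t s] t'' bt(3) ws(2) by simp
    then show False using h(3) by simp
  qed
  then obtain v where v: "ws = {#v#}" using size_1_singleton_mset by blast
  show "z \<in> ?G" using h(2,3) t'' bt ws v by auto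
next
  fix z assume "z \<in> ?G"
  then obtain v t s where h: "Bag {#v#} \<in> taylor V" "t \<in> taylor M" "s \<in> taylor N"
    "z \<in> nf (RApp (Bag {#RLam (RApp (Bag {#rlift_v 0 v#}) t)#}) s)" by auto
  have "Bag {#rlift_v 0 v#} \<in> taylor (lift 0 V)"
    using taylor_lift_bag[OF V, of "{#rlift_v 0 v#}"] h(1) by auto
  then have "RApp (Bag {#RLam (RApp (Bag {#rlift_v 0 v#}) t)#}) s \<in>
    taylor (App (Lam (App (lift 0 V) M)) N)"
    using h(2,3) by auto
  then show "z \<in> NF (taylor (App (Lam (App (lift 0 V) M)) N))"
    using h(4) unfolding NF_def by (metis UN_I)
qed

lemma NF_taylor_sigma1: "NF (taylor (App (App (Lam M) N) P)) =
  NF (taylor (App (Lam (App M (lift 0 P))) N))"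
  using NF_taylor_sigma1_redex NF_taylor_sigma1_contractum by simp

lemma NF_taylor_sigma3:
  "is_val V \<Longrightarrow> NF (taylor (App V (App (Lam M) N))) = NF (taylor (App (Lam (App (lift 0 V) M)) N))"
  using NF_taylor_sigma3_redex NF_taylor_sigma3_contractum by simp

lemma NF_taylor_step_v: "step_v M N \<Longrightarrow> NF (taylor M) = NF (taylor N)"
proof (induction rule: step_v.induct)
  case (beta_v V M)
  then show ?case by (rule NF_taylor_beta)
next
  case (sigma1 M N P)
  then show ?case by (rule NF_taylor_sigma1)
next
  case (sigma3 V M N)
  then show ?case by (rule NF_taylor_sigma3)
next
  case (ctx_lam M M')
  then show ?case using NF_taylor_Lam by simp
next
  case (ctx_appL M M' N)
  then show ?case using NF_taylor_App by simp
next
  case (ctx_appR N N' M)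
  then show ?case using NF_taylor_App by simp
qed

theorem corollary4p5:
  fixes M N :: lterm
  assumes "eq_v M N"
  shows "NF (taylor M) = NF (taylor N)"
  using assms
proof (induction rule: equivclp_induct)
  case base
  then show ?case by simp
next
  case (step y z)
  then show ?case using NF_taylor_step_v by auto
qed

end
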